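(* Let $P$ be a continuous poset and $(T_\varepsilon)_{\varepsilon\ge0}$ a superlinear family of Scott-continuous translations satisfying TR1 and TR2. Then for all Scott sheaves $\mathcal F,\mathcal G$ on $P^\sigma$ and all persistence modules $M,N$ over $P$: (i) $d_\sigma(\mathcal F,\mathcal G)=d_a(j^*\mathcal F,j^*\mathcal G)=d_a(j^!\mathcal F,j^!\mathcal G)$; (ii) $d_a(M,N)=d_a(\underline M,\underline N)$; (iii) $d_a(M,N)=d_a(\overline M,\overline N)$; (iv) $d_a(M,N)=d_\sigma(j_*M,j_*N)$.
   Context: Let $P$ be a poset (as a category, $p\to q$ iff $p\le q$). A subset is directed if nonempty and any two elements have an upper bound in it. $x\ll y$ means: for every directed $D$ whose supremum exists with $y\le\sup D$, some $d\in D$ satisfies $x\le d$. $P$ is continuous if for each $p$ the set $\{x:x\ll p\}$ is directed with supremum $p$. $U_p=\{x\ge p\}$. $U$ is Scott-open if it is an up-set meeting every directed set whose supremum exists and lies in $U$; $P^\sigma$ is $P$ with this topology, $\mathrm{Int}$ the Scott interior. A map $f\colon P\to P$ is Scott-continuous if order-preserving and $f(\sup D)=\sup f(D)$ for directed $D$ with existing supremum (equivalently, continuous on $P^\sigma$). A translation is an order-preserving $T$ with $p\le T(p)$; a family $(T_\varepsilon)_{\varepsilon\ge0}$ is superlinear if $T_\varepsilon(T_\delta(p))\le T_{\varepsilon+\delta}(p)$. TR1: each $T_\varepsilon$ is an order-isomorphism. TR2: $x\ll T_\varepsilon(x)$ for all $x$ and $\varepsilon>0$. $k$ is a commutative ring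 with unity; persistence modules are functors from $P$ to $k$-modules; Scott sheaves are sheaves of $k$-modules on $P^\sigma$. For a persistence module, $T^*M=M\circ T$ with natural morphism $M\to T^*M$ given by $M(p\le T(p))$; for a Scott sheaf, $T^*\mathcal F$ is the sheaf inverse image along $T\colon P^\sigma\to P^\sigma$, with natural morphism $\mathcal F\to T^*\mathcal F$ induced on stalks by $\mathcal F_p\to\mathcal F_{T(p)}$ (every Scott-open neighbourhood of $p$ contains $T(p)$). Objects $A,B$ (both persistence modules or both Scott sheaves) are $\varepsilon$-interleaved if there are morphisms $f\colon A\to T_\varepsilon^*B$, $g\colon B\to T_\varepsilon^*A$ with $T_\varepsilon^*(g)\circ f$ and $T_\varepsilon^*(f)\circ g$ equal to the natural morphisms $A\to T_\varepsilon^*T_\varepsilon^*A$ and $B\to T_\varepsilon^*T_\varepsilon^*B$. The interleaving distance is the infimum of such $\varepsilon$ ($\infty$ if none): $d_a$ for persistence modules, $d_\sigma$ for Scott sheaves. For $M(U)=\varprojlim_{x\in U}M_x$: $j_*M$ is the Scott sheaf $U\mapsto M(U)$; $j^*\mathcal F$ is the persistence module of stalks $p\mapsto\mathcal F_p$; $j^!\mathcal F$ is $p\mapsto\mathcal F(\mathrm{Int}\,U_p)$ with restrictions. $\underline M_p=\varprojlim_{x\gg p}M_x$, $\overline M_p=\varinjlim_{x\ll p}M_x$. *)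

theory Defs
  imports "HOL-Algebra.Module" "HOL-Library.Extended_Real"
begin

definition directed :: "'p::order set \<Rightarrow> bool" where
  "directed D \<longleftrightarrow> D \<noteq> {} \<and> (\<forall>x\<in>D. \<forall>y\<in>D. \<exists>z\<in>D. x \<le> z \<and> y \<le> z)"

definition is_sup :: "'p::order set \<Rightarrow> 'p \<Rightarrow> bool" where
  "is_sup D s \<longleftrightarrow> (\<forall>x\<in>D. x \<le> s) \<and> (\<forall>u. (\<forall>x\<in>D. x \<le> u) \<longrightarrow> s \<le> u)"

definition way_below :: "'p::order \<Rightarrow> 'p \<Rightarrow> bool" where
  "way_below x y \<longleftrightarrow>
     (\<forall>D s. directed D \<and> is_sup D s \<and> y \<le> s \<longrightarrow> (\<exists>d\<in>D. x \<le> d))"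

definition continuous_poset :: "'p::order itself \<Rightarrow> bool" where
  "continuous_poset (_ :: 'p itself) \<longleftrightarrow>
     (\<forall>p::'p. directed {x. way_below x p} \<and> is_sup {x. way_below x p} p)"

definition upset :: "'p::order \<Rightarrow> 'p set" where
  "upset p = {x. p \<le> x}"

definition scott_open :: "'p::order set \<Rightarrow> bool" where
  "scott_open U \<longleftrightarrow> (\<forall>x\<in>U. \<forall>y. x \<le> y \<longrightarrow> y \<in> U) \<and>
     (\<forall>D s. directed D \<and> is_sup D s \<and> s \<in> U \<longrightarrow> D \<inter> U \<noteq> {})"

definition scott_interior :: "'p::order set \<Rightarrow> 'p set" where
  "scott_interior A = \<Union>{U. scott_open U \<and> U \<subseteq> A}"

definition scott_continuous :: "('p::order \<Rightarrow> 'p) \<Rightarrow> bool" where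
  "scott_continuous f \<longleftrightarrow> mono f \<and>
     (\<forall>D s. directed D \<and> is_sup D s \<longrightarrow> is_sup (f ` D) (f s))"

definition translation :: "('p::order \<Rightarrow> 'p) \<Rightarrow> bool" where
  "translation T \<longleftrightarrow> mono T \<and> (\<forall>p. p \<le> T p)"

definition superlinear :: "(real \<Rightarrow> 'p::order \<Rightarrow> 'p) \<Rightarrow> bool" where
  "superlinear T \<longleftrightarrow>
     (\<forall>\<epsilon> \<delta> p. 0 \<le> \<epsilon> \<and> 0 \<le> \<delta> \<longrightarrow> T \<epsilon> (T \<delta> p) \<le> T (\<epsilon> + \<delta>) p)"

definition order_iso :: "('p::order \<Rightarrow> 'p) \<Rightarrow> bool" where
  "order_iso f \<longleftrightarrow> bij f \<and> (\<forall>x y. f x \<le> f y \<longleftrightarrow> x \<le> y)"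

definition TR1 :: "(real \<Rightarrow> 'p::order \<Rightarrow> 'p) \<Rightarrow> bool" where
  "TR1 T \<longleftrightarrow> (\<forall>\<epsilon>\<ge>0. order_iso (T \<epsilon>))"

definition TR2 :: "(real \<Rightarrow> 'p::order \<Rightarrow> 'p) \<Rightarrow> bool" where
  "TR2 T \<longleftrightarrow> (\<forall>\<epsilon>>0. \<forall>x. way_below x (T \<epsilon> x))"

section \<open>Module homomorphisms (k-linear maps), equality of maps is on the carrier\<close>

definition module_hom ::
  "('k, 'r) ring_scheme \<Rightarrow> ('k, 'a) module \<Rightarrow> ('k, 'b) module \<Rightarrow> ('a \<Rightarrow> 'b) set" where
  "module_hom R M N = {f. (\<forall>x\<in>carrier M. f x \<in> carrier N) \<and>
     (\<forall>x\<in>carrier M. \<forall>y\<in>carrier M. f (add M x y) = add N (f x) (f y)) \<and>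
     (\<forall>r\<in>carrier R. \<forall>x\<in>carrier M. f (smult M r x) = smult N r (f x))}"

text \<open>A diagram: index set I, relation rel, objects Mo i, maps Ma i j : Mo i -> Mo j for rel i j.\<close>

definition lim_carrier :: "'i set \<Rightarrow> ('i \<Rightarrow> 'i \<Rightarrow> bool) \<Rightarrow> ('i \<Rightarrow> ('k,'m) module)
     \<Rightarrow> ('i \<Rightarrow> 'i \<Rightarrow> 'm \<Rightarrow> 'm) \<Rightarrow> ('i \<Rightarrow> 'm) set" where
  "lim_carrier I rel Mo Ma = {f. (\<forall>i\<in>I. f i \<in> carrier (Mo i)) \<and>
      (\<forall>i\<in>I. \<forall>j\<in>I. rel i j \<longrightarrow> Ma i j (f i) = f j) \<and> (\<forall>i. i \<notin> I \<longrightarrow> f i = undefined)}"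

definition lim_module :: "'i set \<Rightarrow> ('i \<Rightarrow> 'i \<Rightarrow> bool) \<Rightarrow> ('i \<Rightarrow> ('k,'m) module)
     \<Rightarrow> ('i \<Rightarrow> 'i \<Rightarrow> 'm \<Rightarrow> 'm) \<Rightarrow> ('k, 'i \<Rightarrow> 'm) module" where
  "lim_module I rel Mo Ma =
     \<lparr>carrier = lim_carrier I rel Mo Ma,
      mult = undefined, one = undefined,
      zero = (\<lambda>i. if i \<in> I then zero (Mo i) else undefined),
      add = (\<lambda>f g i. if i \<in> I then add (Mo i) (f i) (g i) else undefined),
      smult = (\<lambda>r f i. if i \<in> I then smult (Mo i) r (f i) else undefined)\<rparr>"

text \<open>Restriction of limits along an inclusion of index sets J \<subseteq> I.\<close>
definition lim_restr :: "'i set \<Rightarrow> ('i \<Rightarrow> 'm) \<Rightarrow> ('i \<Rightarrow> 'm)" where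
  "lim_restr J f = (\<lambda>i. if i \<in> J then f i else undefined)"

definition dsum_module :: "'i set \<Rightarrow> ('i \<Rightarrow> ('k,'m) module) \<Rightarrow> ('k, 'i \<Rightarrow> 'm) module" where
  "dsum_module I Mo =
     \<lparr>carrier = {v. (\<forall>i\<in>I. v i \<in> carrier (Mo i)) \<and> (\<forall>i. i \<notin> I \<longrightarrow> v i = undefined)
                   \<and> finite {i\<in>I. v i \<noteq> zero (Mo i)}},
      mult = undefined, one = undefined,
      zero = (\<lambda>i. if i \<in> I then zero (Mo i) else undefined),
      add = (\<lambda>f g i. if i \<in> I then add (Mo i) (f i) (g i) else undefined),
      smult = (\<lambda>r f i. if i \<in> I then smult (Mo i) r (f i) else undefined)\<rparr>"

definition dsum_ins :: "'i set \<Rightarrow> ('i \<Rightarrow> ('k,'m) module) \<Rightarrow> 'i \<Rightarrow> 'm \<Rightarrow> ('i \<Rightarrow> 'm)" where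
  "dsum_ins I Mo i a = (\<lambda>j. if j = i then a else if j \<in> I then zero (Mo j) else undefined)"

definition colim_gens :: "'i set \<Rightarrow> ('i \<Rightarrow> 'i \<Rightarrow> bool) \<Rightarrow> ('i \<Rightarrow> ('k,'m) module)
     \<Rightarrow> ('i \<Rightarrow> 'i \<Rightarrow> 'm \<Rightarrow> 'm) \<Rightarrow> ('i \<Rightarrow> 'm) set" where
  "colim_gens I rel Mo Ma = {a_minus (dsum_module I Mo) (dsum_ins I Mo j (Ma i j a)) (dsum_ins I Mo i a)
       | i j a. i \<in> I \<and> j \<in> I \<and> rel i j \<and> a \<in> carrier (Mo i)}"

definition colim_rel :: "('k,'r) ring_scheme \<Rightarrow> 'i set \<Rightarrow> ('i \<Rightarrow> 'i \<Rightarrow> bool)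
     \<Rightarrow> ('i \<Rightarrow> ('k,'m) module) \<Rightarrow> ('i \<Rightarrow> 'i \<Rightarrow> 'm \<Rightarrow> 'm) \<Rightarrow> ('i \<Rightarrow> 'm) set" where
  "colim_rel R I rel Mo Ma =
     \<Inter>{S. Module.submodule S R (dsum_module I Mo) \<and> colim_gens I rel Mo Ma \<subseteq> S}"

text \<open>Quotient module M / K, elements are cosets.\<close>
definition qclass :: "('k,'m) module \<Rightarrow> 'm set \<Rightarrow> 'm \<Rightarrow> 'm set" where
  "qclass M K v = {w \<in> carrier M. a_minus M w v \<in> K}"

definition quot_module :: "('k,'m) module \<Rightarrow> 'm set \<Rightarrow> ('k, 'm set) module" where
  "quot_module M K =
     \<lparr>carrier = qclass M K ` carrier M,
      mult = undefined, one = undefined,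
      zero = qclass M K (zero M),
      add = (\<lambda>A B. qclass M K (add M (SOME a. a \<in> A) (SOME b. b \<in> B))),
      smult = (\<lambda>r A. qclass M K (smult M r (SOME a. a \<in> A)))\<rparr>"

definition colim_module :: "('k,'r) ring_scheme \<Rightarrow> 'i set \<Rightarrow> ('i \<Rightarrow> 'i \<Rightarrow> bool)
     \<Rightarrow> ('i \<Rightarrow> ('k,'m) module) \<Rightarrow> ('i \<Rightarrow> 'i \<Rightarrow> 'm \<Rightarrow> 'm) \<Rightarrow> ('k, ('i \<Rightarrow> 'm) set) module" where
  "colim_module R I rel Mo Ma = quot_module (dsum_module I Mo) (colim_rel R I rel Mo Ma)"

text \<open>Induced map of colimits along an inclusion of index sets I \<subseteq> J (same diagram).\<close>
definition colim_ext :: "('k,'r) ring_scheme \<Rightarrow> 'i set \<Rightarrow> 'i set \<Rightarrow> ('i \<Rightarrow> 'i \<Rightarrow> bool)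
     \<Rightarrow> ('i \<Rightarrow> ('k,'m) module) \<Rightarrow> ('i \<Rightarrow> 'i \<Rightarrow> 'm \<Rightarrow> 'm) \<Rightarrow> ('i \<Rightarrow> 'm) set \<Rightarrow> ('i \<Rightarrow> 'm) set" where
  "colim_ext R I J rel Mo Ma A =
     qclass (dsum_module J Mo) (colim_rel R J rel Mo Ma)
       (let v = (SOME v. v \<in> A) in
        (\<lambda>i. if i \<in> I then v i else if i \<in> J then zero (Mo i) else undefined))"

text \<open>A persistence module: objects p \<mapsto> M_p and maps M(p \<le> q).\<close>
type_synonym ('p, 'k, 'm) pmod = "('p \<Rightarrow> ('k, 'm) module) \<times> ('p \<Rightarrow> 'p \<Rightarrow> 'm \<Rightarrow> 'm)"

definition persistence_module :: "('k,'r) ring_scheme \<Rightarrow> ('p::order, 'k, 'm) pmod \<Rightarrow> bool" where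
  "persistence_module R M \<longleftrightarrow>
     (\<forall>p. Module.module R (fst M p)) \<and>
     (\<forall>p q. p \<le> q \<longrightarrow> snd M p q \<in> module_hom R (fst M p) (fst M q)) \<and>
     (\<forall>p. \<forall>x\<in>carrier (fst M p). snd M p p x = x) \<and>
     (\<forall>p q r. p \<le> q \<and> q \<le> r \<longrightarrow> (\<forall>x\<in>carrier (fst M p). snd M q r (snd M p q x) = snd M p r x))"

definition pm_morph :: "('k,'r) ring_scheme \<Rightarrow> ('p::order, 'k, 'a) pmod \<Rightarrow> ('p, 'k, 'b) pmod
     \<Rightarrow> ('p \<Rightarrow> 'a \<Rightarrow> 'b) \<Rightarrow> bool" where
  "pm_morph R M N f \<longleftrightarrow>
     (\<forall>p. f p \<in> module_hom R (fst M p) (fst N p)) \<and>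
     (\<forall>p q. p \<le> q \<longrightarrow> (\<forall>x\<in>carrier (fst M p). f q (snd M p q x) = snd N p q (f p x)))"

definition pm_pull :: "('p \<Rightarrow> 'p) \<Rightarrow> ('p::order, 'k, 'm) pmod \<Rightarrow> ('p, 'k, 'm) pmod" where
  "pm_pull T M = (\<lambda>p. fst M (T p), \<lambda>p q. snd M (T p) (T q))"

text \<open>f : M \<rightarrow> T^*N, g : N \<rightarrow> T^*M with T^*(g) \<circ> f = (M \<rightarrow> T^*T^*M) and symmetrically;
  (T^* g)_p = g_{T p} and the natural morphism M \<rightarrow> T^*T^*M at p is M(p \<le> T(T p)).\<close>
definition pm_interleaved :: "('k,'r) ring_scheme \<Rightarrow> ('p \<Rightarrow> 'p) \<Rightarrow> ('p::order, 'k, 'a) pmod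
     \<Rightarrow> ('p, 'k, 'b) pmod \<Rightarrow> bool" where
  "pm_interleaved R T M N \<longleftrightarrow> (\<exists>f g.
     pm_morph R M (pm_pull T N) f \<and> pm_morph R N (pm_pull T M) g \<and>
     (\<forall>p. \<forall>x\<in>carrier (fst M p). g (T p) (f p x) = snd M p (T (T p)) x) \<and>
     (\<forall>p. \<forall>y\<in>carrier (fst N p). f (T p) (g p y) = snd N p (T (T p)) y))"

definition d_a :: "('k,'r) ring_scheme \<Rightarrow> (real \<Rightarrow> 'p \<Rightarrow> 'p) \<Rightarrow> ('p::order, 'k, 'a) pmod
     \<Rightarrow> ('p, 'k, 'b) pmod \<Rightarrow> ereal" where
  "d_a R T M N = Inf {ereal \<epsilon> | \<epsilon>. 0 \<le> \<epsilon> \<and> pm_interleaved R (T \<epsilon>) M N}"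

text \<open>A presheaf on P^sigma: sections F(U) for Scott-open U, restrictions F(U) \<rightarrow> F(V) for V \<subseteq> U.\<close>
type_synonym ('p, 'k, 'm) psh = "('p set \<Rightarrow> ('k, 'm) module) \<times> ('p set \<Rightarrow> 'p set \<Rightarrow> 'm \<Rightarrow> 'm)"

definition scott_presheaf :: "('k,'r) ring_scheme \<Rightarrow> ('p::order, 'k, 'm) psh \<Rightarrow> bool" where
  "scott_presheaf R F \<longleftrightarrow>
     (\<forall>U. scott_open U \<longrightarrow> Module.module R (fst F U)) \<and>
     (\<forall>U V. scott_open U \<and> scott_open V \<and> V \<subseteq> U \<longrightarrow>
        snd F U V \<in> module_hom R (fst F U) (fst F V)) \<and>
     (\<forall>U. scott_open U \<longrightarrow> (\<forall>x\<in>carrier (fst F U). snd F U U x = x)) \<and>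
     (\<forall>U V W. scott_open U \<and> scott_open V \<and> scott_open W \<and> W \<subseteq> V \<and> V \<subseteq> U \<longrightarrow>
        (\<forall>x\<in>carrier (fst F U). snd F V W (snd F U V x) = snd F U W x))"

definition scott_sheaf :: "('k,'r) ring_scheme \<Rightarrow> ('p::order, 'k, 'm) psh \<Rightarrow> bool" where
  "scott_sheaf R F \<longleftrightarrow> scott_presheaf R F \<and>
     (\<forall>\<U>. (\<forall>V\<in>\<U>. scott_open V) \<longrightarrow>
        (\<forall>s\<in>carrier (fst F (\<Union>\<U>)). \<forall>t\<in>carrier (fst F (\<Union>\<U>)).
           (\<forall>V\<in>\<U>. snd F (\<Union>\<U>) V s = snd F (\<Union>\<U>) V t) \<longrightarrow> s = t) \<and>
        (\<forall>s. (\<forall>V\<in>\<U>. s V \<in> carrier (fst F V)) \<and>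
             (\<forall>V\<in>\<U>. \<forall>W\<in>\<U>. snd F V (V \<inter> W) (s V) = snd F W (V \<inter> W) (s W)) \<longrightarrow>
           (\<exists>t\<in>carrier (fst F (\<Union>\<U>)). \<forall>V\<in>\<U>. snd F (\<Union>\<U>) V t = s V)))"

definition sh_morph :: "('k,'r) ring_scheme \<Rightarrow> ('p::order, 'k, 'a) psh \<Rightarrow> ('p, 'k, 'b) psh
     \<Rightarrow> ('p set \<Rightarrow> 'a \<Rightarrow> 'b) \<Rightarrow> bool" where
  "sh_morph R F G f \<longleftrightarrow>
     (\<forall>U. scott_open U \<longrightarrow> f U \<in> module_hom R (fst F U) (fst G U)) \<and>
     (\<forall>U V. scott_open U \<and> scott_open V \<and> V \<subseteq> U \<longrightarrow>
        (\<forall>x\<in>carrier (fst F U). f V (snd F U V x) = snd G U V (f U x)))"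

text \<open>Under TR1 every T is an order isomorphism, hence a homeomorphism
  of P^sigma, and the sheaf inverse image is (T^* F)(U) = F(T(U)), with restrictions those of F.
  The natural morphism F \<rightarrow> T^* F is the restriction F(U) \<rightarrow> F(T(U)) (note T(U) \<subseteq> U).\<close>
definition sh_pull :: "('p \<Rightarrow> 'p) \<Rightarrow> ('p::order, 'k, 'm) psh \<Rightarrow> ('p, 'k, 'm) psh" where
  "sh_pull T F = (\<lambda>U. fst F (T ` U), \<lambda>U V. snd F (T ` U) (T ` V))"

definition sh_interleaved :: "('k,'r) ring_scheme \<Rightarrow> ('p \<Rightarrow> 'p) \<Rightarrow> ('p::order, 'k, 'a) psh
     \<Rightarrow> ('p, 'k, 'b) psh \<Rightarrow> bool" where
  "sh_interleaved R T F G \<longleftrightarrow> (\<exists>f g.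
     sh_morph R F (sh_pull T G) f \<and> sh_morph R G (sh_pull T F) g \<and>
     (\<forall>U. scott_open U \<longrightarrow> (\<forall>x\<in>carrier (fst F U). g (T ` U) (f U x) = snd F U (T ` T ` U) x)) \<and>
     (\<forall>U. scott_open U \<longrightarrow> (\<forall>y\<in>carrier (fst G U). f (T ` U) (g U y) = snd G U (T ` T ` U) y)))"

definition d_sigma :: "('k,'r) ring_scheme \<Rightarrow> (real \<Rightarrow> 'p \<Rightarrow> 'p) \<Rightarrow> ('p::order, 'k, 'a) psh
     \<Rightarrow> ('p, 'k, 'b) psh \<Rightarrow> ereal" where
  "d_sigma R T F G = Inf {ereal \<epsilon> | \<epsilon>. 0 \<le> \<epsilon> \<and> sh_interleaved R (T \<epsilon>) F G}"

definition nbhds :: "'p::order \<Rightarrow> 'p set set" where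
  "nbhds p = {U. scott_open U \<and> p \<in> U}"

text \<open>Stalk F_p = colim over Scott-open neighbourhoods U of p (ordered by reverse inclusion).\<close>
definition stalk :: "('k,'r) ring_scheme \<Rightarrow> ('p::order, 'k, 'm) psh \<Rightarrow> 'p \<Rightarrow> ('k, ('p set \<Rightarrow> 'm) set) module" where
  "stalk R F p = colim_module R (nbhds p) (\<lambda>U V. V \<subseteq> U) (fst F) (snd F)"

definition j_upper_star :: "('k,'r) ring_scheme \<Rightarrow> ('p::order, 'k, 'm) psh \<Rightarrow> ('p, 'k, ('p set \<Rightarrow> 'm) set) pmod" where
  "j_upper_star R F = (stalk R F,
     \<lambda>p q. colim_ext R (nbhds p) (nbhds q) (\<lambda>U V. V \<subseteq> U) (fst F) (snd F))"

definition j_shriek :: "('p::order, 'k, 'm) psh \<Rightarrow> ('p, 'k, 'm) pmod" where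
  "j_shriek F = (\<lambda>p. fst F (scott_interior (upset p)),
     \<lambda>p q. snd F (scott_interior (upset p)) (scott_interior (upset q)))"

definition j_lower_star :: "('p::order, 'k, 'm) pmod \<Rightarrow> ('p, 'k, 'p \<Rightarrow> 'm) psh" where
  "j_lower_star M = (\<lambda>U. lim_module U (\<le>) (fst M) (snd M), \<lambda>U V. lim_restr V)"

definition pm_under :: "('p::order, 'k, 'm) pmod \<Rightarrow> ('p, 'k, 'p \<Rightarrow> 'm) pmod" where
  "pm_under M = (\<lambda>p. lim_module {x. way_below p x} (\<le>) (fst M) (snd M),
     \<lambda>p q. lim_restr {x. way_below q x})"

definition pm_over :: "('k,'r) ring_scheme \<Rightarrow> ('p::order, 'k, 'm) pmod \<Rightarrow> ('p, 'k, ('p \<Rightarrow> 'm) set) pmod" where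
  "pm_over R M = (\<lambda>p. colim_module R {x. way_below x p} (\<le>) (fst M) (snd M),
     \<lambda>p q. colim_ext R {x. way_below x p} {x. way_below x q} (\<le>) (fst M) (snd M))"

end

theory Submission
  imports Defs
begin

text \<open>
  Everything rests on one observation: if \<open>A\<close> is \<open>\<delta>\<close>-interleaved with \<open>A'\<close> and \<open>B\<close> with
  \<open>B'\<close> for every \<open>\<delta> > 0\<close>, then superlinearity of the translations composes interleavings
  and \<open>d_a A B = d_a A' B'\<close>. By TR2 we have \<open>p \<ll> T\<^sub>\<delta> p\<close>, so the index sets of the
  limits and colimits defining \<open>M\<close> underlined, \<open>M\<close> overlined, \<open>j\<^sup>! j\<^sub>* M\<close> and \<open>j\<^sup>* F\<close> are squeezed
  between \<open>p\<close> and \<open>T\<^sub>\<delta> p\<close>; this gives \<open>\<delta>\<close>-interleavings with \<open>M\<close> resp. \<open>j\<^sup>! F\<close> and hence (ii),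
  (iii) and the second half of (i).

  For the rest, an interleaving of sheaves restricts to one of \<open>j\<^sup>!\<close>, because the order
  isomorphism \<open>T\<^sub>\<epsilon>\<close> maps the Scott interior of \<open>\<up>p\<close> to that of \<open>\<up>T\<^sub>\<epsilon> p\<close>. Conversely, an
  \<open>\<epsilon>\<close>-interleaving of \<open>j\<^sup>! F\<close> and \<open>j\<^sup>! G\<close> yields a sheaf interleaving at every \<open>\<epsilon>' > \<epsilon>\<close>: for
  an open \<open>U\<close> the way-above sets \<open>\<Up>T\<^sub>\<epsilon> u\<close>, \<open>u \<in> U\<close>, are open, cover \<open>T\<^sub>\<epsilon>\<^sub>' U\<close> and pairwise
  intersect in a union of such sets (the poset is continuous), so the local images of a
  section glue. Finally \<open>j\<^sub>*\<close> transports interleavings of persistence modules directly, and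
  \<open>j\<^sup>! j\<^sub>* M\<close> is the limit over Scott interiors of up-sets, which gives (iv).
\<close>

section \<open>Scott topology\<close>

lemma way_below_imp_le: "way_below x y \<Longrightarrow> x \<le> y"
  unfolding way_below_def
  by (drule spec[of _ "{y}"], drule spec[of _ y]) (auto simp: directed_def is_sup_def)

lemma way_below_mono: "a \<le> b \<Longrightarrow> way_below b c \<Longrightarrow> c \<le> d \<Longrightarrow> way_below a d"
  unfolding way_below_def by (meson order.trans)

lemma scott_openI:
  "(\<And>x y. x \<in> U \<Longrightarrow> x \<le> y \<Longrightarrow> y \<in> U) \<Longrightarrow>
   (\<And>D s. directed D \<Longrightarrow> is_sup D s \<Longrightarrow> s \<in> U \<Longrightarrow> D \<inter> U \<noteq> {}) \<Longrightarrow> scott_open U"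
  unfolding scott_open_def by blast

lemma scott_open_upward: "scott_open U \<Longrightarrow> x \<in> U \<Longrightarrow> x \<le> y \<Longrightarrow> y \<in> U"
  unfolding scott_open_def by blast

lemma scott_open_meets_directed:
  "scott_open U \<Longrightarrow> directed D \<Longrightarrow> is_sup D s \<Longrightarrow> s \<in> U \<Longrightarrow> D \<inter> U \<noteq> {}"
  unfolding scott_open_def by blast

lemma scott_open_UNIV: "scott_open UNIV"
  by (rule scott_openI) (auto simp: directed_def)

lemma scott_open_Union:
  assumes "\<And>U. U \<in> \<U> \<Longrightarrow> scott_open U"
  shows "scott_open (\<Union>\<U>)"
proof (rule scott_openI)
  fix x y assume "x \<in> \<Union>\<U>" "x \<le> y"
  then show "y \<in> \<Union>\<U>" using assms scott_open_upward by blast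
next
  fix D s assume "directed D" "is_sup D s" "s \<in> \<Union>\<U>"
  then show "D \<inter> \<Union>\<U> \<noteq> {}" using assms scott_open_meets_directed by blast
qed

lemma scott_open_Int:
  assumes U: "scott_open U" and V: "scott_open V"
  shows "scott_open (U \<inter> V)"
proof (rule scott_openI)
  fix x y assume "x \<in> U \<inter> V" "x \<le> y"
  then show "y \<in> U \<inter> V" using scott_open_upward U V by blast
next
  fix D s assume D: "directed D" "is_sup D s" "s \<in> U \<inter> V"
  then obtain d1 d2 where d: "d1 \<in> D" "d1 \<in> U" "d2 \<in> D" "d2 \<in> V"
    using scott_open_meets_directed[OF U] scott_open_meets_directed[OF V] by blast
  then obtain d3 where "d3 \<in> D" "d1 \<le> d3" "d2 \<le> d3"
    using D(1) unfolding directed_def by blast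
  then show "D \<inter> (U \<inter> V) \<noteq> {}" using scott_open_upward U V d by blast
qed

lemma scott_open_interior: "scott_open (scott_interior A)"
  unfolding scott_interior_def by (rule scott_open_Union) auto

lemma scott_interior_subset: "scott_interior A \<subseteq> A"
  unfolding scott_interior_def by auto

lemma scott_interior_maximal: "scott_open U \<Longrightarrow> U \<subseteq> A \<Longrightarrow> U \<subseteq> scott_interior A"
  unfolding scott_interior_def by auto

lemma scott_interior_mono: "A \<subseteq> B \<Longrightarrow> scott_interior A \<subseteq> scott_interior B"
  unfolding scott_interior_def by auto

abbreviation int_upset :: "'p::order \<Rightarrow> 'p set" where
  "int_upset p \<equiv> scott_interior (upset p)"

abbreviation way_upset :: "'p::order \<Rightarrow> 'p set" where
  "way_upset p \<equiv> {x. way_below p x}"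

abbreviation way_downset :: "'p::order \<Rightarrow> 'p set" where
  "way_downset p \<equiv> {x. way_below x p}"

lemma scott_open_int_upset: "scott_open (int_upset p)"
  by (rule scott_open_interior)

lemma int_upset_antimono: "p \<le> q \<Longrightarrow> int_upset q \<subseteq> int_upset p"
  by (rule scott_interior_mono) (auto simp: upset_def)

lemma int_upset_imp_le: "x \<in> int_upset p \<Longrightarrow> p \<le> x"
  using scott_interior_subset unfolding upset_def by blast

lemma int_upset_subset_open: "scott_open U \<Longrightarrow> p \<in> U \<Longrightarrow> int_upset p \<subseteq> U"
  using scott_interior_subset scott_open_upward unfolding upset_def by blast

lemma continuous_posetD:
  "continuous_poset TYPE('p::order) \<Longrightarrow> directed (way_downset p) \<and> is_sup (way_downset (p::'p)) p"
  unfolding continuous_poset_def by blast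

text \<open>Continuity enters through the directed set of elements way below some member of \<open>D\<close>,
  which has the same supremum as \<open>D\<close>.\<close>

lemma scott_open_way_upset:
  assumes cp: "continuous_poset TYPE('p::order)"
  shows "scott_open (way_upset (p::'p))"
proof (rule scott_openI)
  fix x y assume "x \<in> way_upset p" "x \<le> y"
  then show "y \<in> way_upset p" using way_below_mono by auto
next
  fix D and s :: 'p assume D: "directed D" "is_sup D s" and s: "s \<in> way_upset p"
  define E where "E = {z. \<exists>d\<in>D. way_below z d}"
  have "directed E" unfolding directed_def
  proof (intro conjI ballI)
    obtain d where "d \<in> D" using D(1) unfolding directed_def by blast
    then obtain z where "way_below z d" using continuous_posetD[OF cp, of d] unfolding directed_def
      by blast
    then show "E \<noteq> {}" using \<open>d \<in> D\<close> E_def by blast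
  next
    fix x y assume "x \<in> E" "y \<in> E"
    then obtain d1 d2 where d: "d1 \<in> D" "d2 \<in> D" "way_below x d1" "way_below y d2"
      unfolding E_def by blast
    then obtain d3 where d3: "d3 \<in> D" "d1 \<le> d3" "d2 \<le> d3" using D(1) unfolding directed_def by blast
    have "way_below x d3" "way_below y d3" using d d3 way_below_mono by blast+
    then obtain z where "way_below z d3" "x \<le> z" "y \<le> z"
      using continuous_posetD[OF cp, of d3] unfolding directed_def by blast
    then show "\<exists>z\<in>E. x \<le> z \<and> y \<le> z" using d3 E_def by blast
  qed
  moreover have "is_sup E s" unfolding is_sup_def
  proof (intro conjI allI ballI impI)
    fix z assume "z \<in> E"
    then obtain d where "d \<in> D" "way_below z d" unfolding E_def by blast
    then show "z \<le> s" using D(2) way_below_imp_le order.trans unfolding is_sup_def by blast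
  next
    fix u assume u: "\<forall>x\<in>E. x \<le> u"
    have "d \<le> u" if "d \<in> D" for d
      using continuous_posetD[OF cp, of d] u that unfolding E_def is_sup_def by blast
    then show "s \<le> u" using D(2) unfolding is_sup_def by blast
  qed
  ultimately obtain z where "z \<in> E" "p \<le> z" using s unfolding way_below_def by blast
  then obtain d where "d \<in> D" "way_below p d" unfolding E_def using way_below_mono by blast
  then show "D \<inter> way_upset p \<noteq> {}" by blast
qed

lemma way_upset_subset_int_upset:
  "continuous_poset TYPE('p::order) \<Longrightarrow> way_upset (p::'p) \<subseteq> int_upset p"
  by (rule scott_interior_maximal) (auto simp: scott_open_way_upset upset_def way_below_imp_le)

lemma order_iso_le_iff: "order_iso f \<Longrightarrow> f x \<le> f y \<longleftrightarrow> x \<le> y"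
  unfolding order_iso_def by blast

lemma order_iso_f_inv_f: "order_iso f \<Longrightarrow> f (inv_into UNIV f y) = y"
  unfolding order_iso_def by (simp add: bij_is_surj surj_f_inv_f)

lemma order_iso_inv_f_f: "order_iso f \<Longrightarrow> inv_into UNIV f (f y) = y"
  unfolding order_iso_def by (simp add: bij_is_inj inv_f_f)

lemma order_iso_inv:
  assumes "order_iso f"
  shows "order_iso (inv_into UNIV f)"
proof -
  have b: "bij f" and le: "\<And>x y. f x \<le> f y \<longleftrightarrow> x \<le> y"
    using assms unfolding order_iso_def by auto
  have "inv_into UNIV f x \<le> inv_into UNIV f y \<longleftrightarrow> x \<le> y" for x y
    using le[of "inv_into UNIV f x" "inv_into UNIV f y"] b by (simp add: surj_f_inv_f bij_is_surj)
  then show ?thesis using b bij_imp_bij_inv unfolding order_iso_def by blast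
qed

lemma order_iso_image_directed: "order_iso f \<Longrightarrow> directed D \<Longrightarrow> directed (f ` D)"
  unfolding directed_def order_iso_def by auto

lemma order_iso_image_is_sup:
  assumes f: "order_iso f" and D: "is_sup D s"
  shows "is_sup (f ` D) (f s)"
  unfolding is_sup_def
proof (intro conjI ballI allI impI)
  fix x assume "x \<in> f ` D"
  then show "x \<le> f s" using D order_iso_le_iff[OF f] unfolding is_sup_def by auto
next
  fix u assume "\<forall>x\<in>f ` D. x \<le> u"
  then have "\<forall>x\<in>D. x \<le> inv_into UNIV f u"
    using order_iso_le_iff[OF f, of _ "inv_into UNIV f u"] order_iso_f_inv_f[OF f] by auto
  then have "s \<le> inv_into UNIV f u" using D unfolding is_sup_def by blast
  then show "f s \<le> u" using order_iso_le_iff[OF f, of s "inv_into UNIV f u"] order_iso_f_inv_f[OF f]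
    by auto
qed

lemma order_iso_way_below:
  assumes f: "order_iso f" and xy: "way_below x y"
  shows "way_below (f x) (f y)"
  unfolding way_below_def
proof (intro allI impI)
  fix D s assume D: "directed D \<and> is_sup D s \<and> f y \<le> s"
  have g: "order_iso (inv_into UNIV f)" using order_iso_inv[OF f] .
  have "directed (inv_into UNIV f ` D)" "is_sup (inv_into UNIV f ` D) (inv_into UNIV f s)"
    using D order_iso_image_directed[OF g] order_iso_image_is_sup[OF g] by auto
  moreover have "y \<le> inv_into UNIV f s" using D order_iso_le_iff[OF g, of "f y" s]
    order_iso_inv_f_f[OF f] by simp
  ultimately obtain d where "d \<in> D" "x \<le> inv_into UNIV f d" using xy unfolding way_below_def
    by blast
  then show "\<exists>d\<in>D. f x \<le> d" using order_iso_le_iff[OF f, of x "inv_into UNIV f d"]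
    order_iso_f_inv_f[OF f] by auto
qed

lemma order_iso_way_below_iff: "order_iso f \<Longrightarrow> way_below (f x) (f y) \<longleftrightarrow> way_below x y"
  using order_iso_way_below order_iso_way_below[OF order_iso_inv, of f "f x" "f y"]
    order_iso_inv_f_f[of f] by auto

lemma order_iso_image_scott_open:
  assumes f: "order_iso f" and U: "scott_open U"
  shows "scott_open (f ` U)"
proof (rule scott_openI)
  fix x y assume "x \<in> f ` U" "x \<le> y"
  then obtain u where "u \<in> U" "u \<le> inv_into UNIV f y"
    using order_iso_le_iff[OF f, of _ "inv_into UNIV f y"] order_iso_f_inv_f[OF f] by auto
  then have "inv_into UNIV f y \<in> U" using U scott_open_upward by blast
  then show "y \<in> f ` U" using order_iso_f_inv_f[OF f] by (metis image_eqI)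
next
  fix D s assume D: "directed D" "is_sup D s" and s: "s \<in> f ` U"
  have g: "order_iso (inv_into UNIV f)" using order_iso_inv[OF f] .
  have "inv_into UNIV f s \<in> U" using s order_iso_inv_f_f[OF f] by auto
  then obtain d where "d \<in> D" "inv_into UNIV f d \<in> U"
    using scott_open_meets_directed[OF U order_iso_image_directed[OF g D(1)]
          order_iso_image_is_sup[OF g D(2)]] by blast
  then show "D \<inter> f ` U \<noteq> {}" using order_iso_f_inv_f[OF f] by (metis IntI empty_iff image_eqI)
qed

lemma order_iso_image_upset:
  assumes f: "order_iso f"
  shows "f ` upset p = upset (f p)"
proof
  show "f ` upset p \<subseteq> upset (f p)" using order_iso_le_iff[OF f] unfolding upset_def by auto
  show "upset (f p) \<subseteq> f ` upset p"
  proof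
    fix y assume "y \<in> upset (f p)"
    then have "p \<le> inv_into UNIV f y"
      using order_iso_le_iff[OF f, of p "inv_into UNIV f y"] order_iso_f_inv_f[OF f]
        unfolding upset_def by auto
    then show "y \<in> f ` upset p" using order_iso_f_inv_f[OF f] unfolding upset_def
      by (metis image_eqI mem_Collect_eq)
  qed
qed

lemma order_iso_image_scott_interior:
  assumes f: "order_iso f"
  shows "f ` scott_interior A = scott_interior (f ` A)"
proof
  show "f ` scott_interior A \<subseteq> scott_interior (f ` A)"
    by (intro scott_interior_maximal order_iso_image_scott_open[OF f] scott_open_interior
        image_mono scott_interior_subset)
  have g: "order_iso (inv_into UNIV f)" using order_iso_inv[OF f] .
  have img: "f ` inv_into UNIV f ` X = X" "inv_into UNIV f ` f ` X = X" for X
    using order_iso_f_inv_f[OF f] order_iso_inv_f_f[OF f] by (simp_all add: image_comp)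
  have "inv_into UNIV f ` scott_interior (f ` A) \<subseteq> scott_interior (inv_into UNIV f ` f ` A)"
    by (intro scott_interior_maximal order_iso_image_scott_open[OF g] scott_open_interior
        image_mono scott_interior_subset)
  then have "f ` inv_into UNIV f ` scott_interior (f ` A) \<subseteq> f ` scott_interior A"
    unfolding img(2) by (rule image_mono)
  then show "scott_interior (f ` A) \<subseteq> f ` scott_interior A" unfolding img(1) .
qed

lemma order_iso_image_int_upset: "order_iso f \<Longrightarrow> f ` int_upset p = int_upset (f p)"
  by (simp add: order_iso_image_scott_interior order_iso_image_upset)

locale translation_family =
  fixes T :: "real \<Rightarrow> 'p::order \<Rightarrow> 'p"
  assumes poset_continuous: "continuous_poset TYPE('p)"
    and T_translations: "\<forall>\<epsilon>\<ge>0. translation (T \<epsilon>) \<and> scott_continuous (T \<epsilon>)"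
    and T_superlinear_family: "superlinear T" and T_TR1: "TR1 T" and T_TR2: "TR2 T"
begin

lemma translation_T: "0 \<le> \<epsilon> \<Longrightarrow> translation (T \<epsilon>)"
  using T_translations by blast

lemma T_superlinear: "0 \<le> \<epsilon> \<Longrightarrow> 0 \<le> \<delta> \<Longrightarrow> T \<epsilon> (T \<delta> p) \<le> T (\<epsilon> + \<delta>) p"
  using T_superlinear_family unfolding superlinear_def by blast

lemma order_iso_T: "0 \<le> \<epsilon> \<Longrightarrow> order_iso (T \<epsilon>)"
  using T_TR1 unfolding TR1_def by blast

lemma way_below_T: "0 < \<delta> \<Longrightarrow> way_below p (T \<delta> p)"
  using T_TR2 unfolding TR2_def by blast

lemma way_below_T_add: "0 \<le> \<epsilon> \<Longrightarrow> 0 < \<delta> \<Longrightarrow> way_below (T \<epsilon> p) (T (\<epsilon> + \<delta>) p)"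
  using way_below_T[of \<delta> "T \<epsilon> p"] T_superlinear[of \<delta> \<epsilon> p] way_below_mono[OF order.refl]
  by (simp add: add.commute)

lemma T_in_int_upset: "0 < \<delta> \<Longrightarrow> T \<delta> p \<in> int_upset p"
  using way_upset_subset_int_upset[OF poset_continuous] way_below_T by blast

end

lemma translation_mono: "translation f \<Longrightarrow> x \<le> y \<Longrightarrow> f x \<le> f y"
  unfolding translation_def mono_def by blast

lemma translation_increasing: "translation f \<Longrightarrow> x \<le> f x"
  unfolding translation_def by blast

lemma translation_increasing2: "translation f \<Longrightarrow> x \<le> f (f x)"
  unfolding translation_def by (meson order.trans)

lemma module_homI:
  "(\<And>x. x \<in> carrier A \<Longrightarrow> f x \<in> carrier B) \<Longrightarrow>
   (\<And>x y. x \<in> carrier A \<Longrightarrow> y \<in> carrier A \<Longrightarrow> f (add A x y) = add B (f x) (f y)) \<Longrightarrow>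
   (\<And>r x. r \<in> carrier R \<Longrightarrow> x \<in> carrier A \<Longrightarrow> f (smult A r x) = smult B r (f x)) \<Longrightarrow>
   f \<in> module_hom R A B"
  unfolding module_hom_def by blast

lemma module_hom_closed: "f \<in> module_hom R A B \<Longrightarrow> x \<in> carrier A \<Longrightarrow> f x \<in> carrier B"
  unfolding module_hom_def by auto

lemma module_hom_add:
  "f \<in> module_hom R A B \<Longrightarrow> x \<in> carrier A \<Longrightarrow> y \<in> carrier A \<Longrightarrow> f (add A x y) = add B (f x) (f y)"
  unfolding module_hom_def by simp

lemma module_hom_smult:
  "f \<in> module_hom R A B \<Longrightarrow> r \<in> carrier R \<Longrightarrow> x \<in> carrier A \<Longrightarrow> f (smult A r x) = smult B r (f x)"
  unfolding module_hom_def by simp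

lemma module_hom_comp:
  "f \<in> module_hom R A B \<Longrightarrow> g \<in> module_hom R B C \<Longrightarrow> (\<lambda>x. g (f x)) \<in> module_hom R A C"
  unfolding module_hom_def by auto

lemma module_hom_zero:
  assumes f: "f \<in> module_hom R A B" and A: "abelian_group A" and B: "abelian_group B"
  shows "f (zero A) = zero B"
proof -
  interpret A: abelian_group A by (rule A)
  interpret B: abelian_group B by (rule B)
  have "add B (f (zero A)) (f (zero A)) = f (zero A)"
    using module_hom_add[OF f A.zero_closed A.zero_closed] by simp
  then show ?thesis using B.add.r_cancel_one module_hom_closed[OF f A.zero_closed] B.zero_closed
    by (metis B.r_zero)
qed

lemma module_hom_a_inv:
  assumes f: "f \<in> module_hom R A B" and A: "abelian_group A" and B: "abelian_group B"
    and x: "x \<in> carrier A"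
  shows "f (a_inv A x) = a_inv B (f x)"
proof -
  interpret A: abelian_group A by (rule A)
  interpret B: abelian_group B by (rule B)
  have "add B (f (a_inv A x)) (f x) = f (add A (a_inv A x) x)" using module_hom_add[OF f] x by simp
  also have "\<dots> = zero B" using module_hom_zero[OF f A B] x by (simp add: A.l_neg)
  finally have "add B (f (a_inv A x)) (f x) = zero B" .
  then show ?thesis using B.minus_equality module_hom_closed[OF f] x by (metis A.a_inv_closed)
qed

lemma module_hom_a_minus:
  assumes f: "f \<in> module_hom R A B" and A: "abelian_group A" and B: "abelian_group B"
    and x: "x \<in> carrier A" and y: "y \<in> carrier A"
  shows "f (a_minus A x y) = a_minus B (f x) (f y)"
  using module_hom_add[OF f] module_hom_a_inv[OF f A B y] x y abelian_group.a_inv_closed[OF A]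
  by (simp add: a_minus_def)

section \<open>Interleavings of persistence modules\<close>

text \<open>Functoriality without identities and without module axioms for the objects; this is
  all the interleaving calculus needs, and it is easy to check for limits and colimits.\<close>

definition pm_functorial :: "('k,'r) ring_scheme \<Rightarrow> ('p::order, 'k, 'm) pmod \<Rightarrow> bool" where
  "pm_functorial R A \<longleftrightarrow>
     (\<forall>p q. p \<le> q \<longrightarrow> snd A p q \<in> module_hom R (fst A p) (fst A q)) \<and>
     (\<forall>p q r. p \<le> q \<and> q \<le> r \<longrightarrow> (\<forall>x\<in>carrier (fst A p). snd A q r (snd A p q x) = snd A p r x))"

lemma pm_functorialI:
  "(\<And>p q. p \<le> q \<Longrightarrow> snd A p q \<in> module_hom R (fst A p) (fst A q)) \<Longrightarrow>
   (\<And>p q r x. p \<le> q \<Longrightarrow> q \<le> r \<Longrightarrow> x \<in> carrier (fst A p) \<Longrightarrow> snd A q r (snd A p q x) = snd A p r x) \<Longrightarrow>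
   pm_functorial R A"
  unfolding pm_functorial_def by blast

lemma pm_functorial_hom: "pm_functorial R A \<Longrightarrow> p \<le> q \<Longrightarrow> snd A p q \<in> module_hom R (fst A p) (fst A q)"
  unfolding pm_functorial_def by simp

lemma pm_functorial_comp:
  "pm_functorial R A \<Longrightarrow> p \<le> q \<Longrightarrow> q \<le> r \<Longrightarrow> x \<in> carrier (fst A p) \<Longrightarrow>
   snd A q r (snd A p q x) = snd A p r x"
  unfolding pm_functorial_def by simp

lemma persistence_module_functorial: "persistence_module R M \<Longrightarrow> pm_functorial R M"
  unfolding persistence_module_def pm_functorial_def by simp

lemma persistence_module_module: "persistence_module R M \<Longrightarrow> Module.module R (fst M p)"
  unfolding persistence_module_def by simp

lemma persistence_module_hom:
  "persistence_module R M \<Longrightarrow> p \<le> q \<Longrightarrow> snd M p q \<in> module_hom R (fst M p) (fst M q)"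
  unfolding persistence_module_def by simp

lemma persistence_module_comp:
  "persistence_module R M \<Longrightarrow> p \<le> q \<Longrightarrow> q \<le> r \<Longrightarrow> x \<in> carrier (fst M p) \<Longrightarrow>
   snd M q r (snd M p q x) = snd M p r x"
  unfolding persistence_module_def by simp

lemma pm_morph_hom: "pm_morph R A B f \<Longrightarrow> f p \<in> module_hom R (fst A p) (fst B p)"
  unfolding pm_morph_def by simp

lemma pm_morph_natural:
  "pm_morph R A B f \<Longrightarrow> p \<le> q \<Longrightarrow> x \<in> carrier (fst A p) \<Longrightarrow> f q (snd A p q x) = snd B p q (f p x)"
  unfolding pm_morph_def by simp

lemma pm_interleaved_sym: "pm_interleaved R T A B \<Longrightarrow> pm_interleaved R T B A"
  unfolding pm_interleaved_def by blast

definition pm_morph_comp :: "('p \<Rightarrow> 'p) \<Rightarrow> ('p \<Rightarrow> 'p) \<Rightarrow> ('p \<Rightarrow> 'p) \<Rightarrow> ('p, 'k, 'c) pmod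
   \<Rightarrow> ('p \<Rightarrow> 'a \<Rightarrow> 'b) \<Rightarrow> ('p \<Rightarrow> 'b \<Rightarrow> 'c) \<Rightarrow> 'p \<Rightarrow> 'a \<Rightarrow> 'c" where
  "pm_morph_comp T\<^sub>1 T\<^sub>2 S C f f' p x = snd C (T\<^sub>2 (T\<^sub>1 p)) (S p) (f' (T\<^sub>1 p) (f p x))"

lemma pm_morph_pm_morph_comp:
  fixes A :: "('p::order, 'k, 'a) pmod" and B :: "('p, 'k, 'b) pmod" and C :: "('p, 'k, 'c) pmod"
  assumes T\<^sub>1: "translation T\<^sub>1" and T\<^sub>2: "translation T\<^sub>2" and S: "translation S"
    and TS: "\<And>p. T\<^sub>2 (T\<^sub>1 p) \<le> S p" and C: "pm_functorial R C"
    and f: "pm_morph R A (pm_pull T\<^sub>1 B) f" and f': "pm_morph R B (pm_pull T\<^sub>2 C) f'"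
  shows "pm_morph R A (pm_pull S C) (pm_morph_comp T\<^sub>1 T\<^sub>2 S C f f')"
  unfolding pm_morph_def
proof (intro conjI allI impI ballI)
  fix p
  have "f p \<in> module_hom R (fst A p) (fst B (T\<^sub>1 p))"
    "f' (T\<^sub>1 p) \<in> module_hom R (fst B (T\<^sub>1 p)) (fst C (T\<^sub>2 (T\<^sub>1 p)))"
    using pm_morph_hom[OF f] pm_morph_hom[OF f'] by (simp_all add: pm_pull_def)
  then show "pm_morph_comp T\<^sub>1 T\<^sub>2 S C f f' p \<in> module_hom R (fst A p) (fst (pm_pull S C) p)"
    unfolding pm_morph_comp_def pm_pull_def
    by (simp add: module_hom_comp[OF module_hom_comp pm_functorial_hom[OF C TS]])
next
  fix p q x assume pq: "p \<le> q" and x: "x \<in> carrier (fst A p)"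
  have fx: "f p x \<in> carrier (fst B (T\<^sub>1 p))"
    using module_hom_closed[OF pm_morph_hom[OF f] x] by (simp add: pm_pull_def)
  have ffx: "f' (T\<^sub>1 p) (f p x) \<in> carrier (fst C (T\<^sub>2 (T\<^sub>1 p)))"
    using module_hom_closed[OF pm_morph_hom[OF f'] fx] by (simp add: pm_pull_def)
  have m: "T\<^sub>1 p \<le> T\<^sub>1 q" "T\<^sub>2 (T\<^sub>1 p) \<le> T\<^sub>2 (T\<^sub>1 q)" "S p \<le> S q"
    using translation_mono[OF T\<^sub>1 pq] translation_mono[OF T\<^sub>2] translation_mono[OF S pq] by auto
  have "f' (T\<^sub>1 q) (f q (snd A p q x)) = snd C (T\<^sub>2 (T\<^sub>1 p)) (T\<^sub>2 (T\<^sub>1 q)) (f' (T\<^sub>1 p) (f p x))"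
    using pm_morph_natural[OF f pq x] pm_morph_natural[OF f' m(1) fx] by (simp add: pm_pull_def)
  then show "pm_morph_comp T\<^sub>1 T\<^sub>2 S C f f' q (snd A p q x) =
      snd (pm_pull S C) p q (pm_morph_comp T\<^sub>1 T\<^sub>2 S C f f' p x)"
    unfolding pm_morph_comp_def pm_pull_def
    using pm_functorial_comp[OF C m(2) TS ffx] pm_functorial_comp[OF C TS m(3) ffx] by simp
qed

lemma pm_morph_comp_interleaving:
  fixes A :: "('p::order, 'k, 'a) pmod" and B :: "('p, 'k, 'b) pmod" and C :: "('p, 'k, 'c) pmod"
  assumes T\<^sub>1: "translation T\<^sub>1" and T\<^sub>2: "translation T\<^sub>2"
    and TS: "\<And>p. T\<^sub>2 (T\<^sub>1 p) \<le> S p" and TS': "\<And>p. T\<^sub>1 (T\<^sub>2 p) \<le> S p"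
    and A: "pm_functorial R A" and B: "pm_functorial R B"
    and f: "pm_morph R A (pm_pull T\<^sub>1 B) f" and f': "pm_morph R B (pm_pull T\<^sub>2 C) f'"
    and g: "pm_morph R B (pm_pull T\<^sub>1 A) g" and g': "pm_morph R C (pm_pull T\<^sub>2 B) g'"
    and fg: "\<forall>p. \<forall>x\<in>carrier (fst A p). g (T\<^sub>1 p) (f p x) = snd A p (T\<^sub>1 (T\<^sub>1 p)) x"
    and fg': "\<forall>p. \<forall>x\<in>carrier (fst B p). g' (T\<^sub>2 p) (f' p x) = snd B p (T\<^sub>2 (T\<^sub>2 p)) x"
    and x: "x \<in> carrier (fst A p)"
  shows "pm_morph_comp T\<^sub>2 T\<^sub>1 S A g' g (S p) (pm_morph_comp T\<^sub>1 T\<^sub>2 S C f f' p x) = snd A p (S (S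
      p)) x"
proof -
  define q u where "q = S p" and "u = T\<^sub>2 (T\<^sub>1 p)"
  have fx: "f p x \<in> carrier (fst B (T\<^sub>1 p))"
    using module_hom_closed[OF pm_morph_hom[OF f] x] by (simp add: pm_pull_def)
  have y: "f' (T\<^sub>1 p) (f p x) \<in> carrier (fst C u)"
    using module_hom_closed[OF pm_morph_hom[OF f'] fx] u_def by (simp add: pm_pull_def)
  have uq: "u \<le> q" using TS u_def q_def by simp
  have le1: "T\<^sub>1 p \<le> T\<^sub>2 u" "T\<^sub>1 p \<le> T\<^sub>2 q"
    using translation_increasing[OF T\<^sub>2] translation_mono[OF T\<^sub>2 uq] u_def by (metis order.trans)+
  have le2: "p \<le> T\<^sub>1 (T\<^sub>1 p)" "p \<le> T\<^sub>1 (T\<^sub>2 q)"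
    using translation_increasing2[OF T\<^sub>1] translation_increasing[OF T\<^sub>1] translation_mono[OF T\<^sub>1
      le1(2)]
    by (metis order.trans)+
  have "g' q (snd C u q (f' (T\<^sub>1 p) (f p x))) = snd B (T\<^sub>2 u) (T\<^sub>2 q) (g' u (f' (T\<^sub>1 p) (f p x)))"
    using pm_morph_natural[OF g' uq y] by (simp add: pm_pull_def)
  also have "\<dots> = snd B (T\<^sub>1 p) (T\<^sub>2 q) (f p x)"
    using fg' fx u_def pm_functorial_comp[OF B le1(1) translation_mono[OF T\<^sub>2 uq] fx] by simp
  finally have e1: "g' q (snd C u q (f' (T\<^sub>1 p) (f p x))) = snd B (T\<^sub>1 p) (T\<^sub>2 q) (f p x)" .
  have "g (T\<^sub>2 q) (snd B (T\<^sub>1 p) (T\<^sub>2 q) (f p x)) = snd A (T\<^sub>1 (T\<^sub>1 p)) (T\<^sub>1 (T\<^sub>2 q)) (g (T\<^sub>1 p) (f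
      p x))"
    using pm_morph_natural[OF g le1(2) fx] by (simp add: pm_pull_def)
  also have "\<dots> = snd A p (T\<^sub>1 (T\<^sub>2 q)) x"
    using fg x pm_functorial_comp[OF A le2(1) translation_mono[OF T\<^sub>1 le1(2)] x] by simp
  finally have e2: "g (T\<^sub>2 q) (snd B (T\<^sub>1 p) (T\<^sub>2 q) (f p x)) = snd A p (T\<^sub>1 (T\<^sub>2 q)) x" .
  show ?thesis
    unfolding pm_morph_comp_def q_def[symmetric] u_def[symmetric]
    using e1 e2 pm_functorial_comp[OF A le2(2) TS' x] by simp
qed

lemma pm_interleaved_trans:
  fixes A :: "('p::order, 'k, 'a) pmod" and B :: "('p, 'k, 'b) pmod" and C :: "('p, 'k, 'c) pmod"
  assumes T\<^sub>1: "translation T\<^sub>1" and T\<^sub>2: "translation T\<^sub>2" and S: "translation S"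
    and TS: "\<And>p. T\<^sub>2 (T\<^sub>1 p) \<le> S p" and TS': "\<And>p. T\<^sub>1 (T\<^sub>2 p) \<le> S p"
    and A: "pm_functorial R A" and B: "pm_functorial R B" and C: "pm_functorial R C"
    and AB: "pm_interleaved R T\<^sub>1 A B" and BC: "pm_interleaved R T\<^sub>2 B C"
  shows "pm_interleaved R S A C"
proof -
  obtain f g where fg: "pm_morph R A (pm_pull T\<^sub>1 B) f" "pm_morph R B (pm_pull T\<^sub>1 A) g"
    "\<forall>p. \<forall>x\<in>carrier (fst A p). g (T\<^sub>1 p) (f p x) = snd A p (T\<^sub>1 (T\<^sub>1 p)) x"
    "\<forall>p. \<forall>y\<in>carrier (fst B p). f (T\<^sub>1 p) (g p y) = snd B p (T\<^sub>1 (T\<^sub>1 p)) y"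
    using AB unfolding pm_interleaved_def by blast
  obtain f' g' where fg': "pm_morph R B (pm_pull T\<^sub>2 C) f'" "pm_morph R C (pm_pull T\<^sub>2 B) g'"
    "\<forall>p. \<forall>x\<in>carrier (fst B p). g' (T\<^sub>2 p) (f' p x) = snd B p (T\<^sub>2 (T\<^sub>2 p)) x"
    "\<forall>p. \<forall>y\<in>carrier (fst C p). f' (T\<^sub>2 p) (g' p y) = snd C p (T\<^sub>2 (T\<^sub>2 p)) y"
    using BC unfolding pm_interleaved_def by blast
  show ?thesis unfolding pm_interleaved_def
  proof (intro exI conjI allI ballI)
    show "pm_morph R A (pm_pull S C) (pm_morph_comp T\<^sub>1 T\<^sub>2 S C f f')"
      by (rule pm_morph_pm_morph_comp[OF T\<^sub>1 T\<^sub>2 S TS C fg(1) fg'(1)])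
    show "pm_morph R C (pm_pull S A) (pm_morph_comp T\<^sub>2 T\<^sub>1 S A g' g)"
      by (rule pm_morph_pm_morph_comp[OF T\<^sub>2 T\<^sub>1 S TS' A fg'(2) fg(2)])
  next
    fix p x assume "x \<in> carrier (fst A p)"
    then show "pm_morph_comp T\<^sub>2 T\<^sub>1 S A g' g (S p) (pm_morph_comp T\<^sub>1 T\<^sub>2 S C f f' p x) = snd A p
        (S (S p)) x"
      by (rule pm_morph_comp_interleaving[OF T\<^sub>1 T\<^sub>2 TS TS' A B fg(1) fg'(1) fg(2) fg'(2) fg(3)
        fg'(3)])
  next
    fix p y assume "y \<in> carrier (fst C p)"
    then show "pm_morph_comp T\<^sub>1 T\<^sub>2 S C f f' (S p) (pm_morph_comp T\<^sub>2 T\<^sub>1 S A g' g p y) = snd C p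
        (S (S p)) y"
      by (rule pm_morph_comp_interleaving[OF T\<^sub>2 T\<^sub>1 TS' TS C B fg'(2) fg(2) fg'(1) fg(1) fg'(4)
        fg(4)])
  qed
qed

lemma Inf_ereal_nonneg_mono:
  assumes "\<And>e. 0 \<le> e \<Longrightarrow> P e \<Longrightarrow> Q e"
  shows "Inf {ereal e |e. 0 \<le> e \<and> Q e} \<le> Inf {ereal e |e. 0 \<le> e \<and> P e}"
  by (rule Inf_superset_mono) (use assms in blast)

lemma Inf_ereal_nonneg_mono_eps:
  assumes "\<And>e d. 0 \<le> e \<Longrightarrow> P e \<Longrightarrow> 0 < d \<Longrightarrow> Q (e + d)"
  shows "Inf {ereal e |e. 0 \<le> e \<and> Q e} \<le> Inf {ereal e |e. 0 \<le> e \<and> P e}"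
proof (rule Inf_greatest, clarify)
  fix e assume e: "0 \<le> e" "P e"
  show "Inf {ereal e |e. 0 \<le> e \<and> Q e} \<le> ereal e"
  proof (rule ereal_le_epsilon2)
    fix d :: real assume d: "0 < d"
    have "ereal (e + d) \<in> {ereal e |e. 0 \<le> e \<and> Q e}" using assms[OF e d] e d by auto
    then show "Inf {ereal e |e. 0 \<le> e \<and> Q e} \<le> ereal e + ereal d" by (simp add: Inf_lower)
  qed
qed

context translation_family
begin

lemma pm_interleaved_T_add:
  fixes A :: "('p, 'k, 'a) pmod" and B :: "('p, 'k, 'b) pmod" and C :: "('p, 'k, 'c) pmod"
  assumes "0 \<le> \<epsilon>" "0 \<le> \<delta>" "pm_functorial R A" "pm_functorial R B" "pm_functorial R C"
    "pm_interleaved R (T \<epsilon>) A B" "pm_interleaved R (T \<delta>) B C"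
  shows "pm_interleaved R (T (\<epsilon> + \<delta>)) A C"
  by (rule pm_interleaved_trans[OF translation_T translation_T translation_T _ _ assms(3-7)])
    (use assms T_superlinear[of \<delta> \<epsilon>] T_superlinear[of \<epsilon> \<delta>] in \<open>auto simp: add.commute\<close>)

lemma d_a_le_if_close:
  fixes A :: "('p, 'k, 'a) pmod" and B :: "('p, 'k, 'b) pmod"
    and A' :: "('p, 'k, 'a') pmod" and B' :: "('p, 'k, 'b') pmod"
  assumes "pm_functorial R A" "pm_functorial R B" "pm_functorial R A'" "pm_functorial R B'"
    and AA': "\<And>\<delta>. 0 < \<delta> \<Longrightarrow> pm_interleaved R (T \<delta>) A A'"
    and BB': "\<And>\<delta>. 0 < \<delta> \<Longrightarrow> pm_interleaved R (T \<delta>) B B'"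
  shows "d_a R T A' B' \<le> d_a R T A B"
  unfolding d_a_def
proof (rule Inf_ereal_nonneg_mono_eps)
  fix e d :: real assume e: "0 \<le> e" "pm_interleaved R (T e) A B" and d: "0 < d"
  then have "pm_interleaved R (T (d/2 + e)) A' B"
    using pm_interleaved_T_add[of "d/2" e R A' A B] pm_interleaved_sym[OF AA'] assms by auto
  then have "pm_interleaved R (T ((d/2 + e) + d/2)) A' B'"
    using pm_interleaved_T_add[of "d/2 + e" "d/2" R A' B B'] BB' assms e d by auto
  then show "pm_interleaved R (T (e + d)) A' B'" by (simp add: algebra_simps)
qed

lemma d_a_eq_if_close:
  fixes A :: "('p, 'k, 'a) pmod" and B :: "('p, 'k, 'b) pmod"
    and A' :: "('p, 'k, 'a') pmod" and B' :: "('p, 'k, 'b') pmod"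
  assumes "pm_functorial R A" "pm_functorial R B" "pm_functorial R A'" "pm_functorial R B'"
    and "\<And>\<delta>. 0 < \<delta> \<Longrightarrow> pm_interleaved R (T \<delta>) A A'"
    and "\<And>\<delta>. 0 < \<delta> \<Longrightarrow> pm_interleaved R (T \<delta>) B B'"
  shows "d_a R T A B = d_a R T A' B'"
  using d_a_le_if_close[OF assms] d_a_le_if_close[OF assms(3,4,1,2)] assms(5,6) pm_interleaved_sym
  by (metis order_antisym)

end

section \<open>Limits over up-sets\<close>

definition pm_lim :: "('p::order, 'k, 'm) pmod \<Rightarrow> ('p \<Rightarrow> 'p set) \<Rightarrow> ('p, 'k, 'p \<Rightarrow> 'm) pmod" where
  "pm_lim M S = (\<lambda>p. lim_module (S p) (\<le>) (fst M) (snd M), \<lambda>p q. lim_restr (S q))"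

lemma lim_module_carrier_iff:
  "f \<in> carrier (lim_module I rel Mo Ma) \<longleftrightarrow>
   (\<forall>i\<in>I. f i \<in> carrier (Mo i)) \<and> (\<forall>i\<in>I. \<forall>j\<in>I. rel i j \<longrightarrow> Ma i j (f i) = f j) \<and>
   (\<forall>i. i \<notin> I \<longrightarrow> f i = undefined)"
  by (simp add: lim_module_def lim_carrier_def)

lemma lim_module_add:
  "add (lim_module I rel Mo Ma) f g = (\<lambda>i. if i \<in> I then add (Mo i) (f i) (g i) else undefined)"
  by (simp add: lim_module_def)

lemma lim_module_smult:
  "smult (lim_module I rel Mo Ma) r f = (\<lambda>i. if i \<in> I then smult (Mo i) r (f i) else undefined)"
  by (simp add: lim_module_def)

lemma lim_restr_hom:
  assumes "J \<subseteq> I"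
  shows "lim_restr J \<in> module_hom R (lim_module I rel Mo Ma) (lim_module J rel Mo Ma)"
proof (rule module_homI)
  fix x assume "x \<in> carrier (lim_module I rel Mo Ma)"
  then show "lim_restr J x \<in> carrier (lim_module J rel Mo Ma)"
    using assms unfolding lim_module_carrier_iff lim_restr_def by (force simp: subset_iff)
qed (use assms in \<open>auto simp: lim_module_add lim_module_smult lim_restr_def fun_eq_iff\<close>)

lemma lim_restr_lim_restr: "K \<subseteq> J \<Longrightarrow> lim_restr K (lim_restr J f) = lim_restr K f"
  unfolding lim_restr_def by (auto simp: fun_eq_iff)

lemma pm_functorial_pm_lim:
  assumes "\<And>p q. p \<le> q \<Longrightarrow> S q \<subseteq> S p"
  shows "pm_functorial R (pm_lim M S)"
  by (rule pm_functorialI) (use assms in \<open>auto simp: pm_lim_def lim_restr_hom lim_restr_lim_restr\<close>)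

lemma pm_morph_lim_extend:
  fixes M :: "('p::order, 'k, 'm) pmod"
  assumes M: "persistence_module R M" and T: "translation T"
    and S: "\<And>p q. p \<le> q \<Longrightarrow> S q \<subseteq> S p" and S_T_ge: "\<And>p x. x \<in> S (T p) \<Longrightarrow> p \<le> x"
  shows "pm_morph R M (pm_pull T (pm_lim M S)) (\<lambda>p m x. if x \<in> S (T p)
      then snd M p x m else undefined)"
  unfolding pm_morph_def pm_pull_def pm_lim_def fst_conv snd_conv
proof (intro conjI allI impI ballI)
  fix p
  show "(\<lambda>m x. if x \<in> S (T p) then snd M p x m else undefined) \<in>
      module_hom R (fst M p) (lim_module (S (T p)) (\<le>) (fst M) (snd M))"
    using module_hom_closed[OF persistence_module_hom[OF M S_T_ge]] persistence_module_comp[OF M]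
      module_hom_add[OF persistence_module_hom[OF M S_T_ge]] S_T_ge
      module_hom_smult[OF persistence_module_hom[OF M S_T_ge]]
    by (intro module_homI) (auto simp: lim_module_add lim_module_smult lim_module_carrier_iff)
next
  fix p q x assume pq: "p \<le> q" and x: "x \<in> carrier (fst M p)"
  have "S (T q) \<subseteq> S (T p)" using S translation_mono[OF T pq] by blast
  then show "(\<lambda>y. if y \<in> S (T q) then snd M q y (snd M p q x) else undefined) =
      lim_restr (S (T q)) (\<lambda>y. if y \<in> S (T p) then snd M p y x else undefined)"
    unfolding lim_restr_def using S_T_ge[of _ q] persistence_module_comp[OF M pq _ x]
    by (auto simp: fun_eq_iff)
qed

lemma pm_morph_lim_eval:
  assumes T: "translation T" and S: "\<And>p q. p \<le> q \<Longrightarrow> S q \<subseteq> S p" and S_T: "\<And>p. T p \<in> S p"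
  shows "pm_morph R (pm_lim M S) (pm_pull T M) (\<lambda>p s. s (T p))"
  unfolding pm_morph_def pm_pull_def pm_lim_def fst_conv snd_conv
proof (intro conjI allI impI ballI)
  fix p show "(\<lambda>s. s (T p)) \<in> module_hom R (lim_module (S p) (\<le>) (fst M) (snd M)) (fst M (T p))"
    using S_T by (intro module_homI) (auto simp: lim_module_carrier_iff lim_module_add
      lim_module_smult)
next
  fix p q x assume pq: "p \<le> q" and x: "x \<in> carrier (lim_module (S p) (\<le>) (fst M) (snd M))"
  have "T q \<in> S p" using S_T S pq by blast
  then show "lim_restr (S q) x (T q) = snd M (T p) (T q) (x (T p))"
    using x S_T translation_mono[OF T pq] unfolding lim_restr_def lim_module_carrier_iff by auto
qed

text \<open>If \<open>S p\<close> lies above \<open>p\<close> and contains \<open>T p\<close>, then \<open>M\<close> and the limits over \<open>S\<close> are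
  \<open>T\<close>-interleaved: evaluate a compatible family at \<open>T p\<close> one way, and extend \<open>m \<in> M\<^sub>p\<close> by its
  images the other way.\<close>

lemma pm_interleaved_pm_lim:
  fixes M :: "('p::order, 'k, 'm) pmod"
  assumes M: "persistence_module R M" and T: "translation T"
    and S: "\<And>p q. p \<le> q \<Longrightarrow> S q \<subseteq> S p" and S_T: "\<And>p. T p \<in> S p"
    and S_ge: "\<And>p x. x \<in> S p \<Longrightarrow> p \<le> x"
  shows "pm_interleaved R T M (pm_lim M S)"
proof -
  have S_T_ge: "x \<in> S (T p) \<Longrightarrow> p \<le> x" for x p
    using order.trans[OF translation_increasing[OF T] S_ge] by blast
  show ?thesis unfolding pm_interleaved_def
  proof (intro exI conjI allI ballI)
    show "pm_morph R M (pm_pull T (pm_lim M S))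
        (\<lambda>p m x. if x \<in> S (T p) then snd M p x m else undefined)"
      by (rule pm_morph_lim_extend[OF M T S S_T_ge])
    show "pm_morph R (pm_lim M S) (pm_pull T M) (\<lambda>p s. s (T p))"
      by (rule pm_morph_lim_eval[OF T S S_T])
  next
    fix p x assume "x \<in> carrier (fst M p)"
    then show "(if T (T p) \<in> S (T p) then snd M p (T (T p)) x else undefined) = snd M p (T (T p)) x"
      using S_T by simp
  next
    fix p y assume "y \<in> carrier (fst (pm_lim M S) p)"
    then have y: "\<forall>i\<in>S p. \<forall>j\<in>S p. i \<le> j \<longrightarrow> snd M i j (y i) = y j"
      unfolding pm_lim_def by (simp add: lim_module_carrier_iff)
    have "S (T (T p)) \<subseteq> S p" using S[OF translation_increasing2[OF T]] .
    then show "(\<lambda>x. if x \<in> S (T (T p)) then snd M (T p) x (y (T p)) else undefined) =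
        snd (pm_lim M S) p (T (T p)) y"
      using y S_T S_T_ge[of _ "T p"] unfolding lim_restr_def pm_lim_def by (auto simp: fun_eq_iff)
  qed
qed

lemma j_shriek_j_lower_star: "j_shriek (j_lower_star M) = pm_lim M int_upset"
  unfolding j_shriek_def j_lower_star_def pm_lim_def by simp

lemma pm_under_eq_pm_lim: "pm_under M = pm_lim M way_upset"
  unfolding pm_under_def pm_lim_def by simp

context translation_family
begin

lemma d_a_pm_lim:
  fixes M :: "('p, 'k, 'm) pmod" and N :: "('p, 'k, 'n) pmod"
  assumes M: "persistence_module R M" and N: "persistence_module R N"
    and S: "\<And>p q. p \<le> q \<Longrightarrow> S q \<subseteq> S p" and S_T: "\<And>\<delta> p. 0 < \<delta> \<Longrightarrow> T \<delta> p \<in> S p"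
    and S_ge: "\<And>p x. x \<in> S p \<Longrightarrow> p \<le> x"
  shows "d_a R T M N = d_a R T (pm_lim M S) (pm_lim N S)"
proof (rule d_a_eq_if_close)
  fix \<delta> :: real assume \<delta>: "0 < \<delta>"
  show "pm_interleaved R (T \<delta>) M (pm_lim M S)"
    by (rule pm_interleaved_pm_lim[OF M translation_T S S_T[OF \<delta>] S_ge]) (use \<delta> in simp)
  show "pm_interleaved R (T \<delta>) N (pm_lim N S)"
    by (rule pm_interleaved_pm_lim[OF N translation_T S S_T[OF \<delta>] S_ge]) (use \<delta> in simp)
qed (use M N S in \<open>auto intro: persistence_module_functorial pm_functorial_pm_lim\<close>)

lemma d_a_pm_under:
  assumes "persistence_module R M" "persistence_module R N"
  shows "d_a R T M N = d_a R T (pm_under M) (pm_under N)"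
  unfolding pm_under_eq_pm_lim
  by (rule d_a_pm_lim[OF assms]) (auto intro: way_below_mono way_below_T way_below_imp_le)

lemma d_a_j_shriek_j_lower_star:
  assumes "persistence_module R M" "persistence_module R N"
  shows "d_a R T M N = d_a R T (j_shriek (j_lower_star M)) (j_shriek (j_lower_star N))"
  unfolding j_shriek_j_lower_star
  by (rule d_a_pm_lim[OF assms int_upset_antimono T_in_int_upset int_upset_imp_le])

end

context abelian_group begin

lemma a_minus_self: "x \<in> carrier G \<Longrightarrow> x \<ominus> x = \<zero>"
  by (simp add: minus_eq r_neg)

lemma a_minus_trans: "x \<in> carrier G \<Longrightarrow> v \<in> carrier G \<Longrightarrow> w \<in> carrier G \<Longrightarrow> (x \<ominus> v) \<oplus> (v \<ominus> w) = x \<ominus> w"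
  by (simp add: minus_eq a_assoc r_neg1)

lemma a_inv_a_minus: "v \<in> carrier G \<Longrightarrow> w \<in> carrier G \<Longrightarrow> \<ominus> (v \<ominus> w) = w \<ominus> v"
  by (simp add: minus_eq minus_add minus_minus a_comm)

lemma a_minus_add: "a \<in> carrier G \<Longrightarrow> b \<in> carrier G \<Longrightarrow> c \<in> carrier G \<Longrightarrow> d \<in> carrier G \<Longrightarrow>
   (a \<oplus> b) \<ominus> (c \<oplus> d) = (a \<ominus> c) \<oplus> (b \<ominus> d)"
  by (simp add: minus_eq minus_add a_ac)

lemma a_minus_zero_imp_eq: "a \<in> carrier G \<Longrightarrow> b \<in> carrier G \<Longrightarrow> a \<ominus> b = \<zero> \<Longrightarrow> a = b"
  by (metis add.inv_closed add.inv_equality minus_eq minus_minus r_neg a_comm)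

end

lemma submodule_zero: "submodule H R M \<Longrightarrow> zero M \<in> H"
  using subgroup.one_closed[OF submodule.axioms(1)] by fastforce
lemma submodule_add: "submodule H R M \<Longrightarrow> a \<in> H \<Longrightarrow> b \<in> H \<Longrightarrow> add M a b \<in> H"
  using subgroup.m_closed[OF submodule.axioms(1)] by fastforce
lemma submodule_a_inv: "submodule H R M \<Longrightarrow> a \<in> H \<Longrightarrow> a_inv M a \<in> H"
  using subgroup.m_inv_closed[OF submodule.axioms(1)] unfolding a_inv_def by fastforce
lemma submodule_smult: "submodule H R M \<Longrightarrow> r \<in> carrier R \<Longrightarrow> a \<in> H \<Longrightarrow> smult M r a \<in> H"
  using submodule.smult_closed by fastforce

locale module_family =
  fixes R :: "('k,'r) ring_scheme" and I :: "'i set" and Mo :: "'i \<Rightarrow> ('k,'m) module"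
  assumes R_cring: "cring R"
    and module_Mo: "\<And>i. i \<in> I \<Longrightarrow> Module.module R (Mo i)"
begin

abbreviation dsum where "dsum \<equiv> dsum_module I Mo"

definition supp where "supp v = {i\<in>I. v i \<noteq> zero (Mo i)}"

lemma dsum_carrier_iff: "v \<in> carrier dsum \<longleftrightarrow> (\<forall>i\<in>I. v i \<in> carrier (Mo i)) \<and> (\<forall>i. i \<notin> I \<longrightarrow> v i =
    undefined) \<and> finite (supp v)"
  by (simp add: dsum_module_def supp_def)

lemma dsum_add: "add dsum v w = (\<lambda>i. if i \<in> I then add (Mo i) (v i) (w i) else undefined)"
  by (simp add: dsum_module_def)
lemma dsum_zero: "zero dsum = (\<lambda>i. if i \<in> I then zero (Mo i) else undefined)"
  by (simp add: dsum_module_def)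
lemma dsum_smult: "smult dsum r v = (\<lambda>i. if i \<in> I then smult (Mo i) r (v i) else undefined)"
  by (simp add: dsum_module_def)

lemma abelian_group_Mo: "i \<in> I \<Longrightarrow> abelian_group (Mo i)"
  using module_Mo Module.module.axioms(2) by blast

lemma Mo_laws:
  assumes i: "i \<in> I"
  shows "zero (Mo i) \<in> carrier (Mo i)"
    and "x \<in> carrier (Mo i) \<Longrightarrow> y \<in> carrier (Mo i) \<Longrightarrow> add (Mo i) x y \<in> carrier (Mo i)"
    and "x \<in> carrier (Mo i) \<Longrightarrow> y \<in> carrier (Mo i) \<Longrightarrow> z \<in> carrier (Mo i) \<Longrightarrow> add (Mo i) (add (Mo i) x y)
        z = add (Mo i) x (add (Mo i) y z)"
    and "x \<in> carrier (Mo i) \<Longrightarrow> y \<in> carrier (Mo i) \<Longrightarrow> add (Mo i) x y = add (Mo i) y x"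
    and "x \<in> carrier (Mo i) \<Longrightarrow> add (Mo i) (zero (Mo i)) x = x"
    and "x \<in> carrier (Mo i) \<Longrightarrow> add (Mo i) x (zero (Mo i)) = x"
    and "x \<in> carrier (Mo i) \<Longrightarrow> a_inv (Mo i) x \<in> carrier (Mo i)"
    and "x \<in> carrier (Mo i) \<Longrightarrow> add (Mo i) (a_inv (Mo i) x) x = zero (Mo i)"
    and "a_inv (Mo i) (zero (Mo i)) = zero (Mo i)"
    and "r \<in> carrier R \<Longrightarrow> x \<in> carrier (Mo i) \<Longrightarrow> smult (Mo i) r x \<in> carrier (Mo i)"
    and "r \<in> carrier R \<Longrightarrow> smult (Mo i) r (zero (Mo i)) = zero (Mo i)"
    and "r \<in> carrier R \<Longrightarrow> s \<in> carrier R \<Longrightarrow> x \<in> carrier (Mo i) \<Longrightarrow> smult (Mo i) (add R r s) x = add (Mo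
        i) (smult (Mo i) r x) (smult (Mo i) s x)"
    and "r \<in> carrier R \<Longrightarrow> x \<in> carrier (Mo i) \<Longrightarrow> y \<in> carrier (Mo i) \<Longrightarrow> smult (Mo i) r (add (Mo i) x y) =
        add (Mo i) (smult (Mo i) r x) (smult (Mo i) r y)"
    and "r \<in> carrier R \<Longrightarrow> s \<in> carrier R \<Longrightarrow> x \<in> carrier (Mo i) \<Longrightarrow> smult (Mo i) (mult R r s) x = smult
        (Mo i) r (smult (Mo i) s x)"
    and "x \<in> carrier (Mo i) \<Longrightarrow> smult (Mo i) (one R) x = x"
proof -
  interpret Mi: Module.module R "Mo i" by (rule module_Mo[OF i])
  show "zero (Mo i) \<in> carrier (Mo i)" by simp
  show "x \<in> carrier (Mo i) \<Longrightarrow> y \<in> carrier (Mo i) \<Longrightarrow> add (Mo i) x y \<in> carrier (Mo i)" by simp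
  show "x \<in> carrier (Mo i) \<Longrightarrow> y \<in> carrier (Mo i) \<Longrightarrow> z \<in> carrier (Mo i) \<Longrightarrow> add (Mo i) (add (Mo i) x y) z
      = add (Mo i) x (add (Mo i) y z)" by (simp add: Mi.a_assoc)
  show "x \<in> carrier (Mo i) \<Longrightarrow> y \<in> carrier (Mo i) \<Longrightarrow> add (Mo i) x y = add (Mo i) y x"
    by (simp add: Mi.a_comm)
  show "x \<in> carrier (Mo i) \<Longrightarrow> add (Mo i) (zero (Mo i)) x = x" by simp
  show "x \<in> carrier (Mo i) \<Longrightarrow> add (Mo i) x (zero (Mo i)) = x" by simp
  show "x \<in> carrier (Mo i) \<Longrightarrow> a_inv (Mo i) x \<in> carrier (Mo i)" by simp
  show "x \<in> carrier (Mo i) \<Longrightarrow> add (Mo i) (a_inv (Mo i) x) x = zero (Mo i)" by (simp add: Mi.l_neg)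
  show "a_inv (Mo i) (zero (Mo i)) = zero (Mo i)" by simp
  show "r \<in> carrier R \<Longrightarrow> x \<in> carrier (Mo i) \<Longrightarrow> smult (Mo i) r x \<in> carrier (Mo i)" by simp
  show "r \<in> carrier R \<Longrightarrow> smult (Mo i) r (zero (Mo i)) = zero (Mo i)" by simp
  show "r \<in> carrier R \<Longrightarrow> s \<in> carrier R \<Longrightarrow> x \<in> carrier (Mo i) \<Longrightarrow> smult (Mo i) (add R r s) x = add (Mo i)
      (smult (Mo i) r x) (smult (Mo i) s x)" by (simp add: Mi.smult_l_distr)
  show "r \<in> carrier R \<Longrightarrow> x \<in> carrier (Mo i) \<Longrightarrow> y \<in> carrier (Mo i) \<Longrightarrow> smult (Mo i) r (add (Mo i) x y) =
      add (Mo i) (smult (Mo i) r x) (smult (Mo i) r y)" by (simp add: Mi.smult_r_distr)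
  show "r \<in> carrier R \<Longrightarrow> s \<in> carrier R \<Longrightarrow> x \<in> carrier (Mo i) \<Longrightarrow> smult (Mo i) (mult R r s) x = smult (Mo
      i) r (smult (Mo i) s x)" by (simp add: Mi.smult_assoc1)
  show "x \<in> carrier (Mo i) \<Longrightarrow> smult (Mo i) (one R) x = x" by simp
qed

lemma supp_subset: "supp v \<subseteq> I"
  unfolding supp_def by auto

lemma finite_supp: "v \<in> carrier dsum \<Longrightarrow> finite (supp v)"
  unfolding dsum_carrier_iff by simp

lemma supp_add: "supp (add dsum x y) \<subseteq> supp x \<union> supp y"
  unfolding supp_def dsum_add using Mo_laws(1,5) by fastforce

lemma supp_smult: "a \<in> carrier R \<Longrightarrow> supp (smult dsum a x) \<subseteq> supp x"
  unfolding supp_def dsum_smult using Mo_laws(11) by fastforce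

lemma dsum_add_closed: "v \<in> carrier dsum \<Longrightarrow> w \<in> carrier dsum \<Longrightarrow> add dsum v w \<in> carrier dsum"
  using supp_add[of v w] unfolding dsum_carrier_iff
  by (auto simp: dsum_add Mo_laws(2) intro: finite_subset)

lemma dsum_neg:
  assumes x: "x \<in> carrier dsum"
  defines "y \<equiv> \<lambda>i. if i \<in> I then a_inv (Mo i) (x i) else undefined"
  shows "y \<in> carrier dsum" and "add dsum y x = zero dsum"
proof -
  have "supp y \<subseteq> supp x"
    unfolding supp_def y_def using x Mo_laws(9) unfolding dsum_carrier_iff by fastforce
  then show "y \<in> carrier dsum"
    using x unfolding dsum_carrier_iff y_def by (auto simp: Mo_laws(7) intro: finite_subset)
  show "add dsum y x = zero dsum"
    using x unfolding dsum_add dsum_zero y_def dsum_carrier_iff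
      by (auto simp: fun_eq_iff Mo_laws(8))
qed

lemma abelian_group_dsum: "abelian_group dsum"
proof (rule abelian_groupI)
  show "zero dsum \<in> carrier dsum"
    unfolding dsum_carrier_iff supp_def dsum_zero by (simp add: Mo_laws(1))
next
  fix x assume "x \<in> carrier dsum"
  then show "\<exists>y\<in>carrier dsum. add dsum y x = zero dsum" using dsum_neg by blast
next
  fix x y z assume "x \<in> carrier dsum" "y \<in> carrier dsum" "z \<in> carrier dsum"
  then show "add dsum (add dsum x y) z = add dsum x (add dsum y z)"
    unfolding dsum_carrier_iff dsum_add by (auto simp: fun_eq_iff Mo_laws(2,3))
next
  fix x y assume "x \<in> carrier dsum" "y \<in> carrier dsum"
  then show "add dsum x y = add dsum y x"
    unfolding dsum_carrier_iff dsum_add by (auto simp: fun_eq_iff Mo_laws(4))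
next
  fix x assume "x \<in> carrier dsum"
  then show "add dsum (zero dsum) x = x"
    unfolding dsum_carrier_iff dsum_add dsum_zero by (auto simp: fun_eq_iff Mo_laws(5))
qed (rule dsum_add_closed)

lemma module_dsum: "Module.module R dsum"
proof (rule moduleI[OF R_cring abelian_group_dsum])
  fix a x assume "a \<in> carrier R" "x \<in> carrier dsum"
  then show "smult dsum a x \<in> carrier dsum"
    using supp_smult[of a x] unfolding dsum_carrier_iff
    by (auto simp: dsum_smult Mo_laws(10) intro: finite_subset)
qed (auto simp: dsum_carrier_iff dsum_add dsum_smult fun_eq_iff Mo_laws)

abbreviation ins where "ins \<equiv> dsum_ins I Mo"

lemma supp_ins: "supp (ins i a) \<subseteq> {i}"
  unfolding supp_def dsum_ins_def by auto

lemma ins_closed: "i \<in> I \<Longrightarrow> a \<in> carrier (Mo i) \<Longrightarrow> ins i a \<in> carrier dsum"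
  using supp_ins[of i a] unfolding dsum_carrier_iff
  by (auto simp: dsum_ins_def Mo_laws(1) intro: finite_subset)

lemma ins_hom: assumes i: "i \<in> I" shows "ins i \<in> module_hom R (Mo i) dsum"
proof (rule module_homI)
  fix x assume "x \<in> carrier (Mo i)" then show "ins i x \<in> carrier dsum" using ins_closed i by blast
next
  fix x y assume "x \<in> carrier (Mo i)" "y \<in> carrier (Mo i)"
  then show "ins i (add (Mo i) x y) = add dsum (ins i x) (ins i y)"
    unfolding dsum_ins_def dsum_add using module_Mo i by (intro ext) (simp add: Mo_laws)
next
  fix r x assume "r \<in> carrier R" "x \<in> carrier (Mo i)"
  then show "ins i (smult (Mo i) r x) = smult dsum r (ins i x)"
    unfolding dsum_ins_def dsum_smult using module_Mo i by (intro ext) (simp add: Mo_laws)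
qed

lemma dsum_induct:
  assumes zero: "P (zero dsum)"
    and step: "\<And>v i a. v \<in> carrier dsum \<Longrightarrow> P v \<Longrightarrow> i \<in> I \<Longrightarrow> a \<in> carrier (Mo i) \<Longrightarrow>
      P (add dsum v (ins i a))"
    and v: "v \<in> carrier dsum"
  shows "P v"
proof -
  have "v \<in> carrier dsum \<Longrightarrow> supp v \<subseteq> F \<Longrightarrow> P v" if "finite F" for F v
    using that
  proof (induction F arbitrary: v)
    case empty
    then have "v = zero dsum" by (auto simp: fun_eq_iff dsum_carrier_iff dsum_zero supp_def)
    then show ?case using zero by simp
  next
    case (insert i F)
    show ?case
    proof (cases "i \<in> I")
      case False
      then show ?thesis using insert.IH insert.prems supp_subset by blast
    next
      case True
      define w where "w = (\<lambda>j. if j = i then zero (Mo i) else v j)"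
      have vi: "v i \<in> carrier (Mo i)" using insert.prems(1) True unfolding dsum_carrier_iff by blast
      have supp_w: "supp w \<subseteq> F" using insert.prems(2) unfolding supp_def w_def by auto
      then have w: "w \<in> carrier dsum"
        using insert.prems(1) insert.hyps(1) True unfolding dsum_carrier_iff w_def
        by (auto intro: finite_subset simp: Mo_laws(1))
      have "v = add dsum w (ins i (v i))"
        using insert.prems(1) True vi unfolding dsum_carrier_iff
        by (auto simp: fun_eq_iff dsum_add dsum_ins_def w_def Mo_laws(5,6))
      then show ?thesis using step[OF w _ True vi] insert.IH[OF w supp_w] by simp
    qed
  qed
  then show ?thesis using v finite_supp by blast
qed

end

section \<open>Colimits\<close>

locale module_diagram = module_family R I Mo for R :: "('k,'r) ring_scheme" and I :: "'i set"
  and Mo :: "'i \<Rightarrow> ('k,'m) module" +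
  fixes rel :: "'i \<Rightarrow> 'i \<Rightarrow> bool" and Ma :: "'i \<Rightarrow> 'i \<Rightarrow> 'm \<Rightarrow> 'm"
  assumes hom_Ma: "\<And>i j. i \<in> I \<Longrightarrow> j \<in> I \<Longrightarrow> rel i j \<Longrightarrow> Ma i j \<in> module_hom R (Mo i) (Mo j)"
begin

abbreviation Rel where "Rel \<equiv> colim_rel R I rel Mo Ma"
abbreviation Colim where "Colim \<equiv> colim_module R I rel Mo Ma"
abbreviation cl where "cl \<equiv> qclass dsum Rel"

lemma colim_gens_iff: "x \<in> colim_gens I rel Mo Ma \<longleftrightarrow>
  (\<exists>i j a. x = a_minus dsum (ins j (Ma i j a)) (ins i a) \<and> i \<in> I \<and> j \<in> I \<and> rel i j \<and> a \<in> carrier (Mo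
    i))"
  unfolding colim_gens_def by (rule mem_Collect_eq)

lemma colim_gens_subset: "colim_gens I rel Mo Ma \<subseteq> carrier dsum"
proof
  fix x assume "x \<in> colim_gens I rel Mo Ma"
  then obtain i j a where x: "x = a_minus dsum (ins j (Ma i j a)) (ins i a)"
    and ij: "i \<in> I" "j \<in> I" "rel i j" "a \<in> carrier (Mo i)"
    unfolding colim_gens_iff by blast
  have "Ma i j a \<in> carrier (Mo j)" using module_hom_closed[OF hom_Ma[OF ij(1-3)] ij(4)] .
  then have "ins j (Ma i j a) \<in> carrier dsum" "ins i a \<in> carrier dsum" using ins_closed ij by auto
  then show "x \<in> carrier dsum" unfolding x by (rule abelian_group.minus_closed[OF
    abelian_group_dsum])
qed

lemma Rel_iff: "x \<in> Rel \<longleftrightarrow> (\<forall>S. submodule S R dsum \<and> colim_gens I rel Mo Ma \<subseteq> S \<longrightarrow> x \<in> S)"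
  unfolding colim_rel_def by simp

lemma RelD: "x \<in> Rel \<Longrightarrow> submodule S R dsum \<Longrightarrow> colim_gens I rel Mo Ma \<subseteq> S \<Longrightarrow> x \<in> S"
  unfolding Rel_iff by simp

lemma RelI: "(\<And>S. submodule S R dsum \<Longrightarrow> colim_gens I rel Mo Ma \<subseteq> S \<Longrightarrow> x \<in> S) \<Longrightarrow> x \<in> Rel"
  unfolding Rel_iff by simp

lemma submodule_Rel: "submodule Rel R dsum"
proof -
  interpret D: Module.module R dsum by (rule module_dsum)
  have cF: "submodule (carrier dsum) R dsum" using D.carrier_is_submodule .
  show ?thesis
  proof (rule D.submoduleI)
    show "Rel \<subseteq> carrier dsum"
    proof
      fix x assume "x \<in> Rel" then show "x \<in> carrier dsum" by (rule RelD[OF _ cF colim_gens_subset])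
    qed
    show "zero dsum \<in> Rel" by (rule RelI) (rule submodule_zero)
    show "\<And>a. a \<in> Rel \<Longrightarrow> a_inv dsum a \<in> Rel"
    proof (rule RelI)
      fix a S assume "a \<in> Rel" "submodule S R dsum" "colim_gens I rel Mo Ma \<subseteq> S"
      then show "a_inv dsum a \<in> S" using RelD submodule_a_inv by metis
    qed
    show "\<And>a b. a \<in> Rel \<Longrightarrow> b \<in> Rel \<Longrightarrow> add dsum a b \<in> Rel"
    proof (rule RelI)
      fix a b S assume "a \<in> Rel" "b \<in> Rel" "submodule S R dsum" "colim_gens I rel Mo Ma \<subseteq> S"
      then show "add dsum a b \<in> S" using RelD submodule_add by metis
    qed
    show "\<And>a x. a \<in> carrier R \<Longrightarrow> x \<in> Rel \<Longrightarrow> smult dsum a x \<in> Rel"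
    proof (rule RelI)
      fix a x S assume "a \<in> carrier R" "x \<in> Rel" "submodule S R dsum" "colim_gens I rel Mo Ma \<subseteq> S"
      then show "smult dsum a x \<in> S" using RelD submodule_smult by metis
    qed
  qed
qed

lemma colim_gens_subset_Rel: "colim_gens I rel Mo Ma \<subseteq> Rel"
proof
  fix x assume "x \<in> colim_gens I rel Mo Ma" then show "x \<in> Rel" by (intro RelI) blast
qed

lemma Rel_least: assumes "submodule S R dsum" "colim_gens I rel Mo Ma \<subseteq> S" shows "Rel \<subseteq> S"
proof
  fix x assume "x \<in> Rel" then show "x \<in> S" using assms by (rule RelD)
qed

lemma mem_cl_self: "v \<in> carrier dsum \<Longrightarrow> v \<in> cl v"
  unfolding qclass_def using abelian_group.a_minus_self[OF abelian_group_dsum] submodule_zero[OF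
    submodule_Rel] by simp

lemma mem_cl_iff: "w \<in> cl v \<longleftrightarrow> w \<in> carrier dsum \<and> a_minus dsum w v \<in> Rel"
  unfolding qclass_def by simp

lemma cl_eqI: assumes v: "v \<in> carrier dsum" and w: "w \<in> carrier dsum"
  and vw: "a_minus dsum v w \<in> Rel"
  shows "cl v = cl w"
proof -
  interpret D: abelian_group dsum by (rule abelian_group_dsum)
  have wv: "a_minus dsum w v \<in> Rel" using submodule_a_inv[OF submodule_Rel vw] D.a_inv_a_minus[OF v
    w] by simp
  show ?thesis
  proof (intro equalityI subsetI)
    fix x assume "x \<in> cl v"
    then have x: "x \<in> carrier dsum" "a_minus dsum x v \<in> Rel" unfolding mem_cl_iff by auto
    have "a_minus dsum x w = add dsum (a_minus dsum x v) (a_minus dsum v w)"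
      using D.a_minus_trans x(1) v w by simp
    then show "x \<in> cl w" using submodule_add[OF submodule_Rel x(2) vw] x(1) unfolding mem_cl_iff
      by simp
  next
    fix x assume "x \<in> cl w"
    then have x: "x \<in> carrier dsum" "a_minus dsum x w \<in> Rel" unfolding mem_cl_iff by auto
    have "a_minus dsum x v = add dsum (a_minus dsum x w) (a_minus dsum w v)"
      using D.a_minus_trans x(1) v w by simp
    then show "x \<in> cl v" using submodule_add[OF submodule_Rel x(2) wv] x(1) unfolding mem_cl_iff
      by simp
  qed
qed

lemma cl_eq_iff: assumes v: "v \<in> carrier dsum" and w: "w \<in> carrier dsum"
  shows "cl v = cl w \<longleftrightarrow> a_minus dsum v w \<in> Rel"
proof
  assume "cl v = cl w"
  then have "v \<in> cl w" using mem_cl_self[OF v] by simp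
  then show "a_minus dsum v w \<in> Rel" unfolding mem_cl_iff by simp
qed (rule cl_eqI[OF v w])

lemma some_in_cl: assumes v: "v \<in> carrier dsum" shows "(SOME a. a \<in> cl v) \<in> carrier dsum" "cl (SOME
    a. a \<in> cl v) = cl v"
proof -
  have "(SOME a. a \<in> cl v) \<in> cl v" using mem_cl_self[OF v] by (rule someI[of "\<lambda>a. a \<in> cl v"])
  then have "(SOME a. a \<in> cl v) \<in> carrier dsum" "a_minus dsum (SOME a. a \<in> cl v) v \<in> Rel"
    unfolding mem_cl_iff by simp_all
  then show "(SOME a. a \<in> cl v) \<in> carrier dsum" "cl (SOME a. a \<in> cl v) = cl v"
    using cl_eqI v by simp_all
qed

lemma Colim_carrier: "carrier Colim = cl ` carrier dsum"
  by (simp add: colim_module_def quot_module_def)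

lemma ColimE: assumes "A \<in> carrier Colim" obtains v where "v \<in> carrier dsum" "A = cl v"
  using assms unfolding Colim_carrier by (rule imageE)

lemma cl_in_Colim: "v \<in> carrier dsum \<Longrightarrow> cl v \<in> carrier Colim"
  unfolding Colim_carrier by (rule imageI)

lemma Colim_add: assumes v: "v \<in> carrier dsum" and w: "w \<in> carrier dsum"
  shows "add Colim (cl v) (cl w) = cl (add dsum v w)"
proof -
  interpret D: abelian_group dsum by (rule abelian_group_dsum)
  define a b where "a = (SOME a. a \<in> cl v)" and "b = (SOME a. a \<in> cl w)"
  have a: "a \<in> carrier dsum" "cl a = cl v" and b: "b \<in> carrier dsum" "cl b = cl w"
    using some_in_cl v w a_def b_def by auto
  have "a_minus dsum a v \<in> Rel" "a_minus dsum b w \<in> Rel" using a b v w cl_eq_iff by auto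
  then have "a_minus dsum (add dsum a b) (add dsum v w) \<in> Rel"
    using D.a_minus_add a(1) b(1) v w submodule_add[OF submodule_Rel] by simp
  then have "cl (add dsum a b) = cl (add dsum v w)" using cl_eqI a b v w by simp
  then show ?thesis by (simp add: colim_module_def quot_module_def a_def b_def)
qed

lemma Colim_smult: assumes r: "r \<in> carrier R" and v: "v \<in> carrier dsum"
  shows "smult Colim r (cl v) = cl (smult dsum r v)"
proof -
  interpret D: Module.module R dsum by (rule module_dsum)
  define a where "a = (SOME a. a \<in> cl v)"
  have a: "a \<in> carrier dsum" "cl a = cl v" using some_in_cl v a_def by auto
  have k: "a_minus dsum a v \<in> Rel" using a v cl_eq_iff by auto
  have "a_minus dsum (smult dsum r a) (smult dsum r v) = smult dsum r (a_minus dsum a v)"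
    using a(1) v r by (simp add: a_minus_def D.smult_r_distr D.smult_r_minus)
  then have "a_minus dsum (smult dsum r a) (smult dsum r v) \<in> Rel"
    using submodule_smult[OF submodule_Rel r k] by simp
  then have "cl (smult dsum r a) = cl (smult dsum r v)" using cl_eqI a v r by simp
  then show ?thesis by (simp add: colim_module_def quot_module_def a_def)
qed

lemma cl_hom: "cl \<in> module_hom R dsum Colim"
  by (rule module_homI) (auto simp: Colim_carrier Colim_add Colim_smult)

lemma cl_ins_hom: "i \<in> I \<Longrightarrow> (\<lambda>a. cl (ins i a)) \<in> module_hom R (Mo i) Colim"
  using module_hom_comp[OF ins_hom cl_hom] by simp

lemma cl_ins_Ma: assumes ij: "i \<in> I" "j \<in> I" "rel i j" and a: "a \<in> carrier (Mo i)"
  shows "cl (ins j (Ma i j a)) = cl (ins i a)"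
proof (rule cl_eqI)
  show "ins j (Ma i j a) \<in> carrier dsum" using ins_closed ij module_hom_closed[OF hom_Ma[OF ij] a]
    by blast
  show "ins i a \<in> carrier dsum" using ins_closed ij a by blast
  show "a_minus dsum (ins j (Ma i j a)) (ins i a) \<in> Rel"
    by (rule subsetD[OF colim_gens_subset_Rel]) (unfold colim_gens_iff, use ij a in blast)
qed

lemma Colim_hom_eqI:
  assumes f: "f \<in> module_hom R Colim Y" and g: "g \<in> module_hom R Colim Y" and ne: "I \<noteq> {}"
    and fg: "\<And>i a. i \<in> I \<Longrightarrow> a \<in> carrier (Mo i) \<Longrightarrow> f (cl (ins i a)) = g (cl (ins i a))"
    and A: "A \<in> carrier Colim"
  shows "f A = g A"
proof -
  obtain v where v: "v \<in> carrier dsum" "A = cl v" using A by (rule ColimE)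
  obtain i0 where i0: "i0 \<in> I" using ne by blast
  have "zero dsum = ins i0 (zero (Mo i0))" unfolding dsum_zero dsum_ins_def using i0
    by (intro ext) auto
  then have z: "f (cl (zero dsum)) = g (cl (zero dsum))" using fg[OF i0 Mo_laws(1)[OF i0]] by simp
  have "f (cl v) = g (cl v)"
  proof (rule dsum_induct[where P="\<lambda>v. f (cl v) = g (cl v)", OF z _ v(1)])
    fix w i a assume w: "w \<in> carrier dsum" "f (cl w) = g (cl w)" "i \<in> I" "a \<in> carrier (Mo i)"
    have ic: "ins i a \<in> carrier dsum" using ins_closed[OF w(3,4)] .
    have c1: "cl w \<in> carrier Colim" "cl (ins i a) \<in> carrier Colim" using cl_in_Colim w(1) ic by auto
    have "f (cl (add dsum w (ins i a))) = add Y (f (cl w)) (f (cl (ins i a)))"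
      using Colim_add[OF w(1) ic] module_hom_add[OF f c1] by simp
    moreover have "g (cl (add dsum w (ins i a))) = add Y (g (cl w)) (g (cl (ins i a)))"
      using Colim_add[OF w(1) ic] module_hom_add[OF g c1] by simp
    ultimately show "f (cl (add dsum w (ins i a))) = g (cl (add dsum w (ins i a)))" using w fg
      by simp
  qed
  then show ?thesis using v by simp
qed

end

locale colim_cocone = module_diagram R I Mo rel Ma for R :: "('k,'r) ring_scheme" and I :: "'i set"
  and Mo :: "'i \<Rightarrow> ('k,'m) module"
  and rel and Ma +
  fixes X :: "('k,'x) module" and h :: "'i \<Rightarrow> 'm \<Rightarrow> 'x"
  assumes X: "Module.module R X"
    and hom_h: "\<And>i. i \<in> I \<Longrightarrow> h i \<in> module_hom R (Mo i) X"
    and h_compatible: "\<And>i j a. i \<in> I \<Longrightarrow> j \<in> I \<Longrightarrow> rel i j \<Longrightarrow> a \<in> carrier (Mo i) \<Longrightarrow> h j (Ma i j a) = h i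
        a"
begin

interpretation Xm: Module.module R X by (rule X)

definition dsum_lift where "dsum_lift v = finsum X (\<lambda>i. h i (v i)) (supp v)"
definition colim_lift where "colim_lift A = dsum_lift (SOME v. v \<in> A)"

lemma h_zero: "i \<in> I \<Longrightarrow> h i (zero (Mo i)) = zero X"
  by (rule module_hom_zero[OF hom_h abelian_group_Mo Xm.abelian_group_axioms])

lemma h_closed: "i \<in> I \<Longrightarrow> a \<in> carrier (Mo i) \<Longrightarrow> h i a \<in> carrier X"
  by (rule module_hom_closed[OF hom_h])

lemma h_Pi: "v \<in> carrier dsum \<Longrightarrow> F \<subseteq> I \<Longrightarrow> (\<lambda>i. h i (v i)) \<in> F \<rightarrow> carrier X"
  using h_closed unfolding dsum_carrier_iff by blast

lemma dsum_lift_eq_finsum: assumes v: "v \<in> carrier dsum" and F: "finite F" "supp v \<subseteq> F" "F \<subseteq> I"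
  shows "dsum_lift v = finsum X (\<lambda>i. h i (v i)) F"
  unfolding dsum_lift_def
proof (rule Xm.add.finprod_mono_neutral_cong_left[OF F(1,2)])
  fix i assume "i \<in> F - supp v"
  then have "i \<in> I" "v i = zero (Mo i)" using F unfolding supp_def by auto
  then show "h i (v i) = zero X" using h_zero by simp
qed (use h_Pi[OF v F(3)] in auto)

lemma dsum_lift_closed: "v \<in> carrier dsum \<Longrightarrow> dsum_lift v \<in> carrier X"
  unfolding dsum_lift_def by (rule Xm.finsum_closed) (rule h_Pi[OF _ supp_subset])

lemma dsum_lift_add: assumes v: "v \<in> carrier dsum" and w: "w \<in> carrier dsum"
  shows "dsum_lift (add dsum v w) = add X (dsum_lift v) (dsum_lift w)"
proof -
  interpret D: abelian_group dsum by (rule abelian_group_dsum)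
  define F where "F = supp v \<union> supp w"
  have F: "finite F" "F \<subseteq> I" unfolding F_def using finite_supp v w supp_subset by auto
  have vw: "add dsum v w \<in> carrier dsum" using v w by simp
  have "dsum_lift (add dsum v w) = finsum X (\<lambda>i. h i (add dsum v w i)) F"
    by (rule dsum_lift_eq_finsum[OF vw F(1) _ F(2)]) (use supp_add[of v w] F_def in simp)
  also have "\<dots> = finsum X (\<lambda>i. add X (h i (v i)) (h i (w i))) F"
  proof (rule Xm.finsum_cong')
    show "(\<lambda>i. add X (h i (v i)) (h i (w i))) \<in> F \<rightarrow> carrier X"
      using h_Pi[OF v F(2)] h_Pi[OF w F(2)] by auto
    fix i assume "i \<in> F"
    then have i: "i \<in> I" using F by auto
    then have "v i \<in> carrier (Mo i)" "w i \<in> carrier (Mo i)" using v w unfolding dsum_carrier_iff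
      by auto
    then show "h i (add dsum v w i) = add X (h i (v i)) (h i (w i))"
      using i module_hom_add[OF hom_h[OF i]] unfolding dsum_add by simp
  qed simp
  also have "\<dots> = add X (finsum X (\<lambda>i. h i (v i)) F) (finsum X (\<lambda>i. h i (w i)) F)"
    by (rule Xm.finsum_addf) (use h_Pi[OF v F(2)] h_Pi[OF w F(2)] in auto)
  also have "\<dots> = add X (dsum_lift v) (dsum_lift w)"
    using dsum_lift_eq_finsum[OF v F(1) _ F(2)] dsum_lift_eq_finsum[OF w F(1) _ F(2)] F_def by simp
  finally show ?thesis .
qed

lemma dsum_lift_smult: assumes r: "r \<in> carrier R" and v: "v \<in> carrier dsum"
  shows "dsum_lift (smult dsum r v) = smult X r (dsum_lift v)"
proof -
  interpret D: Module.module R dsum by (rule module_dsum)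
  define F where "F = supp v"
  have F: "finite F" "F \<subseteq> I" unfolding F_def using finite_supp v supp_subset by auto
  have rv: "smult dsum r v \<in> carrier dsum" using r v by simp
  have "dsum_lift (smult dsum r v) = finsum X (\<lambda>i. h i (smult dsum r v i)) F"
    by (rule dsum_lift_eq_finsum[OF rv F(1) _ F(2)]) (use supp_smult[OF r, of v] F_def in simp)
  also have "\<dots> = finsum X (\<lambda>i. smult X r (h i (v i))) F"
  proof (rule Xm.finsum_cong')
    show "(\<lambda>i. smult X r (h i (v i))) \<in> F \<rightarrow> carrier X"
      using h_Pi[OF v F(2)] r by auto
    fix i assume "i \<in> F"
    then have i: "i \<in> I" using F by auto
    then have "v i \<in> carrier (Mo i)" using v unfolding dsum_carrier_iff by auto
    then show "h i (smult dsum r v i) = smult X r (h i (v i))"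
      using i module_hom_smult[OF hom_h[OF i] r] unfolding dsum_smult by simp
  qed simp
  also have "\<dots> = smult X r (finsum X (\<lambda>i. h i (v i)) F)"
    by (rule Xm.finsum_smult_ldistr[symmetric]) (use F r h_Pi[OF v F(2)] in auto)
  finally show ?thesis unfolding dsum_lift_def F_def .
qed

lemma dsum_lift_hom: "dsum_lift \<in> module_hom R dsum X"
  by (rule module_homI) (simp_all add: dsum_lift_closed dsum_lift_add dsum_lift_smult)

lemma dsum_lift_ins: assumes i: "i \<in> I" and a: "a \<in> carrier (Mo i)"
  shows "dsum_lift (ins i a) = h i a"
proof -
  have "dsum_lift (ins i a) = finsum X (\<lambda>j. h j (ins i a j)) {i}"
    by (rule dsum_lift_eq_finsum[OF ins_closed[OF i a]]) (use supp_ins i in auto)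
  also have "\<dots> = h i a" using h_closed[OF i a] by (simp add: dsum_ins_def)
  finally show ?thesis .
qed

lemma dsum_lift_Rel: "v \<in> Rel \<Longrightarrow> dsum_lift v = zero X"
proof -
  interpret D: Module.module R dsum by (rule module_dsum)
  let ?N = "{v \<in> carrier dsum. dsum_lift v = zero X}"
  have neg: "dsum_lift (a_inv dsum a) = a_inv X (dsum_lift a)" if "a \<in> carrier dsum" for a
    by (rule module_hom_a_inv[OF dsum_lift_hom D.abelian_group_axioms Xm.abelian_group_axioms that])
  have "submodule ?N R dsum"
  proof (rule D.submoduleI)
    show "?N \<subseteq> carrier dsum" by blast
    show "zero dsum \<in> ?N" using module_hom_zero[OF dsum_lift_hom D.abelian_group_axioms
      Xm.abelian_group_axioms] by simp
    show "\<And>a. a \<in> ?N \<Longrightarrow> a_inv dsum a \<in> ?N" using neg by simp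
    show "\<And>a b. a \<in> ?N \<Longrightarrow> b \<in> ?N \<Longrightarrow> add dsum a b \<in> ?N" using dsum_lift_add by simp
    show "\<And>a x. a \<in> carrier R \<Longrightarrow> x \<in> ?N \<Longrightarrow> smult dsum a x \<in> ?N" using dsum_lift_smult by simp
  qed
  moreover have "colim_gens I rel Mo Ma \<subseteq> ?N"
  proof
    fix x assume "x \<in> colim_gens I rel Mo Ma"
    then obtain i j a where x: "x = a_minus dsum (ins j (Ma i j a)) (ins i a)"
      and ij: "i \<in> I" "j \<in> I" "rel i j" "a \<in> carrier (Mo i)"
      unfolding colim_gens_iff by blast
    have ma: "Ma i j a \<in> carrier (Mo j)" using module_hom_closed[OF hom_Ma[OF ij(1-3)] ij(4)] .
    have c: "ins j (Ma i j a) \<in> carrier dsum" "ins i a \<in> carrier dsum" using ins_closed ij ma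
      by auto
    have "dsum_lift x = a_minus X (dsum_lift (ins j (Ma i j a))) (dsum_lift (ins i a))"
      unfolding x by (rule module_hom_a_minus[OF dsum_lift_hom D.abelian_group_axioms
        Xm.abelian_group_axioms c])
    also have "\<dots> = a_minus X (h i a) (h i a)" using dsum_lift_ins ij ma h_compatible by simp
    also have "\<dots> = zero X" using Xm.a_minus_self h_closed ij by simp
    finally show "x \<in> ?N" using x c by simp
  qed
  ultimately have "Rel \<subseteq> ?N" by (rule Rel_least)
  then show "v \<in> Rel \<Longrightarrow> dsum_lift v = zero X" by blast
qed

lemma dsum_lift_cl_eq: assumes v: "v \<in> carrier dsum" and w: "w \<in> carrier dsum" and e: "cl v = cl w"
  shows "dsum_lift v = dsum_lift w"
proof -
  interpret D: Module.module R dsum by (rule module_dsum)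
  have "a_minus dsum v w \<in> Rel" using cl_eq_iff[OF v w] e by simp
  then have "dsum_lift (a_minus dsum v w) = zero X" by (rule dsum_lift_Rel)
  then have "a_minus X (dsum_lift v) (dsum_lift w) = zero X"
    using module_hom_a_minus[OF dsum_lift_hom D.abelian_group_axioms Xm.abelian_group_axioms v w]
      by simp
  then show ?thesis using Xm.a_minus_zero_imp_eq dsum_lift_closed v w by blast
qed

lemma colim_lift_cl: assumes v: "v \<in> carrier dsum" shows "colim_lift (cl v) = dsum_lift v"
  unfolding colim_lift_def by (rule dsum_lift_cl_eq[OF some_in_cl(1)[OF v] v some_in_cl(2)[OF v]])

lemma colim_lift_hom: "colim_lift \<in> module_hom R Colim X"
proof (rule module_homI)
  fix A assume "A \<in> carrier Colim" then obtain v where v: "v \<in> carrier dsum" "A = cl v"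
    by (rule ColimE)
  show "colim_lift A \<in> carrier X" unfolding v(2) colim_lift_cl[OF v(1)]
    by (rule dsum_lift_closed[OF v(1)])
next
  fix A B assume A: "A \<in> carrier Colim" and B: "B \<in> carrier Colim"
  obtain v where v: "v \<in> carrier dsum" "A = cl v" using A by (rule ColimE)
  obtain w where w: "w \<in> carrier dsum" "B = cl w" using B by (rule ColimE)
  have vw: "add dsum v w \<in> carrier dsum" using dsum_add_closed[OF v(1) w(1)] .
  show "colim_lift (add Colim A B) = add X (colim_lift A) (colim_lift B)"
    unfolding v(2) w(2) Colim_add[OF v(1) w(1)] colim_lift_cl[OF v(1)] colim_lift_cl[OF w(1)]
      colim_lift_cl[OF vw] by (rule dsum_lift_add[OF v(1) w(1)])
next
  fix r A assume r: "r \<in> carrier R" and A: "A \<in> carrier Colim"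
  obtain v where v: "v \<in> carrier dsum" "A = cl v" using A by (rule ColimE)
  have rv: "smult dsum r v \<in> carrier dsum" using Module.module.smult_closed[OF module_dsum r v(1)] .
  show "colim_lift (smult Colim r A) = smult X r (colim_lift A)"
    unfolding v(2) Colim_smult[OF r v(1)] colim_lift_cl[OF v(1)] colim_lift_cl[OF rv]
      by (rule dsum_lift_smult[OF r v(1)])
qed

lemma colim_lift_ins: "i \<in> I \<Longrightarrow> a \<in> carrier (Mo i) \<Longrightarrow> colim_lift (cl (ins i a)) = h i a"
  using colim_lift_cl[OF ins_closed] dsum_lift_ins by simp

end

locale colim_inclusion = I: module_diagram R I Mo rel Ma + J: module_diagram R J Mo rel Ma
  for R :: "('k,'r) ring_scheme" and I J :: "'i set" and Mo :: "'i \<Rightarrow> ('k,'m) module" and rel Ma +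
  assumes IJ: "I \<subseteq> J"
begin

definition extend where "extend v = (\<lambda>i. if i \<in> I then v i else if i \<in> J
    then zero (Mo i) else undefined)"

lemma extend_closed: assumes v: "v \<in> carrier I.dsum" shows "extend v \<in> carrier J.dsum"
proof -
  have "J.supp (extend v) \<subseteq> I.supp v" unfolding J.supp_def I.supp_def extend_def by auto
  then show ?thesis using v IJ unfolding I.dsum_carrier_iff J.dsum_carrier_iff extend_def
    by (auto simp: J.Mo_laws(1) intro: finite_subset)
qed

lemma extend_hom: "extend \<in> module_hom R I.dsum J.dsum"
proof (rule module_homI)
  fix x assume "x \<in> carrier I.dsum" then show "extend x \<in> carrier J.dsum" by (rule extend_closed)
next
  fix x y assume "x \<in> carrier I.dsum" "y \<in> carrier I.dsum"
  then show "extend (add I.dsum x y) = add J.dsum (extend x) (extend y)"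
    unfolding extend_def I.dsum_add J.dsum_add using IJ by (intro ext) (auto simp: J.Mo_laws(1,5))
next
  fix r x assume "r \<in> carrier R" "x \<in> carrier I.dsum"
  then show "extend (smult I.dsum r x) = smult J.dsum r (extend x)"
    unfolding extend_def I.dsum_smult J.dsum_smult using IJ
      by (intro ext) (auto simp: J.Mo_laws(11))
qed

lemma extend_ins: "i \<in> I \<Longrightarrow> extend (I.ins i a) = J.ins i a"
  unfolding extend_def dsum_ins_def using IJ by (intro ext) auto

lemma extend_Rel: assumes v: "v \<in> I.Rel" shows "extend v \<in> J.Rel"
proof -
  interpret DI: Module.module R I.dsum by (rule I.module_dsum)
  interpret DJ: Module.module R J.dsum by (rule J.module_dsum)
  let ?N = "{v \<in> carrier I.dsum. extend v \<in> J.Rel}"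
  have "submodule ?N R I.dsum"
  proof (rule DI.submoduleI)
    show "?N \<subseteq> carrier I.dsum" by blast
    show "zero I.dsum \<in> ?N" using module_hom_zero[OF extend_hom DI.abelian_group_axioms
      DJ.abelian_group_axioms] submodule_zero[OF J.submodule_Rel] by simp
    show "\<And>a. a \<in> ?N \<Longrightarrow> a_inv I.dsum a \<in> ?N"
      using module_hom_a_inv[OF extend_hom DI.abelian_group_axioms DJ.abelian_group_axioms]
        submodule_a_inv[OF J.submodule_Rel] by simp
    show "\<And>a b. a \<in> ?N \<Longrightarrow> b \<in> ?N \<Longrightarrow> add I.dsum a b \<in> ?N"
      using module_hom_add[OF extend_hom] submodule_add[OF J.submodule_Rel] by simp
    show "\<And>a x. a \<in> carrier R \<Longrightarrow> x \<in> ?N \<Longrightarrow> smult I.dsum a x \<in> ?N"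
      using module_hom_smult[OF extend_hom] submodule_smult[OF J.submodule_Rel] by simp
  qed
  moreover have "colim_gens I rel Mo Ma \<subseteq> ?N"
  proof
    fix x assume "x \<in> colim_gens I rel Mo Ma"
    then obtain i j a where x: "x = a_minus I.dsum (I.ins j (Ma i j a)) (I.ins i a)"
      and ij: "i \<in> I" "j \<in> I" "rel i j" "a \<in> carrier (Mo i)"
      unfolding I.colim_gens_iff by blast
    have ma: "Ma i j a \<in> carrier (Mo j)" using module_hom_closed[OF I.hom_Ma[OF ij(1-3)] ij(4)] .
    have c: "I.ins j (Ma i j a) \<in> carrier I.dsum" "I.ins i a \<in> carrier I.dsum"
      using I.ins_closed ij ma by auto
    have "extend x = a_minus J.dsum (J.ins j (Ma i j a)) (J.ins i a)"
      unfolding x module_hom_a_minus[OF extend_hom DI.abelian_group_axioms DJ.abelian_group_axioms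
        c] using extend_ins ij by simp
    moreover have "a_minus J.dsum (J.ins j (Ma i j a)) (J.ins i a) \<in> J.Rel"
      by (rule subsetD[OF J.colim_gens_subset_Rel]) (unfold J.colim_gens_iff, use ij IJ in blast)
    ultimately show "x \<in> ?N" using x c by simp
  qed
  ultimately have "I.Rel \<subseteq> ?N" by (rule I.Rel_least)
  then show ?thesis using v by blast
qed

abbreviation incl where "incl \<equiv> colim_ext R I J rel Mo Ma"

lemma incl_cl: assumes v: "v \<in> carrier I.dsum" shows "incl (I.cl v) = J.cl (extend v)"
proof -
  interpret DI: Module.module R I.dsum by (rule I.module_dsum)
  interpret DJ: Module.module R J.dsum by (rule J.module_dsum)
  define a where "a = (SOME a. a \<in> I.cl v)"
  have a: "a \<in> carrier I.dsum" "I.cl a = I.cl v" using I.some_in_cl v a_def by auto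
  have "incl (I.cl v) = J.cl (extend a)" unfolding colim_ext_def a_def[symmetric] extend_def Let_def
    by simp
  also have "\<dots> = J.cl (extend v)"
  proof (rule J.cl_eqI)
    show "extend a \<in> carrier J.dsum" "extend v \<in> carrier J.dsum" using extend_closed a v by auto
    have "a_minus I.dsum a v \<in> I.Rel" using I.cl_eq_iff a v by simp
    then have "extend (a_minus I.dsum a v) \<in> J.Rel" by (rule extend_Rel)
    then show "a_minus J.dsum (extend a) (extend v) \<in> J.Rel"
      using module_hom_a_minus[OF extend_hom DI.abelian_group_axioms DJ.abelian_group_axioms a(1) v]
        by simp
  qed
  finally show ?thesis .
qed

lemma incl_hom: "incl \<in> module_hom R I.Colim J.Colim"
proof (rule module_homI)
  fix A assume "A \<in> carrier I.Colim" then obtain v where v: "v \<in> carrier I.dsum" "A = I.cl v"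
    by (rule I.ColimE)
  show "incl A \<in> carrier J.Colim" unfolding v(2) incl_cl[OF v(1)]
    by (rule J.cl_in_Colim[OF extend_closed[OF v(1)]])
next
  fix A B assume A: "A \<in> carrier I.Colim" and B: "B \<in> carrier I.Colim"
  obtain v where v: "v \<in> carrier I.dsum" "A = I.cl v" using A by (rule I.ColimE)
  obtain w where w: "w \<in> carrier I.dsum" "B = I.cl w" using B by (rule I.ColimE)
  have vw: "add I.dsum v w \<in> carrier I.dsum" using I.dsum_add_closed[OF v(1) w(1)] .
  show "incl (add I.Colim A B) = add J.Colim (incl A) (incl B)"
    unfolding v(2) w(2) I.Colim_add[OF v(1) w(1)] incl_cl[OF v(1)] incl_cl[OF w(1)] incl_cl[OF vw]
      J.Colim_add[OF extend_closed[OF v(1)] extend_closed[OF w(1)]] module_hom_add[OF extend_hom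
        v(1) w(1)] ..
next
  fix r A assume r: "r \<in> carrier R" and A: "A \<in> carrier I.Colim"
  obtain v where v: "v \<in> carrier I.dsum" "A = I.cl v" using A by (rule I.ColimE)
  have rv: "smult I.dsum r v \<in> carrier I.dsum" using Module.module.smult_closed[OF I.module_dsum r
    v(1)] .
  show "incl (smult I.Colim r A) = smult J.Colim r (incl A)"
    unfolding v(2) I.Colim_smult[OF r v(1)] incl_cl[OF v(1)] incl_cl[OF rv]
      J.Colim_smult[OF r extend_closed[OF v(1)]] module_hom_smult[OF extend_hom r v(1)] ..
qed

lemma incl_ins: "i \<in> I \<Longrightarrow> a \<in> carrier (Mo i) \<Longrightarrow> incl (I.cl (I.ins i a)) = J.cl (J.ins i a)"
  using incl_cl[OF I.ins_closed] extend_ins by simp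

end

lemma colim_ext_comp:
  assumes IJ: "colim_inclusion R I J Mo rel Ma" and JL: "colim_inclusion R J L Mo rel Ma"
    and IL: "colim_inclusion R I L Mo rel Ma"
    and A: "A \<in> carrier (colim_module R I rel Mo Ma)"
  shows "colim_ext R J L rel Mo Ma (colim_ext R I J rel Mo Ma A) = colim_ext R I L rel Mo Ma A"
proof -
  interpret IJ: colim_inclusion R I J Mo rel Ma by (rule IJ)
  interpret JL: colim_inclusion R J L Mo rel Ma by (rule JL)
  interpret IL: colim_inclusion R I L Mo rel Ma by (rule IL)
  obtain v where v: "v \<in> carrier IJ.I.dsum" "A = IJ.I.cl v" using A by (rule IJ.I.ColimE)
  have "JL.extend (IJ.extend v) = IL.extend v"
    unfolding JL.extend_def IJ.extend_def IL.extend_def using IJ.IJ JL.IJ by (intro ext) auto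
  then show ?thesis unfolding v(2) IJ.incl_cl[OF v(1)] JL.incl_cl[OF IJ.extend_closed[OF v(1)]]
    IL.incl_cl[OF v(1)] by simp
qed

section \<open>Colimits approximating a functor\<close>

locale module_functor =
  fixes R :: "('k,'r) ring_scheme" and Ob :: "'i set" and rel :: "'i \<Rightarrow> 'i \<Rightarrow> bool"
    and Mo :: "'i \<Rightarrow> ('k,'m) module" and Ma :: "'i \<Rightarrow> 'i \<Rightarrow> 'm \<Rightarrow> 'm"
  assumes R_cring: "cring R"
    and module_Mo: "\<And>i. i \<in> Ob \<Longrightarrow> Module.module R (Mo i)"
    and hom_Ma: "\<And>i j. i \<in> Ob \<Longrightarrow> j \<in> Ob \<Longrightarrow> rel i j \<Longrightarrow> Ma i j \<in> module_hom R (Mo i) (Mo j)"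
    and Ma_comp: "\<And>i j k x. i \<in> Ob \<Longrightarrow> j \<in> Ob \<Longrightarrow> k \<in> Ob \<Longrightarrow> rel i j \<Longrightarrow> rel j k \<Longrightarrow>
      x \<in> carrier (Mo i) \<Longrightarrow> Ma j k (Ma i j x) = Ma i k x"

lemma (in module_functor) module_diagram_subset:
  assumes "J \<subseteq> Ob"
  shows "module_diagram R J Mo rel Ma"
proof (intro module_diagram.intro module_family.intro module_diagram_axioms.intro R_cring)
  show "i \<in> J \<Longrightarrow> Module.module R (Mo i)" for i using assms module_Mo by blast
  show "i \<in> J \<Longrightarrow> j \<in> J \<Longrightarrow> rel i j \<Longrightarrow> Ma i j \<in> module_hom R (Mo i) (Mo j)" for i j
    using assms hom_Ma by blast
qed

lemma persistence_module_functor: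
  "persistence_module R M \<Longrightarrow> module_functor R UNIV (\<le>) (fst M) (snd M)"
  by (intro module_functor.intro persistence_module_module[THEN Module.module.axioms(1)])
    (simp_all add: persistence_module_module persistence_module_hom persistence_module_comp)

definition pm_colim :: "('k,'r) ring_scheme \<Rightarrow> ('p::order \<Rightarrow> 'i set) \<Rightarrow> ('i \<Rightarrow> 'i \<Rightarrow> bool)
    \<Rightarrow> ('i \<Rightarrow> ('k,'m) module) \<Rightarrow> ('i \<Rightarrow> 'i \<Rightarrow> 'm \<Rightarrow> 'm) \<Rightarrow> ('p, 'k, ('i \<Rightarrow> 'm) set) pmod" where
  "pm_colim R J rel Mo Ma =
     (\<lambda>p. colim_module R (J p) rel Mo Ma, \<lambda>p q. colim_ext R (J p) (J q) rel Mo Ma)"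

definition pm_reindex :: "('p::order \<Rightarrow> 'i) \<Rightarrow> ('i \<Rightarrow> ('k,'m) module) \<Rightarrow> ('i \<Rightarrow> 'i \<Rightarrow> 'm \<Rightarrow> 'm)
    \<Rightarrow> ('p, 'k, 'm) pmod" where
  "pm_reindex c Mo Ma = (\<lambda>p. Mo (c p), \<lambda>p q. Ma (c p) (c q))"

lemma pm_reindex_id: "pm_reindex (\<lambda>p. p) (fst M) (snd M) = M"
  unfolding pm_reindex_def by simp

lemma pm_over_eq_pm_colim: "pm_over R M = pm_colim R way_downset (\<le>) (fst M) (snd M)"
  unfolding pm_over_def pm_colim_def by simp

lemma j_upper_star_eq_pm_colim: "j_upper_star R F = pm_colim R nbhds (\<lambda>U V. V \<subseteq> U) (fst F) (snd F)"
  unfolding j_upper_star_def stalk_def pm_colim_def by simp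

lemma j_shriek_eq_pm_reindex: "j_shriek F = pm_reindex int_upset (fst F) (snd F)"
  unfolding j_shriek_def pm_reindex_def by simp

lemma (in module_functor) pm_functorial_pm_reindex:
  assumes "\<And>p. c p \<in> Ob" and "\<And>p q. p \<le> q \<Longrightarrow> rel (c p) (c q)"
  shows "pm_functorial R (pm_reindex c Mo Ma)"
  by (rule pm_functorialI) (use assms in \<open>auto simp: pm_reindex_def intro: hom_Ma Ma_comp\<close>)

lemma pm_functorial_pm_colim:
  assumes "\<And>p. module_diagram R (J p) Mo rel Ma" and "\<And>p q. p \<le> q \<Longrightarrow> J p \<subseteq> J q"
  shows "pm_functorial R (pm_colim R J rel Mo Ma)"
proof (rule pm_functorialI)
  have incl: "colim_inclusion R (J p) (J q) Mo rel Ma" if "p \<le> q" for p q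
    using assms that unfolding colim_inclusion_def colim_inclusion_axioms_def by blast
  fix p q r x
  show "p \<le> q \<Longrightarrow> snd (pm_colim R J rel Mo Ma) p q \<in>
      module_hom R (fst (pm_colim R J rel Mo Ma) p) (fst (pm_colim R J rel Mo Ma) q)"
    unfolding pm_colim_def using colim_inclusion.incl_hom[OF incl] by simp
  assume "p \<le> q" "q \<le> r" "x \<in> carrier (fst (pm_colim R J rel Mo Ma) p)"
  then show "snd (pm_colim R J rel Mo Ma) q r (snd (pm_colim R J rel Mo Ma) p q x) =
      snd (pm_colim R J rel Mo Ma) p r x"
    unfolding pm_colim_def using colim_ext_comp[OF incl incl incl] order.trans by simp
qed

text \<open>The colimit over \<open>J p\<close> is \<open>T\<close>-interleaved with the value at \<open>c p\<close> as soon as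
  \<open>c p \<in> J (T p)\<close> and every index in \<open>J p\<close> maps to \<open>c (T p)\<close>: one inserts \<open>M\<^sub>c\<^sub>p\<close> into the
  colimit at \<open>T p\<close>, the other direction is the cocone map to \<open>M\<^sub>c\<^sub>(\<^sub>T\<^sub>p\<^sub>)\<close>.\<close>

locale colim_approximation = module_functor R Ob rel Mo Ma
  for R :: "('k,'r) ring_scheme" and Ob rel and Mo :: "'i \<Rightarrow> ('k,'m) module" and Ma +
  fixes J :: "'p::order \<Rightarrow> 'i set" and c :: "'p \<Rightarrow> 'i" and T :: "'p \<Rightarrow> 'p"
  assumes translation: "translation T"
    and J_subset: "\<And>p. J p \<subseteq> Ob" and J_mono: "\<And>p q. p \<le> q \<Longrightarrow> J p \<subseteq> J q"
    and J_nonempty: "\<And>p. J p \<noteq> {}"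
    and c_in_J: "\<And>p. c p \<in> J (T p)" and rel_c_T: "\<And>p i. i \<in> J p \<Longrightarrow> rel i (c (T p))"
    and rel_c_mono: "\<And>p q. p \<le> q \<Longrightarrow> rel (c p) (c q)"
begin

definition to_colim :: "'p \<Rightarrow> 'm \<Rightarrow> ('i \<Rightarrow> 'm) set" where
  "to_colim p x = qclass (dsum_module (J (T p)) Mo) (colim_rel R (J (T p)) rel Mo Ma)
     (dsum_ins (J (T p)) Mo (c p) x)"

definition from_colim :: "'p \<Rightarrow> ('i \<Rightarrow> 'm) set \<Rightarrow> 'm" where
  "from_colim p = colim_cocone.colim_lift (J p) Mo (Mo (c (T p))) (\<lambda>i. Ma i (c (T p)))"

lemma c_in_Ob: "c p \<in> Ob"
  using c_in_J J_subset by blast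

lemma diagram: "module_diagram R (J p) Mo rel Ma"
  by (rule module_diagram_subset[OF J_subset])

lemma inclusion: "p \<le> q \<Longrightarrow> colim_inclusion R (J p) (J q) Mo rel Ma"
  unfolding colim_inclusion_def colim_inclusion_axioms_def using diagram J_mono by blast

lemma cocone: "colim_cocone R (J p) Mo rel Ma (Mo (c (T p))) (\<lambda>i. Ma i (c (T p)))"
  unfolding colim_cocone_def colim_cocone_axioms_def
  using diagram module_Mo[OF c_in_Ob] hom_Ma[OF _ c_in_Ob] Ma_comp[OF _ _ c_in_Ob] J_subset rel_c_T
  by blast

lemma pm_morph_to_colim:
  "pm_morph R (pm_reindex c Mo Ma) (pm_pull T (pm_colim R J rel Mo Ma)) to_colim"
  unfolding pm_morph_def pm_pull_def pm_reindex_def pm_colim_def fst_conv snd_conv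
proof (intro conjI allI impI ballI)
  fix p
  interpret C: module_diagram R "J (T p)" Mo rel Ma by (rule diagram)
  show "to_colim p \<in> module_hom R (Mo (c p)) C.Colim"
    unfolding to_colim_def by (rule C.cl_ins_hom[OF c_in_J])
next
  fix p q x assume pq: "p \<le> q" and x: "x \<in> carrier (Mo (c p))"
  interpret E: colim_inclusion R "J (T p)" "J (T q)" Mo rel Ma
    by (rule inclusion[OF translation_mono[OF translation pq]])
  have "c p \<in> J (T q)" using J_mono[OF translation_mono[OF translation pq]] c_in_J by blast
  then have "to_colim q (Ma (c p) (c q) x) = E.J.cl (E.J.ins (c p) x)"
    unfolding to_colim_def by (rule E.J.cl_ins_Ma[OF _ c_in_J rel_c_mono[OF pq] x])
  also have "\<dots> = E.incl (to_colim p x)" unfolding to_colim_def using E.incl_ins[OF c_in_J x] by simp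
  finally show "to_colim q (Ma (c p) (c q) x) = E.incl (to_colim p x)" .
qed

lemma pm_morph_from_colim:
  "pm_morph R (pm_colim R J rel Mo Ma) (pm_pull T (pm_reindex c Mo Ma)) from_colim"
  unfolding pm_morph_def pm_pull_def pm_reindex_def pm_colim_def fst_conv snd_conv
proof (intro conjI allI impI ballI)
  fix p
  interpret L: colim_cocone R "J p" Mo rel Ma "Mo (c (T p))" "\<lambda>i. Ma i (c (T p))" by (rule cocone)
  show "from_colim p \<in> module_hom R L.Colim (Mo (c (T p)))"
    unfolding from_colim_def by (rule L.colim_lift_hom)
next
  fix p q A assume pq: "p \<le> q" and A: "A \<in> carrier (colim_module R (J p) rel Mo Ma)"
  interpret E: colim_inclusion R "J p" "J q" Mo rel Ma by (rule inclusion[OF pq])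
  interpret Lp: colim_cocone R "J p" Mo rel Ma "Mo (c (T p))" "\<lambda>i. Ma i (c (T p))" by (rule cocone)
  interpret Lq: colim_cocone R "J q" Mo rel Ma "Mo (c (T q))" "\<lambda>i. Ma i (c (T q))" by (rule cocone)
  have TT: "rel (c (T p)) (c (T q))" using rel_c_mono[OF translation_mono[OF translation pq]] .
  show "from_colim q (E.incl A) = Ma (c (T p)) (c (T q)) (from_colim p A)"
    unfolding from_colim_def
  proof (rule E.I.Colim_hom_eqI[OF _ _ J_nonempty _ A])
    show "(\<lambda>A. Lq.colim_lift (E.incl A)) \<in> module_hom R E.I.Colim (Mo (c (T q)))"
      by (rule module_hom_comp[OF E.incl_hom Lq.colim_lift_hom])
    show "(\<lambda>A. Ma (c (T p)) (c (T q)) (Lp.colim_lift A)) \<in> module_hom R E.I.Colim (Mo (c (T q)))"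
      by (rule module_hom_comp[OF Lp.colim_lift_hom hom_Ma[OF c_in_Ob c_in_Ob TT]])
  next
    fix i a assume i: "i \<in> J p" and a: "a \<in> carrier (Mo i)"
    have "i \<in> J q" "i \<in> Ob" using J_mono[OF pq] J_subset i by blast+
    then show "Lq.colim_lift (E.incl (E.I.cl (E.I.ins i a))) =
        Ma (c (T p)) (c (T q)) (Lp.colim_lift (E.I.cl (E.I.ins i a)))"
      using E.incl_ins[OF i a] Lq.colim_lift_ins[OF _ a] Lp.colim_lift_ins[OF i a]
        Ma_comp[OF _ c_in_Ob c_in_Ob rel_c_T[OF i] TT a] J_subset i by auto
  qed
qed

lemma from_colim_to_colim:
  "x \<in> carrier (Mo (c p)) \<Longrightarrow> from_colim (T p) (to_colim p x) = Ma (c p) (c (T (T p))) x"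
  using colim_cocone.colim_lift_ins[OF cocone c_in_J] unfolding from_colim_def to_colim_def by blast

lemma to_colim_from_colim:
  assumes A: "A \<in> carrier (colim_module R (J p) rel Mo Ma)"
  shows "to_colim (T p) (from_colim p A) = colim_ext R (J p) (J (T (T p))) rel Mo Ma A"
proof -
  have pTT: "p \<le> T (T p)" using translation_increasing2[OF translation] .
  interpret E: colim_inclusion R "J p" "J (T (T p))" Mo rel Ma by (rule inclusion[OF pTT])
  interpret L: colim_cocone R "J p" Mo rel Ma "Mo (c (T p))" "\<lambda>i. Ma i (c (T p))" by (rule cocone)
  show ?thesis unfolding from_colim_def to_colim_def
  proof (rule E.I.Colim_hom_eqI[OF _ E.incl_hom J_nonempty _ A])
    show "(\<lambda>A. E.J.cl (E.J.ins (c (T p)) (L.colim_lift A))) \<in> module_hom R E.I.Colim E.J.Colim"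
      by (rule module_hom_comp[OF L.colim_lift_hom E.J.cl_ins_hom[OF c_in_J]])
  next
    fix i a assume i: "i \<in> J p" and a: "a \<in> carrier (Mo i)"
    have "i \<in> J (T (T p))" using J_mono[OF pTT] i by blast
    then have "E.J.cl (E.J.ins (c (T p)) (Ma i (c (T p)) a)) = E.J.cl (E.J.ins i a)"
      by (rule E.J.cl_ins_Ma[OF _ c_in_J rel_c_T[OF i] a])
    then show "E.J.cl (E.J.ins (c (T p)) (L.colim_lift (E.I.cl (E.I.ins i a)))) =
        E.incl (E.I.cl (E.I.ins i a))"
      using L.colim_lift_ins[OF i a] E.incl_ins[OF i a] by simp
  qed
qed

lemma pm_interleaved_pm_reindex_pm_colim:
  "pm_interleaved R T (pm_reindex c Mo Ma) (pm_colim R J rel Mo Ma)"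
  unfolding pm_interleaved_def
proof (intro exI conjI allI ballI)
  show "pm_morph R (pm_reindex c Mo Ma) (pm_pull T (pm_colim R J rel Mo Ma)) to_colim"
    by (rule pm_morph_to_colim)
  show "pm_morph R (pm_colim R J rel Mo Ma) (pm_pull T (pm_reindex c Mo Ma)) from_colim"
    by (rule pm_morph_from_colim)
qed (simp_all add: pm_reindex_def pm_colim_def from_colim_to_colim to_colim_from_colim)

end

context translation_family
begin

lemma d_a_pm_colim:
  fixes Mo :: "'i \<Rightarrow> ('k,'m) module" and Mo' :: "'i \<Rightarrow> ('k,'n) module"
  assumes F: "module_functor R Ob rel Mo Ma" and F': "module_functor R Ob rel Mo' Ma'"
    and J_subset: "\<And>p. J p \<subseteq> Ob" and J_mono: "\<And>p q. p \<le> q \<Longrightarrow> J p \<subseteq> J q"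
    and J_nonempty: "\<And>p. J p \<noteq> {}"
    and c_in_J: "\<And>\<delta> p. 0 < \<delta> \<Longrightarrow> c p \<in> J (T \<delta> p)"
    and rel_c_T: "\<And>\<delta> p i. 0 < \<delta> \<Longrightarrow> i \<in> J p \<Longrightarrow> rel i (c (T \<delta> p))"
    and rel_c_mono: "\<And>p q. p \<le> q \<Longrightarrow> rel (c p) (c q)"
  shows "d_a R T (pm_reindex c Mo Ma) (pm_reindex c Mo' Ma') =
         d_a R T (pm_colim R J rel Mo Ma) (pm_colim R J rel Mo' Ma')"
proof (rule d_a_eq_if_close)
  have c_in_Ob: "c p \<in> Ob" for p using c_in_J[of 1 p] J_subset by auto
  show "pm_functorial R (pm_reindex c Mo Ma)"
    by (rule module_functor.pm_functorial_pm_reindex[OF F]) (use c_in_Ob rel_c_mono in auto)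
  show "pm_functorial R (pm_reindex c Mo' Ma')"
    by (rule module_functor.pm_functorial_pm_reindex[OF F']) (use c_in_Ob rel_c_mono in auto)
  show "pm_functorial R (pm_colim R J rel Mo Ma)"
    by (rule pm_functorial_pm_colim[OF module_functor.module_diagram_subset[OF F J_subset]] J_mono)+
  show "pm_functorial R (pm_colim R J rel Mo' Ma')"
    by (rule pm_functorial_pm_colim[OF module_functor.module_diagram_subset[OF F' J_subset]]
      J_mono)+
  fix \<delta> :: real assume \<delta>: "0 < \<delta>"
  have approx: "colim_approximation R Ob rel Mo Ma J c (T \<delta>)"
    "colim_approximation R Ob rel Mo' Ma' J c (T \<delta>)"
    by (intro colim_approximation.intro colim_approximation_axioms.intro F F' translation_T
        J_subset J_mono J_nonempty c_in_J[OF \<delta>] rel_c_T[OF \<delta>] rel_c_mono; use \<delta> in simp)+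
  show "pm_interleaved R (T \<delta>) (pm_reindex c Mo Ma) (pm_colim R J rel Mo Ma)"
    by (rule colim_approximation.pm_interleaved_pm_reindex_pm_colim[OF approx(1)])
  show "pm_interleaved R (T \<delta>) (pm_reindex c Mo' Ma') (pm_colim R J rel Mo' Ma')"
    by (rule colim_approximation.pm_interleaved_pm_reindex_pm_colim[OF approx(2)])
qed

lemma d_a_pm_over:
  assumes M: "persistence_module R M" and N: "persistence_module R N"
  shows "d_a R T M N = d_a R T (pm_over R M) (pm_over R N)"
proof -
  have "d_a R T (pm_reindex (\<lambda>p. p) (fst M) (snd M)) (pm_reindex (\<lambda>p. p) (fst N) (snd N)) =
      d_a R T (pm_colim R way_downset (\<le>) (fst M) (snd M)) (pm_colim R way_downset (\<le>) (fst N) (snd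
        N))"
  proof (rule d_a_pm_colim[OF persistence_module_functor[OF M] persistence_module_functor[OF N]])
    show "way_downset p \<noteq> {}" for p :: 'p
      using continuous_posetD[OF poset_continuous] unfolding directed_def by blast
    show "p \<le> q \<Longrightarrow> way_downset p \<subseteq> way_downset q" for p q :: 'p
      using way_below_mono by blast
    show "p \<in> way_downset (T \<delta> p)" if "0 < \<delta>" for \<delta> and p :: 'p
      using way_below_T[OF that] by simp
    show "i \<le> T \<delta> p" if "0 < \<delta>" "i \<in> way_downset p" for \<delta> and p i :: 'p
      using way_below_imp_le[of i p] translation_increasing[OF translation_T, of \<delta> p] that
      by (simp add: order.trans)
  qed simp_all
  then show ?thesis by (simp add: pm_reindex_id pm_over_eq_pm_colim)
qed

end

lemma scott_presheaf_module: "scott_presheaf R F \<Longrightarrow> scott_open U \<Longrightarrow> Module.module R (fst F U)"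
  unfolding scott_presheaf_def by simp

lemma scott_presheaf_hom:
  "scott_presheaf R F \<Longrightarrow> scott_open U \<Longrightarrow> scott_open V \<Longrightarrow> V \<subseteq> U \<Longrightarrow>
   snd F U V \<in> module_hom R (fst F U) (fst F V)"
  unfolding scott_presheaf_def by simp

lemma scott_presheaf_closed:
  "scott_presheaf R F \<Longrightarrow> scott_open U \<Longrightarrow> scott_open V \<Longrightarrow> V \<subseteq> U \<Longrightarrow> x \<in> carrier (fst F U) \<Longrightarrow>
   snd F U V x \<in> carrier (fst F V)"
  by (rule module_hom_closed[OF scott_presheaf_hom])

lemma scott_presheaf_id: "scott_presheaf R F \<Longrightarrow> scott_open U \<Longrightarrow> x \<in> carrier (fst F U) \<Longrightarrow> snd F U U x =
    x"
  unfolding scott_presheaf_def by simp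

lemma scott_presheaf_comp:
  "scott_presheaf R F \<Longrightarrow> scott_open U \<Longrightarrow> scott_open V \<Longrightarrow> scott_open W \<Longrightarrow> W \<subseteq> V \<Longrightarrow> V \<subseteq> U \<Longrightarrow>
   x \<in> carrier (fst F U) \<Longrightarrow> snd F V W (snd F U V x) = snd F U W x"
  unfolding scott_presheaf_def by simp

lemma scott_presheaf_functor:
  assumes F: "scott_presheaf R F"
  shows "module_functor R {U. scott_open U} (\<lambda>U V. V \<subseteq> U) (fst F) (snd F)"
proof (rule module_functor.intro)
  show "cring R" using scott_presheaf_module[OF F scott_open_UNIV] Module.module.axioms(1) by blast
qed (auto intro: scott_presheaf_module[OF F] scott_presheaf_hom[OF F] scott_presheaf_comp[OF F])

lemma nbhds_iff: "U \<in> nbhds p \<longleftrightarrow> scott_open U \<and> p \<in> U"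
  unfolding nbhds_def by simp

lemma nbhds_mono: "p \<le> q \<Longrightarrow> nbhds p \<subseteq> nbhds q"
  unfolding nbhds_def using scott_open_upward by blast

context translation_family
begin

lemma d_a_j_upper_star_j_shriek:
  assumes F: "scott_presheaf R F" and G: "scott_presheaf R G"
  shows "d_a R T (j_upper_star R F) (j_upper_star R G) = d_a R T (j_shriek F) (j_shriek G)"
proof -
  have "d_a R T (pm_reindex int_upset (fst F) (snd F)) (pm_reindex int_upset (fst G) (snd G)) =
      d_a R T (pm_colim R nbhds (\<lambda>U V. V \<subseteq> U) (fst F) (snd F))
        (pm_colim R nbhds (\<lambda>U V. V \<subseteq> U) (fst G) (snd G))"
  proof (rule d_a_pm_colim[OF scott_presheaf_functor[OF F] scott_presheaf_functor[OF G]])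
    show "nbhds p \<noteq> {}" for p :: 'p
      using scott_open_UNIV nbhds_iff by blast
    show "int_upset p \<in> nbhds (T \<delta> p)" if "0 < \<delta>" for \<delta> and p :: 'p
      using T_in_int_upset[OF that] scott_open_int_upset nbhds_iff by blast
    show "int_upset (T \<delta> p) \<subseteq> U" if "0 < \<delta>" "U \<in> nbhds p" for \<delta> and p :: 'p and U
      using int_upset_antimono[OF translation_increasing[OF translation_T]] int_upset_subset_open
        that nbhds_iff by (metis less_eq_real_def order.trans)
  qed (auto simp: nbhds_iff scott_open_int_upset int_upset_antimono nbhds_mono)
  then show ?thesis by (simp add: j_shriek_eq_pm_reindex j_upper_star_eq_pm_colim)
qed

end

section \<open>Sheaves\<close>

lemma sh_morph_hom: "sh_morph R F G f \<Longrightarrow> scott_open U \<Longrightarrow> f U \<in> module_hom R (fst F U) (fst G U)"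
  unfolding sh_morph_def by simp
lemma sh_morph_natural: "sh_morph R F G f \<Longrightarrow> scott_open U \<Longrightarrow> scott_open V \<Longrightarrow> V \<subseteq> U \<Longrightarrow> x \<in> carrier (fst F
    U) \<Longrightarrow>
   f V (snd F U V x) = snd G U V (f U x)"
  unfolding sh_morph_def by simp

lemma scott_sheaf_separation:
  assumes F: "scott_sheaf R F" and U: "\<forall>V\<in>\<U>. scott_open V"
    and s: "s \<in> carrier (fst F (\<Union>\<U>))" and t: "t \<in> carrier (fst F (\<Union>\<U>))"
    and e: "\<And>V. V \<in> \<U> \<Longrightarrow> snd F (\<Union>\<U>) V s = snd F (\<Union>\<U>) V t"
  shows "s = t"
proof -
  have "\<forall>\<U>. (\<forall>V\<in>\<U>. scott_open V) \<longrightarrow>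
        (\<forall>s\<in>carrier (fst F (\<Union>\<U>)). \<forall>t\<in>carrier (fst F (\<Union>\<U>)).
           (\<forall>V\<in>\<U>. snd F (\<Union>\<U>) V s = snd F (\<Union>\<U>) V t) \<longrightarrow> s = t)"
    using F unfolding scott_sheaf_def by simp
  then show ?thesis using U s t e by simp
qed

lemma scott_sheaf_gluing:
  assumes F: "scott_sheaf R F" and U: "\<forall>V\<in>\<U>. scott_open V"
    and s: "\<And>V. V \<in> \<U> \<Longrightarrow> s V \<in> carrier (fst F V)"
    and c: "\<And>V W. V \<in> \<U> \<Longrightarrow> W \<in> \<U> \<Longrightarrow> snd F V (V \<inter> W) (s V) = snd F W (V \<inter> W) (s W)"
  shows "\<exists>t\<in>carrier (fst F (\<Union>\<U>)). \<forall>V\<in>\<U>. snd F (\<Union>\<U>) V t = s V"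
proof -
  have H: "\<forall>s. (\<forall>V\<in>\<U>. s V \<in> carrier (fst F V)) \<and>
             (\<forall>V\<in>\<U>. \<forall>W\<in>\<U>. snd F V (V \<inter> W) (s V) = snd F W (V \<inter> W) (s W)) \<longrightarrow>
           (\<exists>t\<in>carrier (fst F (\<Union>\<U>)). \<forall>V\<in>\<U>. snd F (\<Union>\<U>) V t = s V)"
    using mp[OF spec[OF conjunct2[OF F[unfolded scott_sheaf_def]], of \<U>] U] by (rule conjunct2)
  show ?thesis using mp[OF spec[OF H, of s]] s c by blast
qed

lemma scott_sheaf_presheaf: "scott_sheaf R F \<Longrightarrow> scott_presheaf R F"
  unfolding scott_sheaf_def by simp

lemma scott_sheaf_separation_indexed:
  assumes F: "scott_sheaf R F" and C: "\<And>p. p \<in> P \<Longrightarrow> scott_open (C p)" and W: "W = \<Union>(C ` P)"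
    and s: "s \<in> carrier (fst F W)" and t: "t \<in> carrier (fst F W)"
    and e: "\<And>p. p \<in> P \<Longrightarrow> snd F W (C p) s = snd F W (C p) t"
  shows "s = t"
  using scott_sheaf_separation[OF F, of "C ` P" s t] C s t e W by auto

text \<open>Distinct indices may name the same open set; compatibility makes the sections agree there.\<close>

lemma scott_sheaf_gluing_indexed:
  assumes F: "scott_sheaf R F" and C: "\<And>p. p \<in> P \<Longrightarrow> scott_open (C p)"
    and \<sigma>: "\<And>p. p \<in> P \<Longrightarrow> \<sigma> p \<in> carrier (fst F (C p))"
    and compat: "\<And>p q. p \<in> P \<Longrightarrow> q \<in> P \<Longrightarrow>
      snd F (C p) (C p \<inter> C q) (\<sigma> p) = snd F (C q) (C p \<inter> C q) (\<sigma> q)"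
  shows "\<exists>t\<in>carrier (fst F (\<Union>(C ` P))). \<forall>p\<in>P. snd F (\<Union>(C ` P)) (C p) t = \<sigma> p"
proof -
  have well_defined: "\<sigma> q = \<sigma> p" if "p \<in> P" "q \<in> P" "C p = C q" for p q
    using compat[OF that(1,2)] that(3) scott_presheaf_id[OF scott_sheaf_presheaf[OF F] C \<sigma>, of p]
      scott_presheaf_id[OF scott_sheaf_presheaf[OF F] C \<sigma>, of q] that by simp
  define s where "s X = \<sigma> (SOME p. p \<in> P \<and> X = C p)" for X
  have s: "s (C p) = \<sigma> p" if "p \<in> P" for p
  proof -
    have "(SOME q. q \<in> P \<and> C p = C q) \<in> P \<and> C p = C (SOME q. q \<in> P \<and> C p = C q)"
      by (rule someI[of _ p]) (use that in simp)
    then show ?thesis unfolding s_def using well_defined[OF that] by blast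
  qed
  have "\<exists>t\<in>carrier (fst F (\<Union>(C ` P))). \<forall>X\<in>C ` P. snd F (\<Union>(C ` P)) X t = s X"
    by (rule scott_sheaf_gluing[OF F]) (use C \<sigma> compat s in auto)
  then show ?thesis using s by auto
qed

section \<open>Sheaf interleavings versus interleavings of \<open>j\<^sup>!\<close>\<close>

lemma pm_morph_j_shriek:
  fixes A :: "('p::order, 'k, 'c) psh" and B :: "('p, 'k, 'd) psh"
  assumes T: "order_iso T" and h: "sh_morph R A (sh_pull T B) h"
  shows "pm_morph R (j_shriek A) (pm_pull T (j_shriek B)) (\<lambda>p. h (int_upset p))"
  unfolding pm_morph_def j_shriek_def pm_pull_def fst_conv snd_conv
proof (intro conjI allI impI ballI)
  have TI: "T ` int_upset p = int_upset (T p)" for p using order_iso_image_int_upset[OF T] .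
  fix p show "h (int_upset p) \<in> module_hom R (fst A (int_upset p)) (fst B (int_upset (T p)))"
    using sh_morph_hom[OF h scott_open_int_upset] TI by (simp add: sh_pull_def)
next
  have TI: "T ` int_upset p = int_upset (T p)" for p using order_iso_image_int_upset[OF T] .
  fix p q x assume "p \<le> q" "x \<in> carrier (fst A (int_upset p))"
  then show "h (int_upset q) (snd A (int_upset p) (int_upset q) x) = snd B (int_upset (T p))
      (int_upset (T q)) (h (int_upset p) x)"
    using sh_morph_natural[OF h scott_open_int_upset scott_open_int_upset int_upset_antimono] TI
      by (simp add: sh_pull_def)
qed

lemma pm_interleaved_j_shriek:
  fixes F :: "('p::order, 'k, 'a) psh" and G :: "('p, 'k, 'b) psh"
  assumes T: "order_iso T" and SI: "sh_interleaved R T F G"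
  shows "pm_interleaved R T (j_shriek F) (j_shriek G)"
proof -
  obtain f g where fg: "sh_morph R F (sh_pull T G) f" "sh_morph R G (sh_pull T F) g"
    "\<forall>U. scott_open U \<longrightarrow> (\<forall>x\<in>carrier (fst F U). g (T ` U) (f U x) = snd F U (T ` T ` U) x)"
    "\<forall>U. scott_open U \<longrightarrow> (\<forall>y\<in>carrier (fst G U). f (T ` U) (g U y) = snd G U (T ` T ` U) y)"
    using SI unfolding sh_interleaved_def by blast
  have TI: "T ` int_upset p = int_upset (T p)" for p using order_iso_image_int_upset[OF T] .
  show ?thesis unfolding pm_interleaved_def
  proof (intro exI conjI)
    show "pm_morph R (j_shriek F) (pm_pull T (j_shriek G)) (\<lambda>p. f (int_upset p))"
      by (rule pm_morph_j_shriek[OF T fg(1)])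
    show "pm_morph R (j_shriek G) (pm_pull T (j_shriek F)) (\<lambda>p. g (int_upset p))"
      by (rule pm_morph_j_shriek[OF T fg(2)])
    show "\<forall>p. \<forall>x\<in>carrier (fst (j_shriek F) p). g (int_upset (T p)) (f (int_upset p) x) = snd
        (j_shriek F) p (T (T p)) x"
    proof (intro allI ballI)
      fix p x assume "x \<in> carrier (fst (j_shriek F) p)"
      then show "g (int_upset (T p)) (f (int_upset p) x) = snd (j_shriek F) p (T (T p)) x"
        using fg(3) scott_open_int_upset[of p] TI[of p] TI[of "T p"]
          unfolding j_shriek_def fst_conv snd_conv by metis
    qed
    show "\<forall>p. \<forall>x\<in>carrier (fst (j_shriek G) p). f (int_upset (T p)) (g (int_upset p) x) = snd
        (j_shriek G) p (T (T p)) x"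
    proof (intro allI ballI)
      fix p x assume "x \<in> carrier (fst (j_shriek G) p)"
      then show "f (int_upset (T p)) (g (int_upset p) x) = snd (j_shriek G) p (T (T p)) x"
        using fg(4) scott_open_int_upset[of p] TI[of p] TI[of "T p"]
          unfolding j_shriek_def fst_conv snd_conv by metis
    qed
  qed
qed

text \<open>Pushing a compatible family over \<open>U\<close> along \<open>T\<close> and the components of \<open>h\<close>; this is
  \<open>j\<^sub>*\<close> applied to a morphism \<open>A \<rightarrow> T\<^sup>* B\<close>.\<close>

definition lim_transport :: "('p \<Rightarrow> 'p) \<Rightarrow> ('p \<Rightarrow> 'c \<Rightarrow> 'd) \<Rightarrow> 'p set \<Rightarrow> ('p \<Rightarrow> 'c) \<Rightarrow> 'p \<Rightarrow> 'd" where
  "lim_transport T h U s y =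
     (if y \<in> T ` U then h (inv_into UNIV T y) (s (inv_into UNIV T y)) else undefined)"

lemma lim_transport_image: "order_iso T \<Longrightarrow> u \<in> U \<Longrightarrow> lim_transport T h U s (T u) = h u (s u)"
  unfolding lim_transport_def by (simp add: order_iso_inv_f_f)

lemma lim_transport_closed:
  fixes A :: "('p::order, 'k, 'c) pmod" and B :: "('p, 'k, 'd) pmod"
  assumes T: "order_iso T" and h: "pm_morph R A (pm_pull T B) h"
    and s: "s \<in> carrier (lim_module U (\<le>) (fst A) (snd A))"
  shows "lim_transport T h U s \<in> carrier (lim_module (T ` U) (\<le>) (fst B) (snd B))"
  unfolding lim_module_carrier_iff
proof (intro conjI ballI allI impI)
  fix y assume "y \<in> T ` U"
  then obtain u where u: "u \<in> U" "y = T u" by blast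
  have "s u \<in> carrier (fst A u)" using s u(1) unfolding lim_module_carrier_iff by blast
  then show "lim_transport T h U s y \<in> carrier (fst B y)"
    using module_hom_closed[OF pm_morph_hom[OF h, of u]] u(2)
    by (simp add: pm_pull_def lim_transport_image[OF T u(1)])
next
  fix y y' assume "y \<in> T ` U" "y' \<in> T ` U" and yy': "y \<le> y'"
  then obtain u u' where u: "u \<in> U" "u' \<in> U" "y = T u" "y' = T u'" by blast
  then have uu': "u \<le> u'" using yy' order_iso_le_iff[OF T] by simp
  have su: "s u \<in> carrier (fst A u)" "snd A u u' (s u) = s u'"
    using s u(1,2) uu' unfolding lim_module_carrier_iff by blast+
  have "h u' (s u') = snd B (T u) (T u') (h u (s u))"
    using pm_morph_natural[OF h uu' su(1)] su(2) by (simp add: pm_pull_def)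
  then show "snd B y y' (lim_transport T h U s y) = lim_transport T h U s y'"
    using u by (simp add: lim_transport_image[OF T u(1)] lim_transport_image[OF T u(2)])
qed (simp add: lim_transport_def)

lemma lim_transport_hom:
  fixes A :: "('p::order, 'k, 'c) pmod" and B :: "('p, 'k, 'd) pmod"
  assumes T: "order_iso T" and h: "pm_morph R A (pm_pull T B) h"
  shows "lim_transport T h U \<in>
    module_hom R (lim_module U (\<le>) (fst A) (snd A)) (lim_module (T ` U) (\<le>) (fst B) (snd B))"
proof (rule module_homI)
  have hom: "h u \<in> module_hom R (fst A u) (fst B (T u))" for u
    using pm_morph_hom[OF h] by (simp add: pm_pull_def)
  have inv: "inv_into UNIV T (T u) = u" for u using order_iso_inv_f_f[OF T] .
  fix s t assume s: "s \<in> carrier (lim_module U (\<le>) (fst A) (snd A))"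
    and t: "t \<in> carrier (lim_module U (\<le>) (fst A) (snd A))"
  show "lim_transport T h U (add (lim_module U (\<le>) (fst A) (snd A)) s t) =
      add (lim_module (T ` U) (\<le>) (fst B) (snd B)) (lim_transport T h U s) (lim_transport T h U t)"
    (is "?l = ?r")
  proof (rule ext)
    fix y show "?l y = ?r y"
    proof (cases "y \<in> T ` U")
      case True
      then obtain u where u: "u \<in> U" "y = T u" by blast
      have "s u \<in> carrier (fst A u)" "t u \<in> carrier (fst A u)"
        using s t u unfolding lim_module_carrier_iff by auto
      then show ?thesis using u inv module_hom_add[OF hom]
        by (simp add: lim_transport_def lim_module_add)
    qed (simp add: lim_transport_def lim_module_add)
  qed
next
  have hom: "h u \<in> module_hom R (fst A u) (fst B (T u))" for u
    using pm_morph_hom[OF h] by (simp add: pm_pull_def)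
  have inv: "inv_into UNIV T (T u) = u" for u using order_iso_inv_f_f[OF T] .
  fix r s assume r: "r \<in> carrier R" and s: "s \<in> carrier (lim_module U (\<le>) (fst A) (snd A))"
  show "lim_transport T h U (smult (lim_module U (\<le>) (fst A) (snd A)) r s) =
      smult (lim_module (T ` U) (\<le>) (fst B) (snd B)) r (lim_transport T h U s)"
    (is "?l = ?r")
  proof (rule ext)
    fix y show "?l y = ?r y"
    proof (cases "y \<in> T ` U")
      case True
      then obtain u where u: "u \<in> U" "y = T u" by blast
      have "s u \<in> carrier (fst A u)" using s u unfolding lim_module_carrier_iff by auto
      then show ?thesis using u inv module_hom_smult[OF hom r]
        by (simp add: lim_transport_def lim_module_smult)
    qed (simp add: lim_transport_def lim_module_smult)
  qed
qed (rule lim_transport_closed[OF T h])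

lemma sh_morph_j_lower_star:
  fixes A :: "('p::order, 'k, 'c) pmod" and B :: "('p, 'k, 'd) pmod"
  assumes T: "order_iso T" and h: "pm_morph R A (pm_pull T B) h"
  shows "sh_morph R (j_lower_star A) (sh_pull T (j_lower_star B)) (lim_transport T h)"
  unfolding sh_morph_def j_lower_star_def sh_pull_def fst_conv snd_conv
proof (intro conjI allI impI ballI lim_transport_hom[OF T h])
  fix U V :: "'p set" and s assume "scott_open U \<and> scott_open V \<and> V \<subseteq> U"
  then have VU: "V \<subseteq> U" by blast
  show "lim_transport T h V (lim_restr V s) = lim_restr (T ` V) (lim_transport T h U s)"
    (is "?l = ?r")
  proof (rule ext)
    fix y show "?l y = ?r y"
      using VU order_iso_inv_f_f[OF T] by (auto simp: lim_transport_def lim_restr_def)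
  qed
qed

lemma lim_transport_lim_transport:
  fixes A :: "('p::order, 'k, 'c) pmod" and h :: "'p \<Rightarrow> 'c \<Rightarrow> 'd"
  assumes T: "order_iso T" "translation T"
    and hh: "\<forall>p. \<forall>x\<in>carrier (fst A p). h' (T p) (h p x) = snd A p (T (T p)) x"
    and U: "scott_open U" and s: "s \<in> carrier (lim_module U (\<le>) (fst A) (snd A))"
  shows "lim_transport T h' (T ` U) (lim_transport T h U s) = lim_restr (T ` T ` U) s"
proof (rule ext)
  fix z show "lim_transport T h' (T ` U) (lim_transport T h U s) z = lim_restr (T ` T ` U) s z"
  proof (cases "z \<in> T ` T ` U")
    case True
    then obtain u where u: "u \<in> U" "z = T (T u)" by blast
    have "u \<le> T (T u)" by (rule translation_increasing2[OF T(2)])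
    then have "T (T u) \<in> U" "s u \<in> carrier (fst A u)" "snd A u (T (T u)) (s u) = s (T (T u))"
      using scott_open_upward[OF U u(1)] s u(1) unfolding lim_module_carrier_iff by auto
    moreover have "T u \<in> T ` U" using u(1) by blast
    ultimately show ?thesis
      using u hh by (simp add: lim_restr_def lim_transport_image[OF T(1)])
  qed (simp add: lim_transport_def lim_restr_def)
qed

lemma sh_interleaved_j_lower_star:
  fixes M :: "('p::order, 'k, 'a) pmod" and N :: "('p, 'k, 'b) pmod"
  assumes M: "persistence_module R M" and N: "persistence_module R N"
    and T: "order_iso T" "translation T" and PI: "pm_interleaved R T M N"
  shows "sh_interleaved R T (j_lower_star M) (j_lower_star N)"
proof -
  obtain f g where fg: "pm_morph R M (pm_pull T N) f" "pm_morph R N (pm_pull T M) g"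
    "\<forall>p. \<forall>x\<in>carrier (fst M p). g (T p) (f p x) = snd M p (T (T p)) x"
    "\<forall>p. \<forall>y\<in>carrier (fst N p). f (T p) (g p y) = snd N p (T (T p)) y"
    using PI unfolding pm_interleaved_def by blast
  show ?thesis unfolding sh_interleaved_def
  proof (intro exI conjI)
    show "sh_morph R (j_lower_star M) (sh_pull T (j_lower_star N)) (lim_transport T f)"
      by (rule sh_morph_j_lower_star[OF T(1) fg(1)])
    show "sh_morph R (j_lower_star N) (sh_pull T (j_lower_star M)) (lim_transport T g)"
      by (rule sh_morph_j_lower_star[OF T(1) fg(2)])
    show "\<forall>U. scott_open U \<longrightarrow> (\<forall>x\<in>carrier (fst (j_lower_star M) U). lim_transport T g (T ` U)
        (lim_transport T f U x) = snd (j_lower_star M) U (T ` T ` U) x)"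
      unfolding j_lower_star_def fst_conv snd_conv using lim_transport_lim_transport[where A=M
        and h=f and h'=g, OF T fg(3)] by blast
    show "\<forall>U. scott_open U \<longrightarrow> (\<forall>x\<in>carrier (fst (j_lower_star N) U). lim_transport T f (T ` U)
        (lim_transport T g U x) = snd (j_lower_star N) U (T ` T ` U) x)"
      unfolding j_lower_star_def fst_conv snd_conv using lim_transport_lim_transport[where A=N
        and h=g and h'=f, OF T fg(4)] by blast
  qed
qed

text \<open>From \<open>f : j\<^sup>! F \<rightarrow> T\<^sup>* j\<^sup>! G\<close> and \<open>T u \<ll> S u\<close> we build \<open>F \<rightarrow> S\<^sup>* G\<close>: a section \<open>s\<close> over \<open>U\<close>
  gives for each \<open>p \<in> U\<close> the section \<open>sect U s p\<close> of \<open>G\<close> over the open set \<open>cov p = \<Up>T p\<close>; these are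
  compatible and glue to \<open>glued U s\<close> over \<open>cov_union U \<supseteq> S ` U\<close>.\<close>

locale j_shriek_gluing =
  fixes R :: "('k,'r) ring_scheme" and F :: "('p::order,'k,'a) psh" and G :: "('p,'k,'b) psh"
    and T S :: "'p \<Rightarrow> 'p" and f :: "'p \<Rightarrow> 'a \<Rightarrow> 'b"
  assumes F_sheaf: "scott_sheaf R F" and G_sheaf: "scott_sheaf R G"
    and T: "order_iso T" "translation T" and S: "order_iso S" "translation S"
    and T_way_below_S: "\<And>u. way_below (T u) (S u)"
    and poset_continuous: "continuous_poset TYPE('p)"
    and f_morph: "pm_morph R (j_shriek F) (pm_pull T (j_shriek G)) f"
begin

definition cov where "cov p = way_upset (T p)"
definition sect where "sect U s p = snd G (int_upset (T p)) (cov p) (f p (snd F U (int_upset p) s))"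
definition cov_union where "cov_union U = \<Union>(cov ` U)"
definition glued where "glued U s = (SOME t. t \<in> carrier (fst G (cov_union U)) \<and> (\<forall>p\<in>U. snd G
    (cov_union U) (cov p) t = sect U s p))"
definition glued_morph where "glued_morph U s = snd G (cov_union U) (S ` U) (glued U s)"

lemma F_presheaf: "scott_presheaf R F" using scott_sheaf_presheaf[OF F_sheaf] .
lemma G_presheaf: "scott_presheaf R G" using scott_sheaf_presheaf[OF G_sheaf] .

lemma scott_open_cov: "scott_open (cov p)" unfolding cov_def
  by (rule scott_open_way_upset[OF poset_continuous])
lemma cov_subset_int_upset: "cov p \<subseteq> int_upset (T p)" unfolding cov_def
  by (rule way_upset_subset_int_upset[OF poset_continuous])
lemma scott_open_cov_union: "scott_open (cov_union U)" unfolding cov_union_def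
  by (rule scott_open_Union) (auto simp: scott_open_cov)
lemma cov_subset_cov_union: "p \<in> U \<Longrightarrow> cov p \<subseteq> cov_union U" unfolding cov_union_def by blast
lemma scott_open_S_image: "scott_open U \<Longrightarrow> scott_open (S ` U)"
  by (rule order_iso_image_scott_open[OF S(1)])
lemma S_in_cov: "S u \<in> cov u" unfolding cov_def using T_way_below_S by simp
lemma S_image_subset_cov_union: "S ` U \<subseteq> cov_union U" unfolding cov_union_def using S_in_cov
  by blast
lemma T_le_S: "T u \<le> S u" using way_below_imp_le[OF T_way_below_S] .
lemma cov_antimono: "p \<le> r \<Longrightarrow> cov r \<subseteq> cov p"
  unfolding cov_def using way_below_mono[OF translation_mono[OF T(2)] _ order.refl] by blast
lemma int_upset_S_subset_cov: "q \<in> S ` U \<Longrightarrow> u \<in> U \<Longrightarrow> q = S u \<Longrightarrow> int_upset q \<subseteq> cov u"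
proof
  fix y assume "q = S u" "y \<in> int_upset q"
  then have "S u \<le> y" using int_upset_imp_le by simp
  then have "way_below (T u) y" by (rule way_below_mono[OF order.refl T_way_below_S])
  then show "y \<in> cov u" unfolding cov_def by simp
qed

lemma G_restr_comp: "scott_open A \<Longrightarrow> scott_open B \<Longrightarrow> scott_open C \<Longrightarrow> C \<subseteq> B \<Longrightarrow> B \<subseteq> A \<Longrightarrow> x \<in> carrier (fst G
    A) \<Longrightarrow>
   snd G B C (snd G A B x) = snd G A C x"
  by (rule scott_presheaf_comp[OF G_presheaf])
lemma F_restr_comp: "scott_open A \<Longrightarrow> scott_open B \<Longrightarrow> scott_open C \<Longrightarrow> C \<subseteq> B \<Longrightarrow> B \<subseteq> A \<Longrightarrow> x \<in> carrier (fst F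
    A) \<Longrightarrow>
   snd F B C (snd F A B x) = snd F A C x"
  by (rule scott_presheaf_comp[OF F_presheaf])
lemma G_restr_closed: "scott_open A \<Longrightarrow> scott_open B \<Longrightarrow> B \<subseteq> A \<Longrightarrow> x \<in> carrier (fst G A) \<Longrightarrow> snd G A B x \<in>
    carrier (fst G B)"
  by (rule scott_presheaf_closed[OF G_presheaf])
lemma F_restr_closed: "scott_open A \<Longrightarrow> scott_open B \<Longrightarrow> B \<subseteq> A \<Longrightarrow> x \<in> carrier (fst F A) \<Longrightarrow> snd F A B x \<in>
    carrier (fst F B)"
  by (rule scott_presheaf_closed[OF F_presheaf])

lemma f_hom: "f p \<in> module_hom R (fst F (int_upset p)) (fst G (int_upset (T p)))"
  using pm_morph_hom[OF f_morph, of p] unfolding j_shriek_def pm_pull_def by simp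
lemma f_natural: "p \<le> q \<Longrightarrow> x \<in> carrier (fst F (int_upset p)) \<Longrightarrow> f q (snd F (int_upset p) (int_upset q)
    x) = snd G (int_upset (T p)) (int_upset (T q)) (f p x)"
  using pm_morph_natural[OF f_morph, of p q x] unfolding j_shriek_def pm_pull_def by simp

lemma sect_closed: assumes U: "scott_open U" and p: "p \<in> U" and s: "s \<in> carrier (fst F U)"
  shows "sect U s p \<in> carrier (fst G (cov p))"
  unfolding sect_def
  by (rule G_restr_closed[OF scott_open_int_upset scott_open_cov cov_subset_int_upset
    module_hom_closed[OF f_hom F_restr_closed[OF U scott_open_int_upset int_upset_subset_open[OF U
    p] s]]])

lemma sect_mono: assumes U: "scott_open U" and p: "p \<in> U" and pr: "p \<le> r"
  and s: "s \<in> carrier (fst F U)"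
  shows "snd G (cov p) (cov r) (sect U s p) = sect U s r"
proof -
  define x where "x = snd F U (int_upset p) s"
  have x: "x \<in> carrier (fst F (int_upset p))" unfolding x_def
    by (rule F_restr_closed[OF U scott_open_int_upset int_upset_subset_open[OF U p] s])
  have fx: "f p x \<in> carrier (fst G (int_upset (T p)))" using module_hom_closed[OF f_hom x] .
  have TT: "int_upset (T r) \<subseteq> int_upset (T p)" using int_upset_antimono[OF translation_mono[OF T(2)
    pr]] .
  have r: "r \<in> U" using scott_open_upward[OF U p pr] .
  have "snd G (cov p) (cov r) (sect U s p) = snd G (int_upset (T p)) (cov r) (f p x)"
    unfolding sect_def x_def[symmetric] by (rule G_restr_comp[OF scott_open_int_upset scott_open_cov
      scott_open_cov cov_antimono[OF pr] cov_subset_int_upset fx])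
  also have "\<dots> = snd G (int_upset (T r)) (cov r) (snd G (int_upset (T p)) (int_upset (T r)) (f p
      x))"
    by (rule G_restr_comp[OF scott_open_int_upset scott_open_int_upset scott_open_cov
      cov_subset_int_upset TT fx, symmetric])
  also have "snd G (int_upset (T p)) (int_upset (T r)) (f p x) = f r (snd F (int_upset p) (int_upset
      r) x)"
    using f_natural[OF pr x] by simp
  also have "snd F (int_upset p) (int_upset r) x = snd F U (int_upset r) s"
    unfolding x_def by (rule F_restr_comp[OF U scott_open_int_upset scott_open_int_upset
      int_upset_antimono[OF pr] int_upset_subset_open[OF U p] s])
  finally show ?thesis unfolding sect_def .
qed

lemma cov_Int: "cov p \<inter> cov q = \<Union>(cov ` {r. p \<le> r \<and> q \<le> r})"
proof (intro equalityI subsetI)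
  fix y assume "y \<in> cov p \<inter> cov q"
  then have y: "way_below (T p) y" "way_below (T q) y" unfolding cov_def by auto
  define z where "z = inv_into UNIV T y"
  have yz: "y = T z" unfolding z_def using order_iso_f_inv_f[OF T(1)] by simp
  have "way_below p z" "way_below q z" using y order_iso_way_below_iff[OF T(1)] yz by auto
  moreover have "directed (way_downset z)" using continuous_posetD[OF poset_continuous] by blast
  ultimately obtain r where r: "way_below r z" "p \<le> r" "q \<le> r" unfolding directed_def by blast
  have "way_below (T r) y" using r(1) order_iso_way_below_iff[OF T(1)] yz by auto
  then show "y \<in> \<Union>(cov ` {r. p \<le> r \<and> q \<le> r})" using r unfolding cov_def by blast
next
  fix y assume "y \<in> \<Union>(cov ` {r. p \<le> r \<and> q \<le> r})"
  then obtain r where "p \<le> r" "q \<le> r" "y \<in> cov r" by blast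
  then show "y \<in> cov p \<inter> cov q" using cov_antimono by blast
qed

lemma sect_compatible: assumes U: "scott_open U" and p: "p \<in> U" and q: "q \<in> U"
  and s: "s \<in> carrier (fst F U)"
  shows "snd G (cov p) (cov p \<inter> cov q) (sect U s p) = snd G (cov q) (cov p \<inter> cov q) (sect U s q)"
proof (rule scott_sheaf_separation_indexed[OF G_sheaf _ cov_Int])
  show "\<And>r. r \<in> {r. p \<le> r \<and> q \<le> r} \<Longrightarrow> scott_open (cov r)" by (rule scott_open_cov)
  have io: "scott_open (cov p \<inter> cov q)" using scott_open_Int[OF scott_open_cov scott_open_cov] .
  show "snd G (cov p) (cov p \<inter> cov q) (sect U s p) \<in> carrier (fst G (cov p \<inter> cov q))"
    by (rule G_restr_closed[OF scott_open_cov io _ sect_closed[OF U p s]]) blast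
  show "snd G (cov q) (cov p \<inter> cov q) (sect U s q) \<in> carrier (fst G (cov p \<inter> cov q))"
    by (rule G_restr_closed[OF scott_open_cov io _ sect_closed[OF U q s]]) blast
  fix r assume r: "r \<in> {r. p \<le> r \<and> q \<le> r}"
  have rs: "cov r \<subseteq> cov p \<inter> cov q" using cov_antimono r by blast
  have "snd G (cov p \<inter> cov q) (cov r) (snd G (cov p) (cov p \<inter> cov q) (sect U s p)) = snd G (cov p)
      (cov r) (sect U s p)"
    by (rule G_restr_comp[OF scott_open_cov io scott_open_cov rs _ sect_closed[OF U p s]]) blast
  also have "\<dots> = sect U s r" using sect_mono[OF U p _ s] r by blast
  also have "\<dots> = snd G (cov q) (cov r) (sect U s q)" using sect_mono[OF U q _ s] r by simp
  also have "\<dots> = snd G (cov p \<inter> cov q) (cov r) (snd G (cov q) (cov p \<inter> cov q) (sect U s q))"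
    by (rule G_restr_comp[OF scott_open_cov io scott_open_cov rs _ sect_closed[OF U q s],
      symmetric]) blast
  finally show "snd G (cov p \<inter> cov q) (cov r) (snd G (cov p) (cov p \<inter> cov q) (sect U s p)) =
    snd G (cov p \<inter> cov q) (cov r) (snd G (cov q) (cov p \<inter> cov q) (sect U s q))" .
qed

lemma glued_spec: assumes U: "scott_open U" and s: "s \<in> carrier (fst F U)"
  shows "glued U s \<in> carrier (fst G (cov_union U))" "\<And>p. p \<in> U \<Longrightarrow> snd G (cov_union U) (cov p) (glued
      U s) = sect U s p"
proof -
  have "\<exists>t\<in>carrier (fst G (\<Union>(cov ` U))). \<forall>p\<in>U. snd G (\<Union>(cov ` U)) (cov p) t = sect U s p"
    by (rule scott_sheaf_gluing_indexed[OF G_sheaf scott_open_cov sect_closed[OF U _ s]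
      sect_compatible[OF U _ _ s]])
  then have "\<exists>t. t \<in> carrier (fst G (cov_union U)) \<and> (\<forall>p\<in>U. snd G (cov_union U) (cov p) t = sect U s
      p)"
    unfolding cov_union_def by blast
  then have "glued U s \<in> carrier (fst G (cov_union U)) \<and> (\<forall>p\<in>U. snd G (cov_union U) (cov p) (glued U
      s) = sect U s p)"
    unfolding glued_def by (rule someI_ex)
  then show "glued U s \<in> carrier (fst G (cov_union U))" "\<And>p. p \<in> U \<Longrightarrow> snd G (cov_union U) (cov p)
      (glued U s) = sect U s p" by auto
qed

lemma glued_unique: assumes U: "scott_open U" and s: "s \<in> carrier (fst F U)"
  and t: "t \<in> carrier (fst G (cov_union U))" and e: "\<And>p. p \<in> U \<Longrightarrow> snd G (cov_union U) (cov p) t =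
      sect U s p"
  shows "t = glued U s"
  by (rule scott_sheaf_separation_indexed[OF G_sheaf scott_open_cov cov_union_def t glued_spec(1)[OF
    U s]]) (simp add: e glued_spec(2)[OF U s])

lemma sect_add: assumes U: "scott_open U" and p: "p \<in> U" and s: "s \<in> carrier (fst F U)"
  and s': "s' \<in> carrier (fst F U)"
  shows "sect U (add (fst F U) s s') p = add (fst G (cov p)) (sect U s p) (sect U s' p)"
proof -
  have h1: "snd F U (int_upset p) \<in> module_hom R (fst F U) (fst F (int_upset p))"
    by (rule scott_presheaf_hom[OF F_presheaf U scott_open_int_upset int_upset_subset_open[OF U p]])
  have h2: "snd G (int_upset (T p)) (cov p) \<in> module_hom R (fst G (int_upset (T p))) (fst G (cov
      p))" by (rule scott_presheaf_hom[OF G_presheaf scott_open_int_upset scott_open_cov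
      cov_subset_int_upset])
  have "(\<lambda>s. sect U s p) \<in> module_hom R (fst F U) (fst G (cov p))" unfolding sect_def
    by (rule module_hom_comp[OF module_hom_comp[OF h1 f_hom] h2])
  then show ?thesis using module_hom_add s s' by fastforce
qed

lemma sect_smult: assumes U: "scott_open U" and p: "p \<in> U" and r: "r \<in> carrier R"
  and s: "s \<in> carrier (fst F U)"
  shows "sect U (smult (fst F U) r s) p = smult (fst G (cov p)) r (sect U s p)"
proof -
  have h1: "snd F U (int_upset p) \<in> module_hom R (fst F U) (fst F (int_upset p))"
    by (rule scott_presheaf_hom[OF F_presheaf U scott_open_int_upset int_upset_subset_open[OF U p]])
  have h2: "snd G (int_upset (T p)) (cov p) \<in> module_hom R (fst G (int_upset (T p))) (fst G (cov
      p))" by (rule scott_presheaf_hom[OF G_presheaf scott_open_int_upset scott_open_cov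
      cov_subset_int_upset])
  have "(\<lambda>s. sect U s p) \<in> module_hom R (fst F U) (fst G (cov p))" unfolding sect_def
    by (rule module_hom_comp[OF module_hom_comp[OF h1 f_hom] h2])
  then show ?thesis using module_hom_smult r s by fastforce
qed

lemma glued_add: assumes U: "scott_open U" and s: "s \<in> carrier (fst F U)"
  and s': "s' \<in> carrier (fst F U)"
  shows "glued U (add (fst F U) s s') = add (fst G (cov_union U)) (glued U s) (glued U s')"
proof -
  interpret GW: Module.module R "fst G (cov_union U)" by (rule scott_presheaf_module[OF G_presheaf
    scott_open_cov_union])
  interpret FU: Module.module R "fst F U" by (rule scott_presheaf_module[OF F_presheaf U])
  have gs: "glued U s \<in> carrier (fst G (cov_union U))" "glued U s' \<in> carrier (fst G (cov_union U))"
    using glued_spec(1) U s s' by auto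
  show ?thesis
  proof (rule glued_unique[OF U _ _, symmetric])
    show "add (fst F U) s s' \<in> carrier (fst F U)" using s s' by simp
    show "add (fst G (cov_union U)) (glued U s) (glued U s') \<in> carrier (fst G (cov_union U))"
      using gs by simp
    fix p assume p: "p \<in> U"
    have "snd G (cov_union U) (cov p) (add (fst G (cov_union U)) (glued U s) (glued U s')) =
      add (fst G (cov p)) (snd G (cov_union U) (cov p) (glued U s)) (snd G (cov_union U) (cov p)
        (glued U s'))"
      by (rule module_hom_add[OF scott_presheaf_hom[OF G_presheaf scott_open_cov_union
        scott_open_cov cov_subset_cov_union[OF p]] gs])
    also have "\<dots> = sect U (add (fst F U) s s') p" using glued_spec(2)[OF U s p] glued_spec(2)[OF U
      s' p] sect_add[OF U p s s'] by simp
    finally show "snd G (cov_union U) (cov p) (add (fst G (cov_union U)) (glued U s) (glued U s')) =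
        sect U (add (fst F U) s s') p" .
  qed
qed

lemma glued_smult: assumes U: "scott_open U" and r: "r \<in> carrier R" and s: "s \<in> carrier (fst F U)"
  shows "glued U (smult (fst F U) r s) = smult (fst G (cov_union U)) r (glued U s)"
proof -
  interpret GW: Module.module R "fst G (cov_union U)" by (rule scott_presheaf_module[OF G_presheaf
    scott_open_cov_union])
  interpret FU: Module.module R "fst F U" by (rule scott_presheaf_module[OF F_presheaf U])
  have gs: "glued U s \<in> carrier (fst G (cov_union U))" using glued_spec(1) U s by auto
  show ?thesis
  proof (rule glued_unique[OF U _ _, symmetric])
    show "smult (fst F U) r s \<in> carrier (fst F U)" using s r by simp
    show "smult (fst G (cov_union U)) r (glued U s) \<in> carrier (fst G (cov_union U))" using gs r
      by simp
    fix p assume p: "p \<in> U"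
    have "snd G (cov_union U) (cov p) (smult (fst G (cov_union U)) r (glued U s)) = smult (fst G
        (cov p)) r (snd G (cov_union U) (cov p) (glued U s))"
      by (rule module_hom_smult[OF scott_presheaf_hom[OF G_presheaf scott_open_cov_union
        scott_open_cov cov_subset_cov_union[OF p]] r gs])
    also have "\<dots> = sect U (smult (fst F U) r s) p" using glued_spec(2)[OF U s p] sect_smult[OF U p r
      s] by simp
    finally show "snd G (cov_union U) (cov p) (smult (fst G (cov_union U)) r (glued U s)) = sect U
        (smult (fst F U) r s) p" .
  qed
qed

lemma glued_morph_hom: assumes U: "scott_open U" shows "glued_morph U \<in> module_hom R (fst F U) (fst
    G (S ` U))"
proof -
  have h: "snd G (cov_union U) (S ` U) \<in> module_hom R (fst G (cov_union U)) (fst G (S ` U))"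
    by (rule scott_presheaf_hom[OF G_presheaf scott_open_cov_union scott_open_S_image[OF U]
      S_image_subset_cov_union])
  show ?thesis
  proof (rule module_homI)
    fix s assume "s \<in> carrier (fst F U)" then show "glued_morph U s \<in> carrier (fst G (S ` U))"
      unfolding glued_morph_def using module_hom_closed[OF h glued_spec(1)[OF U]] by blast
  next
    fix s s' assume s: "s \<in> carrier (fst F U)" and s': "s' \<in> carrier (fst F U)"
    show "glued_morph U (add (fst F U) s s') = add (fst G (S ` U)) (glued_morph U s) (glued_morph U
        s')"
      unfolding glued_morph_def glued_add[OF U s s'] by (rule module_hom_add[OF h glued_spec(1)[OF U
        s] glued_spec(1)[OF U s']])
  next
    fix r s assume r: "r \<in> carrier R" and s: "s \<in> carrier (fst F U)"
    show "glued_morph U (smult (fst F U) r s) = smult (fst G (S ` U)) r (glued_morph U s)"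
      unfolding glued_morph_def glued_smult[OF U r s] by (rule module_hom_smult[OF h r
        glued_spec(1)[OF U s]])
  qed
qed

lemma sect_restrict: assumes U: "scott_open U" and V: "scott_open V" and VU: "V \<subseteq> U" and p: "p \<in> V"
  and s: "s \<in> carrier (fst F U)"
  shows "sect V (snd F U V s) p = sect U s p"
  unfolding sect_def using F_restr_comp[OF U V scott_open_int_upset int_upset_subset_open[OF V p] VU
    s] by simp

lemma glued_morph_natural: assumes U: "scott_open U" and V: "scott_open V" and VU: "V \<subseteq> U"
  and s: "s \<in> carrier (fst F U)"
  shows "glued_morph V (snd F U V s) = snd G (S ` U) (S ` V) (glued_morph U s)"
proof -
  define s' where "s' = snd F U V s"
  have s': "s' \<in> carrier (fst F V)" unfolding s'_def by (rule F_restr_closed[OF U V VU s])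
  have SV: "scott_open (S ` V)" "scott_open (S ` U)" using scott_open_S_image U V by auto
  have SVU: "S ` V \<subseteq> S ` U" using VU by blast
  define W where "W = (\<lambda>p. cov p \<inter> S ` V)"
  have W_open: "scott_open (W p)" for p unfolding W_def
    by (rule scott_open_Int[OF scott_open_cov SV(1)])
  have S_V: "S ` V = \<Union>(W ` V)" unfolding W_def using S_in_cov by blast
  have gV: "glued V s' \<in> carrier (fst G (cov_union V))" using glued_spec(1)[OF V s'] .
  have gU: "glued U s \<in> carrier (fst G (cov_union U))" using glued_spec(1)[OF U s] .
  have PV: "glued_morph V s' \<in> carrier (fst G (S ` V))" unfolding glued_morph_def
    by (rule G_restr_closed[OF scott_open_cov_union SV(1) S_image_subset_cov_union gV])
  have PU: "glued_morph U s \<in> carrier (fst G (S ` U))" unfolding glued_morph_def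
    by (rule G_restr_closed[OF scott_open_cov_union SV(2) S_image_subset_cov_union gU])
  show ?thesis unfolding s'_def[symmetric]
  proof (rule scott_sheaf_separation_indexed[OF G_sheaf W_open S_V PV G_restr_closed[OF SV(2) SV(1)
    SVU PU]])
    fix p assume p: "p \<in> V"
    have pU: "p \<in> U" using p VU by blast
    have o1: "W p \<subseteq> S ` V" "W p \<subseteq> cov p" unfolding W_def by auto
    have "snd G (S ` V) (W p) (glued_morph V s') = snd G (cov_union V) (W p) (glued V s')"
      unfolding glued_morph_def by (rule G_restr_comp[OF scott_open_cov_union SV(1) W_open o1(1)
        S_image_subset_cov_union gV])
    also have "\<dots> = snd G (cov p) (W p) (snd G (cov_union V) (cov p) (glued V s'))"
      by (rule G_restr_comp[OF scott_open_cov_union scott_open_cov W_open o1(2)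
        cov_subset_cov_union[OF p] gV, symmetric])
    also have "\<dots> = snd G (cov p) (W p) (sect U s p)"
      using glued_spec(2)[OF V s' p] sect_restrict[OF U V VU p s] s'_def by simp
    finally have L: "snd G (S ` V) (W p) (glued_morph V s') = snd G (cov p) (W p) (sect U s p)"
      .
    have "snd G (S ` V) (W p) (snd G (S ` U) (S ` V) (glued_morph U s)) = snd G (S ` U) (W p)
        (glued_morph U s)"
      by (rule G_restr_comp[OF SV(2) SV(1) W_open o1(1) SVU PU])
    also have "\<dots> = snd G (cov_union U) (W p) (glued U s)"
      unfolding glued_morph_def by (rule G_restr_comp[OF scott_open_cov_union SV(2) W_open _
        S_image_subset_cov_union gU]) (use o1 SVU in blast)
    also have "\<dots> = snd G (cov p) (W p) (snd G (cov_union U) (cov p) (glued U s))"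
      by (rule G_restr_comp[OF scott_open_cov_union scott_open_cov W_open o1(2)
        cov_subset_cov_union[OF pU] gU, symmetric])
    also have "\<dots> = snd G (cov p) (W p) (sect U s p)" using glued_spec(2)[OF U s pU] by simp
    finally show "snd G (S ` V) (W p) (glued_morph V s') = snd G (S ` V) (W p) (snd G (S ` U) (S
        ` V) (glued_morph U s))"
      using L by simp
  qed
qed

lemma sh_morph_glued_morph: "sh_morph R F (sh_pull S G) glued_morph"
  unfolding sh_morph_def sh_pull_def fst_conv snd_conv
  using glued_morph_hom glued_morph_natural by blast

end

locale j_shriek_gluing_pair = A: j_shriek_gluing R F G T S f + B: j_shriek_gluing R G F T S g
  for R :: "('k,'r) ring_scheme" and F :: "('p::order,'k,'a) psh" and G :: "('p,'k,'b) psh"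
    and T S :: "'p \<Rightarrow> 'p" and f :: "'p \<Rightarrow> 'a \<Rightarrow> 'b" and g +
  assumes fg: "\<And>p x. x \<in> carrier (fst F (int_upset p)) \<Longrightarrow> g (T p) (f p x) = snd F (int_upset p)
      (int_upset (T (T p))) x"
begin

lemma S_S_image_subset: assumes U: "scott_open U" shows "S ` S ` U \<subseteq> U"
proof
  fix y assume "y \<in> S ` S ` U" then obtain u where u: "u \<in> U" "y = S (S u)" by blast
  have "u \<le> S (S u)" by (rule translation_increasing2[OF A.S(2)])
  then show "y \<in> U" using scott_open_upward[OF U u(1)] u by blast
qed

lemma restr_glued_morph_int_upset: assumes U: "scott_open U" and s: "s \<in> carrier (fst F U)"
  and u: "u \<in> U"
  shows "snd G (S ` U) (int_upset (S u)) (A.glued_morph U s) = snd G (int_upset (T u)) (int_upset (S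
      u)) (f u (snd F U (int_upset u) s))"
proof -
  define q where "q = S u"
  have q: "q \<in> S ` U" using u q_def by blast
  have SU: "scott_open (S ` U)" using A.scott_open_S_image[OF U] .
  have IqSU: "int_upset q \<subseteq> S ` U" by (rule int_upset_subset_open[OF SU q])
  have IqO: "int_upset q \<subseteq> A.cov u" by (rule A.int_upset_S_subset_cov[OF q u q_def])
  have OcSU: "A.cov u \<subseteq> A.cov_union U" using A.cov_subset_cov_union[OF u] .
  define y where "y = snd F U (int_upset u) s"
  have y: "y \<in> carrier (fst F (int_upset u))" unfolding y_def
    by (rule A.F_restr_closed[OF U scott_open_int_upset int_upset_subset_open[OF U u] s])
  have fy: "f u y \<in> carrier (fst G (int_upset (T u)))" using module_hom_closed[OF A.f_hom y] .
  have gU: "A.glued U s \<in> carrier (fst G (A.cov_union U))" using A.glued_spec(1)[OF U s] .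
  have "snd G (S ` U) (int_upset q) (A.glued_morph U s) = snd G (A.cov_union U) (int_upset q)
      (A.glued U s)"
    unfolding A.glued_morph_def by (rule A.G_restr_comp[OF A.scott_open_cov_union SU
      scott_open_int_upset IqSU A.S_image_subset_cov_union gU])
  also have "\<dots> = snd G (A.cov u) (int_upset q) (snd G (A.cov_union U) (A.cov u) (A.glued U s))"
    by (rule A.G_restr_comp[OF A.scott_open_cov_union A.scott_open_cov scott_open_int_upset IqO OcSU
      gU, symmetric])
  also have "\<dots> = snd G (A.cov u) (int_upset q) (A.sect U s u)" using A.glued_spec(2)[OF U s u]
    by simp
  also have "\<dots> = snd G (int_upset (T u)) (int_upset q) (f u y)"
    unfolding A.sect_def y_def[symmetric] by (rule A.G_restr_comp[OF scott_open_int_upset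
      A.scott_open_cov scott_open_int_upset IqO A.cov_subset_int_upset fy])
  finally show ?thesis unfolding q_def y_def .
qed

lemma g_restr_glued_morph: assumes U: "scott_open U" and s: "s \<in> carrier (fst F U)" and u: "u \<in> U"
  shows "g (S u) (snd G (S ` U) (int_upset (S u)) (A.glued_morph U s)) = snd F U (int_upset (T (S
      u))) s"
proof -
  define q where "q = S u"
  define y where "y = snd F U (int_upset u) s"
  have y: "y \<in> carrier (fst F (int_upset u))" unfolding y_def
    by (rule A.F_restr_closed[OF U scott_open_int_upset int_upset_subset_open[OF U u] s])
  have fy: "f u y \<in> carrier (fst G (int_upset (T u)))" using module_hom_closed[OF A.f_hom y] .
  have uq: "T u \<le> q" using A.T_le_S q_def by simp
  have TTq: "T (T u) \<le> T q" using translation_mono[OF A.T(2) uq] .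
  have uTq: "u \<le> T q" using translation_increasing[OF A.T(2), of u] uq translation_increasing[OF
    A.T(2), of q] by (metis order.trans)
  have uTT: "u \<le> T (T u)" using translation_increasing[OF A.T(2), of u] translation_increasing[OF
    A.T(2), of "T u"] by (metis order.trans)
  have "g q (snd G (S ` U) (int_upset q) (A.glued_morph U s)) = g q (snd G (int_upset (T u))
      (int_upset q) (f u y))"
    using restr_glued_morph_int_upset[OF U s u] q_def y_def by simp
  also have "\<dots> = snd F (int_upset (T (T u))) (int_upset (T q)) (g (T u) (f u y))"
    by (rule B.f_natural[OF uq fy])
  also have "\<dots> = snd F (int_upset (T (T u))) (int_upset (T q)) (snd F (int_upset u) (int_upset (T (T
      u))) y)" using fg[OF y] by simp
  also have "\<dots> = snd F (int_upset u) (int_upset (T q)) y"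
    by (rule A.F_restr_comp[OF scott_open_int_upset scott_open_int_upset scott_open_int_upset
      int_upset_antimono[OF TTq] int_upset_antimono[OF uTT] y])
  also have "\<dots> = snd F U (int_upset (T q)) s"
    unfolding y_def by (rule A.F_restr_comp[OF U scott_open_int_upset scott_open_int_upset
      int_upset_antimono[OF uTq] int_upset_subset_open[OF U u] s])
  finally show ?thesis unfolding q_def .
qed

lemma sect_glued_morph: assumes U: "scott_open U" and s: "s \<in> carrier (fst F U)" and u: "u \<in> U"
  shows "B.sect (S ` U) (A.glued_morph U s) (S u) = snd F U (A.cov (S u)) s"
proof -
  have uq: "T u \<le> S u" using A.T_le_S by simp
  have uTq: "u \<le> T (S u)" using translation_increasing[OF A.T(2), of u] uq translation_increasing[OF
    A.T(2), of "S u"] by (metis order.trans)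
  have ITqU: "int_upset (T (S u)) \<subseteq> U" using int_upset_antimono[OF uTq] int_upset_subset_open[OF U
    u] by blast
  have "B.sect (S ` U) (A.glued_morph U s) (S u) = snd F (int_upset (T (S u))) (B.cov (S u)) (snd F
      U (int_upset (T (S u))) s)"
    unfolding B.sect_def g_restr_glued_morph[OF U s u] ..
  also have "\<dots> = snd F U (B.cov (S u)) s"
    by (rule A.F_restr_comp[OF U scott_open_int_upset B.scott_open_cov B.cov_subset_int_upset ITqU
      s])
  finally show ?thesis unfolding A.cov_def B.cov_def .
qed

lemma S_S_image_eq_Union: "S ` S ` U = (\<Union>q\<in>S ` U. B.cov q \<inter> S ` S ` U)"
  using B.S_in_cov by blast

lemma restr_glued_morph_glued_morph:
  assumes U: "scott_open U" and s: "s \<in> carrier (fst F U)" and u: "u \<in> U"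
  defines "W \<equiv> B.cov (S u) \<inter> S ` S ` U"
  shows "snd F (S ` S ` U) W (B.glued_morph (S ` U) (A.glued_morph U s)) = snd F (S ` S ` U) W (snd
      F U (S ` S ` U) s)"
proof -
  define x where "x = A.glued_morph U s"
  have SU: "scott_open (S ` U)" and SSU: "scott_open (S ` S ` U)"
    using A.scott_open_S_image U by blast+
  have x: "x \<in> carrier (fst G (S ` U))"
    unfolding x_def using module_hom_closed[OF A.glued_morph_hom[OF U] s] .
  have W: "scott_open W" "W \<subseteq> S ` S ` U" "W \<subseteq> B.cov (S u)"
    unfolding W_def using scott_open_Int[OF B.scott_open_cov SSU] by blast+
  have Su: "S u \<in> S ` U" using u by blast
  have "u \<le> T (S u)" using translation_increasing[OF A.T(2)] A.T_le_S order.trans by metis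
  then have cov_U: "B.cov (S u) \<subseteq> U"
    using int_upset_antimono int_upset_subset_open[OF U u] B.cov_subset_int_upset by blast
  have glued: "B.glued (S ` U) x \<in> carrier (fst F (B.cov_union (S ` U)))"
    using B.glued_spec(1)[OF SU x] .
  have "snd F (S ` S ` U) W (B.glued_morph (S ` U) x) = snd F (B.cov_union (S ` U)) W (B.glued (S `
      U) x)"
    unfolding B.glued_morph_def
    by (rule B.G_restr_comp[OF B.scott_open_cov_union SSU W(1,2) B.S_image_subset_cov_union glued])
  also have "\<dots> = snd F (B.cov (S u)) W (snd F (B.cov_union (S ` U)) (B.cov (S u)) (B.glued (S ` U)
      x))"
    by (rule B.G_restr_comp[OF B.scott_open_cov_union B.scott_open_cov W(1,3)
          B.cov_subset_cov_union[OF Su] glued, symmetric])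
  also have "\<dots> = snd F (B.cov (S u)) W (snd F U (B.cov (S u)) s)"
    using B.glued_spec(2)[OF SU x Su] sect_glued_morph[OF U s u] x_def
    unfolding A.cov_def B.cov_def by simp
  also have "\<dots> = snd F U W s"
    by (rule A.F_restr_comp[OF U B.scott_open_cov W(1,3) cov_U s])
  also have "\<dots> = snd F (S ` S ` U) W (snd F U (S ` S ` U) s)"
    by (rule A.F_restr_comp[OF U SSU W(1,2) S_S_image_subset[OF U] s, symmetric])
  finally show ?thesis unfolding x_def .
qed

lemma glued_morph_glued_morph:
  assumes U: "scott_open U" and s: "s \<in> carrier (fst F U)"
  shows "B.glued_morph (S ` U) (A.glued_morph U s) = snd F U (S ` S ` U) s"
proof -
  have SU: "scott_open (S ` U)" and SSU: "scott_open (S ` S ` U)"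
    using A.scott_open_S_image U by blast+
  have x: "A.glued_morph U s \<in> carrier (fst G (S ` U))"
    using module_hom_closed[OF A.glued_morph_hom[OF U] s] .
  show ?thesis
  proof (rule scott_sheaf_separation_indexed[OF A.F_sheaf _ S_S_image_eq_Union])
    show "B.glued_morph (S ` U) (A.glued_morph U s) \<in> carrier (fst F (S ` S ` U))"
      using module_hom_closed[OF B.glued_morph_hom[OF SU] x] .
    show "snd F U (S ` S ` U) s \<in> carrier (fst F (S ` S ` U))"
      by (rule A.F_restr_closed[OF U SSU S_S_image_subset[OF U] s])
  next
    fix q assume "q \<in> S ` U"
    then show "scott_open (B.cov q \<inter> S ` S ` U)"
      using scott_open_Int[OF B.scott_open_cov SSU] by blast
    from \<open>q \<in> S ` U\<close> obtain u where "u \<in> U" "q = S u" by blast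
    then show "snd F (S ` S ` U) (B.cov q \<inter> S ` S ` U) (B.glued_morph (S ` U) (A.glued_morph U s)) =
        snd F (S ` S ` U) (B.cov q \<inter> S ` S ` U) (snd F U (S ` S ` U) s)"
      using restr_glued_morph_glued_morph[OF U s] by blast
  qed
qed

end

lemma sh_interleaved_of_j_shriek:
  fixes F :: "('p::order,'k,'a) psh" and G :: "('p,'k,'b) psh"
  assumes F_sheaf: "scott_sheaf R F" and G_sheaf: "scott_sheaf R G"
    and T: "order_iso T" "translation T" and S: "order_iso S" "translation S"
    and T_way_below_S: "\<And>u. way_below (T u) (S u)"
    and poset_continuous: "continuous_poset TYPE('p)"
    and PI: "pm_interleaved R T (j_shriek F) (j_shriek G)"
  shows "sh_interleaved R S F G"
proof -
  obtain f g where fg: "pm_morph R (j_shriek F) (pm_pull T (j_shriek G)) f" "pm_morph R (j_shriek G)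
      (pm_pull T (j_shriek F)) g"
    "\<forall>p. \<forall>x\<in>carrier (fst (j_shriek F) p). g (T p) (f p x) = snd (j_shriek F) p (T (T p)) x"
    "\<forall>p. \<forall>y\<in>carrier (fst (j_shriek G) p). f (T p) (g p y) = snd (j_shriek G) p (T (T p)) y"
    using PI unfolding pm_interleaved_def by blast
  interpret P1: j_shriek_gluing_pair R F G T S f g
    unfolding j_shriek_gluing_pair_def j_shriek_gluing_pair_axioms_def j_shriek_gluing_def
    using F_sheaf G_sheaf T S T_way_below_S poset_continuous fg(1,2) fg(3)[unfolded j_shriek_def]
      by simp
  interpret P2: j_shriek_gluing_pair R G F T S g f
    unfolding j_shriek_gluing_pair_def j_shriek_gluing_pair_axioms_def j_shriek_gluing_def
    using F_sheaf G_sheaf T S T_way_below_S poset_continuous fg(1,2) fg(4)[unfolded j_shriek_def]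
      by simp
  show ?thesis unfolding sh_interleaved_def
    using P1.A.sh_morph_glued_morph P1.B.sh_morph_glued_morph P1.glued_morph_glued_morph
      P2.glued_morph_glued_morph by blast
qed

context translation_family begin

lemma d_sigma_eq_d_a_j_shriek:
  fixes F :: "('p, 'k, 'a) psh" and G :: "('p, 'k, 'b) psh"
  assumes F_sheaf: "scott_sheaf R F" and G_sheaf: "scott_sheaf R G"
  shows "d_sigma R T F G = d_a R T (j_shriek F) (j_shriek G)"
proof (rule order_antisym)
  show "d_sigma R T F G \<le> d_a R T (j_shriek F) (j_shriek G)"
    unfolding d_sigma_def d_a_def
  proof (rule Inf_ereal_nonneg_mono_eps)
    fix e d :: real assume e: "0 \<le> e" and PI: "pm_interleaved R (T e) (j_shriek F) (j_shriek G)"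
      and d: "0 < d"
    show "sh_interleaved R (T (e + d)) F G"
      using e d by (intro sh_interleaved_of_j_shriek[OF F_sheaf G_sheaf order_iso_T[OF e]
          translation_T[OF e] order_iso_T translation_T _ poset_continuous PI] way_below_T_add) auto
  qed
  show "d_a R T (j_shriek F) (j_shriek G) \<le> d_sigma R T F G"
    unfolding d_sigma_def d_a_def
    by (rule Inf_ereal_nonneg_mono) (rule pm_interleaved_j_shriek[OF order_iso_T])
qed

lemma d_a_eq_d_sigma_j_lower_star:
  assumes M: "persistence_module R M" and N: "persistence_module R N"
  shows "d_a R T M N = d_sigma R T (j_lower_star M) (j_lower_star N)"
proof (rule order_antisym)
  have "d_a R T M N = d_a R T (j_shriek (j_lower_star M)) (j_shriek (j_lower_star N))"
    by (rule d_a_j_shriek_j_lower_star[OF M N])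
  also have "\<dots> \<le> d_sigma R T (j_lower_star M) (j_lower_star N)"
    unfolding d_sigma_def d_a_def by (rule Inf_ereal_nonneg_mono) (rule pm_interleaved_j_shriek[OF
      order_iso_T])
  finally show "d_a R T M N \<le> d_sigma R T (j_lower_star M) (j_lower_star N)" .
  show "d_sigma R T (j_lower_star M) (j_lower_star N) \<le> d_a R T M N"
    unfolding d_sigma_def d_a_def by (rule Inf_ereal_nonneg_mono) (rule
      sh_interleaved_j_lower_star[OF M N order_iso_T translation_T])
qed

end

theorem mainTheorem19:
  fixes R :: "('k, 'r) ring_scheme"
    and T :: "real \<Rightarrow> 'p::order \<Rightarrow> 'p"
    and F :: "('p, 'k, 'a) psh" and G :: "('p, 'k, 'b) psh"
    and M :: "('p, 'k, 'c) pmod" and N :: "('p, 'k, 'd) pmod"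
  assumes "cring R"
    and "continuous_poset TYPE('p)"
    and "\<forall>\<epsilon>\<ge>0. translation (T \<epsilon>) \<and> scott_continuous (T \<epsilon>)"
    and "superlinear T" and "TR1 T" and "TR2 T"
    and "scott_sheaf R F" and "scott_sheaf R G"
    and "persistence_module R M" and "persistence_module R N"
  shows "d_sigma R T F G = d_a R T (j_upper_star R F) (j_upper_star R G)
       \<and> d_a R T (j_upper_star R F) (j_upper_star R G) = d_a R T (j_shriek F) (j_shriek G)
       \<and> d_a R T M N = d_a R T (pm_under M) (pm_under N)
       \<and> d_a R T M N = d_a R T (pm_over R M) (pm_over R N)
       \<and> d_a R T M N = d_sigma R T (j_lower_star M) (j_lower_star N)"
proof -
  interpret translation_family T
    using assms(2-6) by (rule translation_family.intro)
  have sheaf: "d_sigma R T F G = d_a R T (j_shriek F) (j_shriek G)"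
    by (rule d_sigma_eq_d_a_j_shriek[OF assms(7,8)])
  have stalks: "d_a R T (j_upper_star R F) (j_upper_star R G) = d_a R T (j_shriek F) (j_shriek G)"
    by (rule d_a_j_upper_star_j_shriek[OF assms(7,8)[THEN scott_sheaf_presheaf]])
  show ?thesis
  proof (intro conjI)
    show "d_sigma R T F G = d_a R T (j_upper_star R F) (j_upper_star R G)"
      using sheaf stalks by simp
  qed (fact stalks d_a_pm_under[OF assms(9,10)] d_a_pm_over[OF assms(9,10)]
      d_a_eq_d_sigma_j_lower_star[OF assms(9,10)])+
qed

end
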